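(* Consider the following setting. Let $(\Omega,\mathcal{F},(\mathcal{F}_s)_{s\ge0},\mathbb{P})$ carry a standard Brownian motion $W$; let $T>0$, $\mu,r\in\mathbb{R}$, $\sigma>0$, $\gamma>0$, $\rho_m>0$, $N>0$, $K\in\mathbb{R}$. Let $(V_s)_s$ be deterministic, nonnegative and bounded (with the convention $V_sL(v_s/V_s)=0$ when $V_s=0$). Let $L:\mathbb{R}\to\mathbb{R}_+$ be continuous, even, strictly convex, increasing on $\mathbb{R}_+$, with $L(0)=0$ and $L(\rho)/\rho\to+\infty$ as $\rho\to+\infty$. Let $\ell:\mathbb{R}\to\mathbb{R}_+$ be convex, even, and increasing on $\mathbb{R}_+$, and let $\Pi$ be either $$\Pi(q,S)=N(S-K)_++\mathbf{1}_{S\ge K}\,\ell(|N-q|)+\mathbf{1}_{S<K}\,\ell(|q|)\quad\text{or}\quad\Pi(q,S)=N(S-K)_++\ell(|q|).$$ For $t\in[0,T]$ let $\mathcal{A}_t$ be the set of real progressively measurable processes $v$ on $[t,T]$ with $|v_s|\le\rho_mV_s$ a.e. in $(t,T)\times\Omega$. For $v\in\mathcal{A}_t$, $q,S\in\mathbb{R}$ put $q_s=q+\int_t^sv_u\,du$, $S_s=S+\mu(s-t)+\sigma(W_s-W_t)$, and $$J_t(q,S,v)=\mathbb{E}\left[\exp\left(-\gamma\left(e^{r(T-t)}\Big(\int_t^Te^{-r(s-t)}q_s(\mu-rS_s)ds+\int_t^Te^{-r(s-t)}q_s\sigma dW_s-\int_t^Te^{-r(s-t)}V_sL\big(\tfrac{v_s}{V_s}\big)ds\Big)-\Pi(q_T,S_T)\right)\right)\right],$$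 $$\theta(t,q,S)=\inf_{v\in\mathcal{A}_t}\frac{e^{-r(T-t)}}{\gamma}\log J_t(q,S,v).$$ Then for every $(t,S)\in[0,T]\times\mathbb{R}$, the map $q\in\mathbb{R}\mapsto\theta(t,q,S)$ is convex.
   Context: $\theta$ is the indifference price of a short call option (nominal $N$, strike $K$, maturity $T$) hedged with execution costs, as a function of time, current number of shares held $q$ and stock price $S$. *)

theory Defs
  imports "HOL-Probability.Probability"
begin

definition strictly_convex_on :: "real set \<Rightarrow> (real \<Rightarrow> real) \<Rightarrow> bool" where
  "strictly_convex_on A f \<longleftrightarrow>
     (\<forall>x\<in>A. \<forall>y\<in>A. \<forall>u. x \<noteq> y \<and> 0 < u \<and> u < 1 \<longrightarrow>
        f (u * x + (1 - u) * y) < u * f x + (1 - u) * f y)"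

text \<open>Standard Brownian motion W on the probability space M w.r.t. the filtration F
  (time index real, only s >= 0 relevant).\<close>
definition brownian_motion ::
  "'a measure \<Rightarrow> (real \<Rightarrow> 'a measure) \<Rightarrow> (real \<Rightarrow> 'a \<Rightarrow> real) \<Rightarrow> bool" where
  "brownian_motion M F W \<longleftrightarrow>
     prob_space M \<and>
     (\<forall>s. space (F s) = space M \<and> sets (F s) \<subseteq> sets M) \<and>
     (\<forall>s u. s \<le> u \<longrightarrow> sets (F s) \<subseteq> sets (F u)) \<and>
     (\<forall>\<omega>\<in>space M. W 0 \<omega> = 0 \<and> continuous_on {0..} (\<lambda>s. W s \<omega>)) \<and>
     (\<forall>s\<ge>0. W s \<in> borel_measurable (F s)) \<and>
     (\<forall>s u. 0 \<le> s \<and> s < u \<longrightarrow>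
        distributed M lborel (\<lambda>\<omega>. W u \<omega> - W s \<omega>)
          (\<lambda>x. ennreal (normal_density 0 (sqrt (u - s)) x)) \<and>
        (\<forall>A\<in>sets (F s). \<forall>B\<in>sets borel.
           measure M (A \<inter> {\<omega>\<in>space M. W u \<omega> - W s \<omega> \<in> B}) =
           measure M A * measure M {\<omega>\<in>space M. W u \<omega> - W s \<omega> \<in> B}))"

definition progressive ::
  "(real \<Rightarrow> 'a measure) \<Rightarrow> real \<Rightarrow> real \<Rightarrow> (real \<Rightarrow> 'a \<Rightarrow> real) \<Rightarrow> bool" where
  "progressive F t T v \<longleftrightarrow>
     (\<forall>u\<in>{t..T}. (\<lambda>z. v (fst z) (snd z))
        \<in> borel_measurable (restrict_space borel {t..u} \<Otimes>\<^sub>M F u))"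

definition riemann_sum ::
  "(real \<Rightarrow> 'a \<Rightarrow> real) \<Rightarrow> (real \<Rightarrow> 'a \<Rightarrow> real) \<Rightarrow> real \<Rightarrow> real \<Rightarrow> nat \<Rightarrow> 'a \<Rightarrow> real" where
  "riemann_sum W h t T n \<omega> =
     (\<Sum>k<n. h (t + real k * (T - t) / real n) \<omega> *
        (W (t + real (Suc k) * (T - t) / real n) \<omega> - W (t + real k * (T - t) / real n) \<omega>))"

text \<open>Ito integral of a (pathwise continuous, adapted) integrand h over [t,T]:
  the limit in probability of the left-point Riemann sums.\<close>
definition stoch_int ::
  "'a measure \<Rightarrow> (real \<Rightarrow> 'a \<Rightarrow> real) \<Rightarrow> (real \<Rightarrow> 'a \<Rightarrow> real) \<Rightarrow> real \<Rightarrow> real \<Rightarrow> 'a \<Rightarrow> real" where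
  "stoch_int M W h t T =
     (SOME I. I \<in> borel_measurable M \<and>
        (\<forall>\<epsilon>>0. (\<lambda>n. measure M {\<omega>\<in>space M. \<bar>riemann_sum W h t T n \<omega> - I \<omega>\<bar> > \<epsilon>})
                  \<longlonglongrightarrow> 0))"

definition exec_cost :: "(real \<Rightarrow> real) \<Rightarrow> real \<Rightarrow> real \<Rightarrow> real" where
  "exec_cost L Vs x = (if Vs = 0 then 0 else Vs * L (x / Vs))"

definition admissible ::
  "'a measure \<Rightarrow> (real \<Rightarrow> 'a measure) \<Rightarrow> real \<Rightarrow> (real \<Rightarrow> real) \<Rightarrow> real \<Rightarrow> real
   \<Rightarrow> (real \<Rightarrow> 'a \<Rightarrow> real) set" where
  "admissible M F T V \<rho>m t =
     {v. progressive F t T v \<and>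
         (AE z in (restrict_space lborel {t<..<T} \<Otimes>\<^sub>M M).
            \<bar>v (fst z) (snd z)\<bar> \<le> \<rho>m * V (fst z))}"

definition q_proc :: "real \<Rightarrow> real \<Rightarrow> (real \<Rightarrow> 'a \<Rightarrow> real) \<Rightarrow> real \<Rightarrow> 'a \<Rightarrow> real" where
  "q_proc t q v s \<omega> = q + (\<integral>u\<in>{t..s}. v u \<omega> \<partial>lborel)"

definition S_proc :: "(real \<Rightarrow> 'a \<Rightarrow> real) \<Rightarrow> real \<Rightarrow> real \<Rightarrow> real \<Rightarrow> real \<Rightarrow> real \<Rightarrow> 'a \<Rightarrow> real" where
  "S_proc W \<mu> \<sigma> t S s \<omega> = S + \<mu> * (s - t) + \<sigma> * (W s \<omega> - W t \<omega>)"

definition J_fun ::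
  "'a measure \<Rightarrow> (real \<Rightarrow> 'a \<Rightarrow> real) \<Rightarrow> real \<Rightarrow> real \<Rightarrow> real \<Rightarrow> real \<Rightarrow> real
   \<Rightarrow> (real \<Rightarrow> real) \<Rightarrow> (real \<Rightarrow> real) \<Rightarrow> (real \<Rightarrow> real \<Rightarrow> real)
   \<Rightarrow> real \<Rightarrow> real \<Rightarrow> real \<Rightarrow> (real \<Rightarrow> 'a \<Rightarrow> real) \<Rightarrow> real" where
  "J_fun M W T \<mu> r \<sigma> \<gamma> V L Pay t q S v =
     (\<integral>\<omega>. exp (- \<gamma> *
        (exp (r * (T - t)) *
           ((\<integral>s\<in>{t..T}. exp (- r * (s - t)) * q_proc t q v s \<omega>
                           * (\<mu> - r * S_proc W \<mu> \<sigma> t S s \<omega>) \<partial>lborel)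
            + stoch_int M W (\<lambda>s \<omega>'. exp (- r * (s - t)) * q_proc t q v s \<omega>' * \<sigma>) t T \<omega>
            - (\<integral>s\<in>{t..T}. exp (- r * (s - t)) * exec_cost L (V s) (v s \<omega>) \<partial>lborel))
         - Pay (q_proc t q v T \<omega>) (S_proc W \<mu> \<sigma> t S T \<omega>))) \<partial>M)"

definition theta ::
  "'a measure \<Rightarrow> (real \<Rightarrow> 'a measure) \<Rightarrow> (real \<Rightarrow> 'a \<Rightarrow> real) \<Rightarrow> real \<Rightarrow> real \<Rightarrow> real
   \<Rightarrow> real \<Rightarrow> real \<Rightarrow> real \<Rightarrow> (real \<Rightarrow> real) \<Rightarrow> (real \<Rightarrow> real) \<Rightarrow> (real \<Rightarrow> real \<Rightarrow> real)
   \<Rightarrow> real \<Rightarrow> real \<Rightarrow> real \<Rightarrow> real" where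
  "theta M F W T \<mu> r \<sigma> \<gamma> \<rho>m V L Pay t q S =
     Inf ((\<lambda>v. exp (- r * (T - t)) / \<gamma> * ln (J_fun M W T \<mu> r \<sigma> \<gamma> V L Pay t q S v))
          ` admissible M F T V \<rho>m t)"

end

theory Submission
  imports Defs
begin

text \<open>
  The value theta(t, q, S) is the infimum over admissible controls v of
  exp (-r (T - t)) / gamma * log E[exp X(q, v)], with exponent
  X = -gamma (exp (r (T - t)) (D + I - C) - Pi).  The drift integral D and the Ito integral I
  are linear in the inventory q + int v, hence jointly linear in (q, v), while the execution
  cost C and the penalty Pi are convex.  So X is almost surely jointly convex in (q, v),
  Hoelder's inequality makes log E[exp X] jointly convex, and since convex combinations of
  admissible controls are admissible, the infimum over v is convex in q.

  The Ito integral is defined by choice as a limit in probability of Riemann sums, so most of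
  the work is analytic: for the Lipschitz integrands at hand the dyadic Riemann sums converge
  almost surely (Gaussian tail bounds and Borel--Cantelli), the limit is linear, and Gaussian
  exponential moments make exp X integrable with E[exp X] > 0, so all logarithms are finite.
\<close>

section \<open>Convexity and elementary inequalities\<close>

lemma strictly_convex_on_imp_convex_on:
  assumes "strictly_convex_on A f" and "convex A"
  shows "convex_on A f"
proof (rule convex_onI)
  fix u x y :: real assume u: "0 < u" "u < 1" and xy: "x \<in> A" "y \<in> A"
  show "f ((1 - u) *\<^sub>R x + u *\<^sub>R y) \<le> (1 - u) * f x + u * f y"
  proof (cases "x = y")
    case False
    have "\<forall>w. x \<noteq> y \<and> 0 < w \<and> w < 1 \<longrightarrow> f (w * x + (1 - w) * y) < w * f x + (1 - w) * f y"
      using assms(1) xy unfolding strictly_convex_on_def by blast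
    from spec[OF this, of "1 - u"] have "f ((1 - u) * x + u * y) < (1 - u) * f x + u * f y"
      using False u by simp
    then show ?thesis by simp
  qed (simp add: algebra_simps)
qed (rule assms(2))

lemma le_mult_Inf_add:
  fixes g :: "'c \<Rightarrow> real"
  assumes "A \<noteq> {}" and "0 < a" and "\<And>v. v \<in> A \<Longrightarrow> c \<le> a * g v + b"
  shows "c \<le> a * Inf (g ` A) + b"
proof -
  have "(c - b) / a \<le> g v" if "v \<in> A" for v
    using assms(3)[OF that] assms(2) by (simp add: pos_divide_le_eq mult.commute)
  then have "(c - b) / a \<le> Inf (g ` A)" using assms(1) by (intro cInf_greatest) auto
  then show ?thesis using assms(2) by (simp add: pos_divide_le_eq mult.commute)
qed

lemma convex_on_Inf_image:
  fixes f :: "real \<Rightarrow> 'c \<Rightarrow> real"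
  assumes ne: "A \<noteq> {}" and bdd: "\<And>x. bdd_below (f x ` A)"
    and mix: "\<And>a x y v w. 0 < a \<Longrightarrow> a < 1 \<Longrightarrow> v \<in> A \<Longrightarrow> w \<in> A \<Longrightarrow>
                \<exists>u\<in>A. f (a * x + (1 - a) * y) u \<le> a * f x v + (1 - a) * f y w"
  shows "convex_on UNIV (\<lambda>x. Inf (f x ` A))"
proof (rule convex_onI)
  fix u x y :: real assume u: "0 < u" "u < 1"
  define a where "a = 1 - u"
  have a: "0 < a" "0 < 1 - a" "a < 1" using u by (auto simp: a_def)
  let ?m = "a * x + (1 - a) * y"
  have "Inf (f ?m ` A) \<le> a * f x v + (1 - a) * f y w" if vw: "v \<in> A" "w \<in> A" for v w
  proof -
    obtain z where "z \<in> A" "f ?m z \<le> a * f x v + (1 - a) * f y w" using mix[OF a(1,3) vw] by blast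
    then show ?thesis using bdd by (meson cInf_lower image_eqI order_trans)
  qed
  then have "Inf (f ?m ` A) \<le> a * Inf (f x ` A) + (1 - a) * f y w" if "w \<in> A" for w
    using that ne a by (intro le_mult_Inf_add) auto
  then have "Inf (f ?m ` A) \<le> (1 - a) * Inf (f y ` A) + a * Inf (f x ` A)"
    using ne a by (intro le_mult_Inf_add) (simp_all add: add.commute)
  moreover have "(1 - u) *\<^sub>R x + u *\<^sub>R y = ?m" by (simp add: a_def)
  ultimately show "Inf (f ((1 - u) *\<^sub>R x + u *\<^sub>R y) ` A) \<le> (1 - u) * Inf (f x ` A) + u * Inf (f y ` A)"
    by (simp add: a_def)
qed simp

lemma abs_convex_comb_gt:
  fixes x y a \<epsilon> :: real
  assumes "0 \<le> a" "a \<le> 1" "\<epsilon> < \<bar>a * x + (1 - a) * y\<bar>"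
  shows "\<epsilon> < \<bar>x\<bar> \<or> \<epsilon> < \<bar>y\<bar>"
proof (rule ccontr)
  assume "\<not> (\<epsilon> < \<bar>x\<bar> \<or> \<epsilon> < \<bar>y\<bar>)"
  then have "\<bar>x\<bar> \<le> \<epsilon>" "\<bar>y\<bar> \<le> \<epsilon>" by auto
  then have "\<bar>a * x + (1 - a) * y\<bar> \<le> a * \<epsilon> + (1 - a) * \<epsilon>"
    using assms by (intro order_trans[OF abs_triangle_ineq] add_mono) (auto simp: abs_mult intro: mult_left_mono)
  then show False using assms by (simp add: algebra_simps)
qed

lemma abs_exp_diff_le:
  fixes a b m :: real assumes "a \<le> m" "b \<le> m"
  shows "\<bar>exp a - exp b\<bar> \<le> exp m * \<bar>a - b\<bar>"
proof -
  have key: "exp x - exp y \<le> exp m * (x - y)" if "y \<le> x" "x \<le> m" for x y :: real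
  proof -
    have "1 + (y - x) \<le> exp (y - x)" by (rule exp_ge_add_one_self)
    then have "exp x * (1 + (y - x)) \<le> exp x * exp (y - x)" by (intro mult_left_mono) auto
    then have "exp x - exp y \<le> exp x * (x - y)" by (simp add: exp_diff algebra_simps)
    also have "\<dots> \<le> exp m * (x - y)" using that by (intro mult_right_mono) auto
    finally show ?thesis .
  qed
  show ?thesis
  proof (cases "b \<le> a")
    case True
    then show ?thesis using key[of b a] assms by auto
  next
    case False
    then show ?thesis using key[of a b] assms by auto
  qed
qed

lemma abs_mult_diff_le:
  fixes a a' b b' d \<alpha> \<beta> \<gamma> E0 :: real
  assumes "\<bar>a - a'\<bar> \<le> \<alpha> * \<bar>d\<bar>" "\<bar>b\<bar> \<le> \<beta>" "\<bar>b - b'\<bar> \<le> \<gamma> * \<bar>d\<bar>" "\<bar>a'\<bar> \<le> E0" "0 \<le> \<alpha>" "0 \<le> \<gamma>"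
  shows "\<bar>a * b - a' * b'\<bar> \<le> (\<alpha> * \<beta> + E0 * \<gamma>) * \<bar>d\<bar>"
proof -
  have "a * b - a' * b' = (a - a') * b + a' * (b - b')" by (simp add: algebra_simps)
  then have "\<bar>a * b - a' * b'\<bar> \<le> \<bar>a - a'\<bar> * \<bar>b\<bar> + \<bar>a'\<bar> * \<bar>b - b'\<bar>"
    by (simp add: abs_mult[symmetric] abs_triangle_ineq)
  also have "\<dots> \<le> (\<alpha> * \<bar>d\<bar>) * \<beta> + E0 * (\<gamma> * \<bar>d\<bar>)"
    using assms by (intro add_mono mult_mono) auto
  finally show ?thesis by (simp add: algebra_simps)
qed

lemma exp_interval_mean_le:
  fixes f :: "real \<Rightarrow> real" and a b :: real
  assumes ab: "a < b"
    and fi: "integrable lborel (\<lambda>s. indicator {a..b} s * f s)"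
    and gi: "integrable lborel (\<lambda>s. indicator {a..b} s * exp (f s))"
  shows "exp ((\<integral>s. indicator {a..b} s * f s \<partial>lborel) / (b - a)) \<le> (\<integral>s. indicator {a..b} s * exp (f s) \<partial>lborel) / (b - a)"
proof -
  define m where "m = (\<integral>s. indicator {a..b} s * f s \<partial>lborel) / (b - a)"
  have ii: "integrable lborel (indicator {a..b} :: real \<Rightarrow> real)" by (intro integrable_real_indicator) (use ab in auto)
  have hi: "integrable lborel (\<lambda>s. exp m * indicator {a..b} s + exp m * (indicator {a..b} s * f s) - exp m * m * indicator {a..b} s)"
    using ii fi by (intro Bochner_Integration.integrable_diff Bochner_Integration.integrable_add integrable_mult_right) auto
  have "(\<integral>s. exp m * indicator {a..b} s + exp m * (indicator {a..b} s * f s) - exp m * m * indicator {a..b} s \<partial>lborel)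
      = exp m * (b - a) + exp m * (\<integral>s. indicator {a..b} s * f s \<partial>lborel) - exp m * m * (b - a)"
    using ii fi ab by simp
  also have "\<dots> = exp m * (b - a)" using ab unfolding m_def by (simp add: field_simps)
  finally have eq: "(\<integral>s. exp m * indicator {a..b} s + exp m * (indicator {a..b} s * f s) - exp m * m * indicator {a..b} s \<partial>lborel) = exp m * (b - a)" .
  have "exp m * (b - a) \<le> (\<integral>s. indicator {a..b} s * exp (f s) \<partial>lborel)"
    unfolding eq[symmetric]
  proof (rule integral_mono[OF hi gi])
    fix s
    have "1 + (f s - m) \<le> exp (f s - m)" by (rule exp_ge_add_one_self)
    then have "exp m * (1 + (f s - m)) \<le> exp m * exp (f s - m)" by (intro mult_left_mono) auto
    then have "exp m + exp m * (f s - m) \<le> exp (f s)" by (simp add: exp_diff algebra_simps)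
    then show "exp m * indicator {a..b} s + exp m * (indicator {a..b} s * f s) - exp m * m * indicator {a..b} s \<le> indicator {a..b} s * exp (f s)"
      by (cases "s \<in> {a..b}") (auto simp: algebra_simps)
  qed
  then show ?thesis using ab unfolding m_def by (simp add: field_simps)
qed

lemma exp_mult_abs_le: fixes c x :: real shows "exp (c * \<bar>x\<bar>) \<le> exp (c * x) + exp (- (c * x))"
proof (cases "x \<ge> 0")
  case True
  then have e: "exp (c * \<bar>x\<bar>) = exp (c * x)" by simp
  show ?thesis using e exp_gt_zero[of "- (c * x)"] by linarith
next
  case False
  then have e: "exp (c * \<bar>x\<bar>) = exp (- (c * x))" by simp
  show ?thesis using e exp_gt_zero[of "c * x"] by linarith
qed

lemma exp_add3_le: fixes x y z :: real shows "exp (x + y + z) \<le> (exp (3 * x) + exp (3 * y) + exp (3 * z)) / 3"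
proof -
  have c1: "exp ((1 - 2/3) *\<^sub>R (3 * x) + (2/3) *\<^sub>R ((3 * y + 3 * z) / 2)) \<le> (1 - 2/3) * exp (3 * x) + (2/3) * exp ((3 * y + 3 * z) / 2)"
    by (intro convex_onD[OF exp_convex]) auto
  have c2: "exp ((1 - 1/2) *\<^sub>R (3 * y) + (1/2) *\<^sub>R (3 * z)) \<le> (1 - 1/2) * exp (3 * y) + (1/2) * exp (3 * z)"
    by (intro convex_onD[OF exp_convex]) auto
  have e1: "(1 - 2/3) *\<^sub>R (3 * x) + (2/3) *\<^sub>R ((3 * y + 3 * z) / 2) = x + y + z" by simp
  have e2: "(1 - 1/2) *\<^sub>R (3 * y) + (1/2) *\<^sub>R (3 * z) = (3 * y + 3 * z) / 2" by simp
  show ?thesis using c1 c2 unfolding e1 e2 by simp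
qed

lemma exponent_upper:
  fixes g e D I C P d cm pm :: real
  assumes "0 < g" "0 < e" "\<bar>D\<bar> \<le> d" "C \<le> cm" "P \<le> pm"
  shows "- g * (e * (D + I - C) - P) \<le> g * e * d + g * e * \<bar>I\<bar> + g * e * cm + g * pm"
proof -
  have e: "- g * (e * (D + I - C) - P) = (g * e) * (- D) + (g * e) * (- I) + (g * e) * C + g * P"
    by (simp add: algebra_simps)
  have ge: "0 \<le> g * e" using assms by simp
  have "(g * e) * (- D) \<le> (g * e) * d" using assms ge by (intro mult_left_mono) auto
  moreover have "(g * e) * (- I) \<le> (g * e) * \<bar>I\<bar>" using ge by (intro mult_left_mono) auto
  moreover have "(g * e) * C \<le> (g * e) * cm" using assms ge by (intro mult_left_mono) auto
  moreover have "g * P \<le> g * pm" using assms by (intro mult_left_mono) auto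
  ultimately show ?thesis unfolding e by (simp add: mult.assoc)
qed

lemma exponent_lower:
  fixes g e D I C P d :: real
  assumes "0 < g" "0 < e" "\<bar>D\<bar> \<le> d" "0 \<le> C" "0 \<le> P"
  shows "- (g * e * d + g * e * \<bar>I\<bar>) \<le> - g * (e * (D + I - C) - P)"
proof -
  have e: "- g * (e * (D + I - C) - P) = (g * e) * (- D) + (g * e) * (- I) + (g * e) * C + g * P"
    by (simp add: algebra_simps)
  have ge: "0 \<le> g * e" using assms by simp
  have "(g * e) * (- d) \<le> (g * e) * (- D)" using assms ge by (intro mult_left_mono) auto
  moreover have "(g * e) * (- \<bar>I\<bar>) \<le> (g * e) * (- I)" using ge by (intro mult_left_mono) auto
  moreover have "0 \<le> (g * e) * C" using assms ge by simp
  moreover have "0 \<le> g * P" using assms by simp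
  ultimately show ?thesis unfolding e by (simp add: mult.assoc)
qed

lemma exponent_mix_le:
  fixes g e a D1 D2 I1 I2 C1 C2 Cm P1 P2 Pm :: real
  assumes "0 < g" "0 < e" "Cm \<le> a * C1 + (1 - a) * C2" "Pm \<le> a * P1 + (1 - a) * P2"
  shows "- g * (e * ((a * D1 + (1 - a) * D2) + (a * I1 + (1 - a) * I2) - Cm) - Pm)
     \<le> a * (- g * (e * (D1 + I1 - C1) - P1)) + (1 - a) * (- g * (e * (D2 + I2 - C2) - P2))"
proof -
  define X where "X = - (g * e) * ((a * D1 + (1 - a) * D2) + (a * I1 + (1 - a) * I2))"
  have e1: "- g * (e * ((a * D1 + (1 - a) * D2) + (a * I1 + (1 - a) * I2) - Cm) - Pm) = X + (g * e) * Cm + g * Pm"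
    unfolding X_def by (simp add: algebra_simps)
  have e2: "a * (- g * (e * (D1 + I1 - C1) - P1)) + (1 - a) * (- g * (e * (D2 + I2 - C2) - P2))
      = X + (g * e) * (a * C1 + (1 - a) * C2) + g * (a * P1 + (1 - a) * P2)"
    unfolding X_def by (simp add: algebra_simps)
  have "(g * e) * Cm \<le> (g * e) * (a * C1 + (1 - a) * C2)" using assms by (intro mult_left_mono) auto
  moreover have "g * Pm \<le> g * (a * P1 + (1 - a) * P2)" using assms by (intro mult_left_mono) auto
  ultimately show ?thesis unfolding e1 e2 by simp
qed

section \<open>Measure-theoretic facts and convergence in measure\<close>

lemma AE_pair_swap:
  assumes A: "sigma_finite_measure A" and B: "sigma_finite_measure B"
    and ae: "AE z in A \<Otimes>\<^sub>M B. P z"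
  shows "AE y in B. AE x in A. P (x, y)"
proof -
  interpret A: sigma_finite_measure A by fact
  interpret B: sigma_finite_measure B by fact
  interpret pair_sigma_finite A B ..
  obtain N where N: "N \<in> null_sets (A \<Otimes>\<^sub>M B)" "{z\<in>space (A \<Otimes>\<^sub>M B). \<not> P z} \<subseteq> N"
    using ae unfolding eventually_ae_filter by auto
  have Ns: "N \<in> sets (A \<Otimes>\<^sub>M B)" using N(1) by auto
  have meas: "{x\<in>space (A \<Otimes>\<^sub>M B). (\<lambda>a b. (a, b) \<notin> N) (fst x) (snd x)} \<in> sets (A \<Otimes>\<^sub>M B)"
  proof -
    have "{x\<in>space (A \<Otimes>\<^sub>M B). (\<lambda>a b. (a, b) \<notin> N) (fst x) (snd x)} = space (A \<Otimes>\<^sub>M B) - N" by auto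
    then show ?thesis using Ns by auto
  qed
  have "AE z in A \<Otimes>\<^sub>M B. z \<notin> N" using N(1) by (rule AE_not_in)
  then have "AE x in A. AE y in B. (x, y) \<notin> N" by (rule AE_pair)
  then have AE2: "AE y in B. AE x in A. (x, y) \<notin> N" using AE_commute[OF meas] by simp
  show ?thesis
    using AE2 AE_space
  proof eventually_elim
    case (elim y)
    show ?case using elim(1) AE_space
    proof eventually_elim
      case (elim x)
      then show ?case using N(2) \<open>y \<in> space B\<close> by (auto simp: space_pair_measure)
    qed
  qed
qed

lemma measurable_indicator_swap_restrict:
  fixes f :: "real \<times> 'b \<Rightarrow> real"
  assumes f: "f \<in> borel_measurable (restrict_space borel A \<Otimes>\<^sub>M N)" and A: "A \<in> sets borel"
  shows "(\<lambda>z. indicator A (snd z) * f (snd z, fst z)) \<in> borel_measurable (N \<Otimes>\<^sub>M lborel)"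
proof -
  have id: "(\<lambda>z. z) \<in> measurable (restrict_space (borel \<Otimes>\<^sub>M N) (A \<times> space N)) (restrict_space borel A \<Otimes>\<^sub>M N)"
  proof (rule measurable_pair_iff[THEN iffD2], intro conjI)
    show "fst \<circ> (\<lambda>z. z) \<in> restrict_space (borel \<Otimes>\<^sub>M N) (A \<times> space N) \<rightarrow>\<^sub>M restrict_space borel A"
    proof (rule measurable_restrict_space2)
      show "fst \<circ> (\<lambda>z. z) \<in> space (restrict_space (borel \<Otimes>\<^sub>M N) (A \<times> space N)) \<rightarrow> A"
        by (auto simp: space_restrict_space space_pair_measure)
      show "fst \<circ> (\<lambda>z. z) \<in> restrict_space (borel \<Otimes>\<^sub>M N) (A \<times> space N) \<rightarrow>\<^sub>M borel"
        by (simp add: o_def measurable_restrict_space1[OF measurable_fst])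
    qed
    show "snd \<circ> (\<lambda>z. z) \<in> restrict_space (borel \<Otimes>\<^sub>M N) (A \<times> space N) \<rightarrow>\<^sub>M N"
      by (auto intro!: measurable_restrict_space1 simp: o_def)
  qed
  have f1: "f \<in> borel_measurable (restrict_space (borel \<Otimes>\<^sub>M N) (A \<times> space N))"
    using measurable_comp[OF id f] by (simp add: o_def)
  have As: "A \<times> space N \<in> sets (borel \<Otimes>\<^sub>M N)" using A by auto
  have f2: "(\<lambda>z. if z \<in> A \<times> space N then f z else 0) \<in> borel_measurable (borel \<Otimes>\<^sub>M N)"
    using f1 As by (subst measurable_restrict_space_iff[symmetric]) (auto simp: space_pair_measure)
  have f3: "(\<lambda>(x, y). (\<lambda>z. if z \<in> A \<times> space N then f z else 0) (y, x)) \<in> borel_measurable (N \<Otimes>\<^sub>M borel)"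
    by (rule measurable_pair_swap[OF f2])
  have "measurable (N \<Otimes>\<^sub>M borel) (borel::real measure) = measurable (N \<Otimes>\<^sub>M lborel) borel"
    by (intro measurable_cong_sets sets_pair_measure_cong) auto
  with f3 have f4: "(\<lambda>(x, y). (\<lambda>z. if z \<in> A \<times> space N then f z else 0) (y, x)) \<in> borel_measurable (N \<Otimes>\<^sub>M lborel)"
    by simp
  show ?thesis
    by (rule measurable_cong[THEN iffD1, OF _ f4]) (auto simp: space_pair_measure indicator_def)
qed

lemma measure_le_of_emeasure_le: "emeasure M A \<le> ennreal x \<Longrightarrow> 0 \<le> x \<Longrightarrow> measure M A \<le> x"
  unfolding measure_def by (rule enn2real_leI)

lemma (in prob_space) jensen_exp_neg:
  fixes Z :: "'a \<Rightarrow> real"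
  assumes Zi: "integrable M Z" and Z0: "AE x in M. 0 \<le> Z x"
  shows "exp (- (\<integral>x. Z x \<partial>M)) \<le> (\<integral>x. exp (- Z x) \<partial>M)"
proof -
  define m where "m = (\<integral>x. Z x \<partial>M)"
  have Zm: "Z \<in> borel_measurable M" using Zi by auto
  have ei: "integrable M (\<lambda>x. exp (- Z x))"
  proof (rule Bochner_Integration.integrable_bound[of _ "\<lambda>_. 1::real"])
    show "integrable M (\<lambda>_. 1::real)" by simp
    show "(\<lambda>x. exp (- Z x)) \<in> borel_measurable M" using Zm by measurable
    show "AE x in M. norm (exp (- Z x)) \<le> norm (1::real)" using Z0 by eventually_elim simp
  qed
  have hi: "integrable M (\<lambda>x. exp (- m) + exp (- m) * m - exp (- m) * Z x)"
    using Zi by (intro Bochner_Integration.integrable_diff Bochner_Integration.integrable_add integrable_mult_right) auto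
  have "(\<integral>x. exp (- m) + exp (- m) * m - exp (- m) * Z x \<partial>M) = exp (- m)"
    using Zi by (simp add: m_def prob_space)
  moreover have "(\<integral>x. exp (- m) + exp (- m) * m - exp (- m) * Z x \<partial>M) \<le> (\<integral>x. exp (- Z x) \<partial>M)"
  proof (rule integral_mono[OF hi ei])
    fix x
    have "1 + (m - Z x) \<le> exp (m - Z x)" by (rule exp_ge_add_one_self)
    then have "exp (- m) * (1 + (m - Z x)) \<le> exp (- m) * exp (m - Z x)" by (intro mult_left_mono) auto
    then show "exp (- m) + exp (- m) * m - exp (- m) * Z x \<le> exp (- Z x)"
      by (simp add: algebra_simps exp_add[symmetric])
  qed
  ultimately show ?thesis unfolding m_def by simp
qed

lemma integral_exp_convex_comb:
  fixes X1 X2 Xm :: "'a \<Rightarrow> real"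
  assumes m1: "X1 \<in> borel_measurable M" and m2: "X2 \<in> borel_measurable M" and mm: "Xm \<in> borel_measurable M"
    and i1: "integrable M (\<lambda>x. exp (X1 x))" and i2: "integrable M (\<lambda>x. exp (X2 x))"
    and p1: "0 < (\<integral>x. exp (X1 x) \<partial>M)" and p2: "0 < (\<integral>x. exp (X2 x) \<partial>M)"
    and le: "AE x in M. Xm x \<le> a * X1 x + (1 - a) * X2 x" and a: "0 \<le> a" "a \<le> 1"
  shows "integrable M (\<lambda>x. exp (Xm x))"
    and "(\<integral>x. exp (Xm x) \<partial>M) \<le> exp (a * ln (\<integral>x. exp (X1 x) \<partial>M) + (1 - a) * ln (\<integral>x. exp (X2 x) \<partial>M))"
proof -
  define J1 where "J1 = (\<integral>x. exp (X1 x) \<partial>M)"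
  define J2 where "J2 = (\<integral>x. exp (X2 x) \<partial>M)"
  define c where "c = exp (a * ln J1 + (1 - a) * ln J2)"
  have J1: "J1 > 0" and J2: "J2 > 0" using p1 p2 by (auto simp: J1_def J2_def)
  have c: "c > 0" by (simp add: c_def)
  define R where "R x = c * (a * (exp (X1 x) / J1) + (1 - a) * (exp (X2 x) / J2))" for x
  have Ri: "integrable M R" unfolding R_def
    using i1 i2 by (intro integrable_mult_right Bochner_Integration.integrable_add integrable_divide) auto
  have pt: "exp (Xm x) \<le> R x" if "Xm x \<le> a * X1 x + (1 - a) * X2 x" for x
  proof -
    have "exp (Xm x) \<le> exp (a * X1 x + (1 - a) * X2 x)" using that by simp
    also have "a * X1 x + (1 - a) * X2 x = (a * ln J1 + (1 - a) * ln J2) + ((1 - (1 - a)) *\<^sub>R (X1 x - ln J1) + (1 - a) *\<^sub>R (X2 x - ln J2))"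
      by (simp add: algebra_simps)
    also have "exp \<dots> = c * exp ((1 - (1 - a)) *\<^sub>R (X1 x - ln J1) + (1 - a) *\<^sub>R (X2 x - ln J2))"
      by (simp add: c_def exp_add)
    also have "\<dots> \<le> c * ((1 - (1 - a)) * exp (X1 x - ln J1) + (1 - a) * exp (X2 x - ln J2))"
      using a c by (intro mult_left_mono convex_onD[OF exp_convex]) auto
    also have "\<dots> = R x" using J1 J2 by (simp add: R_def exp_diff)
    finally show ?thesis .
  qed
  have AEle: "AE x in M. exp (Xm x) \<le> R x" using le by eventually_elim (rule pt)
  show ei: "integrable M (\<lambda>x. exp (Xm x))"
  proof (rule Bochner_Integration.integrable_bound[OF Ri])
    show "(\<lambda>x. exp (Xm x)) \<in> borel_measurable M" using mm by measurable
    show "AE x in M. norm (exp (Xm x)) \<le> norm (R x)" using AEle by eventually_elim auto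
  qed
  have "(\<integral>x. exp (Xm x) \<partial>M) \<le> (\<integral>x. R x \<partial>M)" by (rule integral_mono_AE[OF ei Ri AEle])
  also have "(\<integral>x. R x \<partial>M) = c * (a * (J1 / J1) + (1 - a) * (J2 / J2))"
    unfolding R_def using i1 i2 by (simp add: J1_def J2_def)
  also have "\<dots> = c" using J1 J2 by simp
  finally show "(\<integral>x. exp (Xm x) \<partial>M) \<le> exp (a * ln (\<integral>x. exp (X1 x) \<partial>M) + (1 - a) * ln (\<integral>x. exp (X2 x) \<partial>M))"
    unfolding c_def J1_def J2_def .
qed

definition converges_in_measure :: "'a measure \<Rightarrow> (nat \<Rightarrow> 'a \<Rightarrow> real) \<Rightarrow> ('a \<Rightarrow> real) \<Rightarrow> bool" where
  "converges_in_measure M X Y \<longleftrightarrow>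
     (\<forall>\<epsilon>>0. (\<lambda>n. measure M {\<omega>\<in>space M. \<bar>X n \<omega> - Y \<omega>\<bar> > \<epsilon>}) \<longlonglongrightarrow> 0)"

lemma (in finite_measure) converges_in_measure_unique:
  fixes I1 I2 :: "'a \<Rightarrow> real" and X :: "nat \<Rightarrow> 'a \<Rightarrow> real"
  assumes I1: "I1 \<in> borel_measurable M" and I2: "I2 \<in> borel_measurable M"
    and X: "\<And>n. X n \<in> borel_measurable M"
    and c1: "converges_in_measure M X I1" and c2: "converges_in_measure M X I2"
  shows "AE \<omega> in M. I1 \<omega> = I2 \<omega>"
proof -
  have null: "measure M {\<omega>\<in>space M. \<bar>I1 \<omega> - I2 \<omega>\<bar> > 2 * \<epsilon>} = 0" if e: "\<epsilon> > 0" for \<epsilon>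
  proof -
    have le: "measure M {\<omega>\<in>space M. \<bar>I1 \<omega> - I2 \<omega>\<bar> > 2 * \<epsilon>}
        \<le> measure M {\<omega>\<in>space M. \<bar>X n \<omega> - I1 \<omega>\<bar> > \<epsilon>} + measure M {\<omega>\<in>space M. \<bar>X n \<omega> - I2 \<omega>\<bar> > \<epsilon>}" for n
    proof -
      have "{\<omega>\<in>space M. \<bar>I1 \<omega> - I2 \<omega>\<bar> > 2 * \<epsilon>}
          \<subseteq> {\<omega>\<in>space M. \<bar>X n \<omega> - I1 \<omega>\<bar> > \<epsilon>} \<union> {\<omega>\<in>space M. \<bar>X n \<omega> - I2 \<omega>\<bar> > \<epsilon>}" by auto
      then have "measure M {\<omega>\<in>space M. \<bar>I1 \<omega> - I2 \<omega>\<bar> > 2 * \<epsilon>}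
          \<le> measure M ({\<omega>\<in>space M. \<bar>X n \<omega> - I1 \<omega>\<bar> > \<epsilon>} \<union> {\<omega>\<in>space M. \<bar>X n \<omega> - I2 \<omega>\<bar> > \<epsilon>})"
        using I1 I2 X[of n] by (intro finite_measure_mono) auto
      also have "\<dots> \<le> measure M {\<omega>\<in>space M. \<bar>X n \<omega> - I1 \<omega>\<bar> > \<epsilon>} + measure M {\<omega>\<in>space M. \<bar>X n \<omega> - I2 \<omega>\<bar> > \<epsilon>}"
        using I1 I2 X[of n] by (intro measure_Un_le) auto
      finally show ?thesis .
    qed
    have "(\<lambda>n. measure M {\<omega>\<in>space M. \<bar>X n \<omega> - I1 \<omega>\<bar> > \<epsilon>} + measure M {\<omega>\<in>space M. \<bar>X n \<omega> - I2 \<omega>\<bar> > \<epsilon>}) \<longlonglongrightarrow> 0 + 0"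
      using c1 c2 e unfolding converges_in_measure_def by (intro tendsto_add) auto
    then have lim: "(\<lambda>n. measure M {\<omega>\<in>space M. \<bar>X n \<omega> - I1 \<omega>\<bar> > \<epsilon>} + measure M {\<omega>\<in>space M. \<bar>X n \<omega> - I2 \<omega>\<bar> > \<epsilon>}) \<longlonglongrightarrow> 0" by simp
    have "measure M {\<omega>\<in>space M. \<bar>I1 \<omega> - I2 \<omega>\<bar> > 2 * \<epsilon>} \<le> 0"
      using le by (intro LIMSEQ_le_const[OF lim]) auto
    then show ?thesis using measure_nonneg[of M] by (simp add: order_antisym)
  qed
  have "AE \<omega> in M. \<bar>I1 \<omega> - I2 \<omega>\<bar> \<le> 2 * (1 / real (Suc k))" for k
  proof -
    have s: "{\<omega>\<in>space M. \<not> \<bar>I1 \<omega> - I2 \<omega>\<bar> \<le> 2 * (1 / real (Suc k))} \<in> sets M" using I1 I2 by measurable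
    have "emeasure M {\<omega>\<in>space M. \<not> \<bar>I1 \<omega> - I2 \<omega>\<bar> \<le> 2 * (1 / real (Suc k))} = 0"
      using null[of "1 / real (Suc k)"] by (simp add: emeasure_eq_measure not_le)
    then show ?thesis using s by (subst AE_iff_measurable[OF _ refl]) auto
  qed
  then have "AE \<omega> in M. \<forall>k. \<bar>I1 \<omega> - I2 \<omega>\<bar> \<le> 2 * (1 / real (Suc k))" by (simp add: AE_all_countable)
  then show ?thesis
  proof eventually_elim
    case (elim \<omega>)
    have "(\<lambda>k. 2 * (1 / real (Suc k))) \<longlonglongrightarrow> 0" by real_asymp
    then have "\<bar>I1 \<omega> - I2 \<omega>\<bar> \<le> 0" using elim by (intro LIMSEQ_le_const) auto
    then show ?case by simp
  qed
qed

lemma (in finite_measure) converges_in_measure_convex_comb: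
  fixes X Y Z :: "nat \<Rightarrow> 'a \<Rightarrow> real"
  assumes X: "converges_in_measure M X A" and Y: "converges_in_measure M Y B"
    and meas: "\<And>n. X n \<in> borel_measurable M" "\<And>n. Y n \<in> borel_measurable M" "\<And>n. Z n \<in> borel_measurable M"
      "A \<in> borel_measurable M" "B \<in> borel_measurable M"
    and Z: "AE \<omega> in M. \<forall>n. Z n \<omega> = a * X n \<omega> + (1 - a) * Y n \<omega>" and a: "0 \<le> a" "a \<le> 1"
  shows "converges_in_measure M Z (\<lambda>\<omega>. a * A \<omega> + (1 - a) * B \<omega>)"
  unfolding converges_in_measure_def
proof (intro allI impI)
  fix \<epsilon> :: real assume e: "\<epsilon> > 0"
  let ?D = "\<lambda>n. {\<omega>\<in>space M. \<bar>X n \<omega> - A \<omega>\<bar> > \<epsilon>} \<union> {\<omega>\<in>space M. \<bar>Y n \<omega> - B \<omega>\<bar> > \<epsilon>}"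
  let ?P = "\<lambda>n. measure M {\<omega>\<in>space M. \<bar>X n \<omega> - A \<omega>\<bar> > \<epsilon>} + measure M {\<omega>\<in>space M. \<bar>Y n \<omega> - B \<omega>\<bar> > \<epsilon>}"
  note [measurable] = meas
  have le: "measure M {\<omega>\<in>space M. \<bar>Z n \<omega> - (a * A \<omega> + (1 - a) * B \<omega>)\<bar> > \<epsilon>} \<le> ?P n" for n
  proof -
    have "AE \<omega> in M. \<omega> \<in> {\<omega>\<in>space M. \<bar>Z n \<omega> - (a * A \<omega> + (1 - a) * B \<omega>)\<bar> > \<epsilon>} \<longrightarrow> \<omega> \<in> ?D n"
      using Z
    proof eventually_elim
      case (elim \<omega>)
      have eq: "Z n \<omega> - (a * A \<omega> + (1 - a) * B \<omega>) = a * (X n \<omega> - A \<omega>) + (1 - a) * (Y n \<omega> - B \<omega>)"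
        using elim by (simp add: algebra_simps)
      show ?case
      proof
        assume "\<omega> \<in> {\<omega>\<in>space M. \<bar>Z n \<omega> - (a * A \<omega> + (1 - a) * B \<omega>)\<bar> > \<epsilon>}"
        then have "\<omega> \<in> space M" "\<epsilon> < \<bar>a * (X n \<omega> - A \<omega>) + (1 - a) * (Y n \<omega> - B \<omega>)\<bar>"
          by (simp_all only: mem_Collect_eq eq[symmetric])
        then show "\<omega> \<in> ?D n" using abs_convex_comb_gt[OF a] by blast
      qed
    qed
    then have "measure M {\<omega>\<in>space M. \<bar>Z n \<omega> - (a * A \<omega> + (1 - a) * B \<omega>)\<bar> > \<epsilon>} \<le> measure M (?D n)"
      by (rule finite_measure_mono_AE) measurable
    also have "\<dots> \<le> ?P n" by (intro measure_Un_le) measurable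
    finally show ?thesis .
  qed
  have "?P \<longlonglongrightarrow> 0 + 0"
    using X Y e unfolding converges_in_measure_def by (intro tendsto_add) blast+
  then have lim: "?P \<longlonglongrightarrow> 0" by simp
  show "(\<lambda>n. measure M {\<omega>\<in>space M. \<bar>Z n \<omega> - (a * A \<omega> + (1 - a) * B \<omega>)\<bar> > \<epsilon>}) \<longlonglongrightarrow> 0"
    by (rule tendsto_sandwich[OF _ _ tendsto_const lim]) (simp_all add: le)
qed

lemma stoch_int_converges:
  assumes "I \<in> borel_measurable M" and "converges_in_measure M (riemann_sum W h t T) I"
  shows "stoch_int M W h t T \<in> borel_measurable M"
    and "converges_in_measure M (riemann_sum W h t T) (stoch_int M W h t T)"
proof -
  have "stoch_int M W h t T \<in> borel_measurable M \<and> converges_in_measure M (riemann_sum W h t T) (stoch_int M W h t T)"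
    unfolding stoch_int_def converges_in_measure_def
    by (rule someI[of _ I]) (use assms in \<open>auto simp: converges_in_measure_def\<close>)
  then show "stoch_int M W h t T \<in> borel_measurable M"
    and "converges_in_measure M (riemann_sum W h t T) (stoch_int M W h t T)" by auto
qed

section \<open>Brownian increments and their exponential moments\<close>

lemma normal_density_mult_exp:
  fixes \<sigma> b w :: real assumes "\<sigma> > 0"
  shows "normal_density 0 \<sigma> w * exp (b * w) = exp (b\<^sup>2 * \<sigma>\<^sup>2 / 2) * normal_density (b * \<sigma>\<^sup>2) \<sigma> w"
proof -
  have e: "b * w - w\<^sup>2 / (2 * \<sigma>\<^sup>2) = b\<^sup>2 * \<sigma>\<^sup>2 / 2 - (w - b * \<sigma>\<^sup>2)\<^sup>2 / (2 * \<sigma>\<^sup>2)"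
    using assms by (simp add: field_simps power2_eq_square)
  show ?thesis unfolding normal_density_def
    by (simp add: mult.assoc mult.left_commute exp_add[symmetric] e)
qed

lemma nn_integral_exp_normal_density:
  fixes \<sigma> b :: real assumes "\<sigma> > 0"
  shows "(\<integral>\<^sup>+w. ennreal (exp (b * w)) \<partial>density lborel (\<lambda>x. ennreal (normal_density 0 \<sigma> x)))
        = ennreal (exp (b\<^sup>2 * \<sigma>\<^sup>2 / 2))"
proof -
  have "(\<integral>\<^sup>+w. ennreal (exp (b * w)) \<partial>density lborel (\<lambda>x. ennreal (normal_density 0 \<sigma> x)))
      = (\<integral>\<^sup>+w. ennreal (normal_density 0 \<sigma> w) * ennreal (exp (b * w)) \<partial>lborel)"
    by (rule nn_integral_density) auto
  also have "\<dots> = (\<integral>\<^sup>+w. ennreal (exp (b\<^sup>2 * \<sigma>\<^sup>2 / 2)) * ennreal (normal_density (b * \<sigma>\<^sup>2) \<sigma> w) \<partial>lborel)"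
    by (intro nn_integral_cong) (simp add: ennreal_mult''[symmetric] normal_density_mult_exp[OF assms])
  also have "\<dots> = ennreal (exp (b\<^sup>2 * \<sigma>\<^sup>2 / 2)) * (\<integral>\<^sup>+w. ennreal (normal_density (b * \<sigma>\<^sup>2) \<sigma> w) \<partial>lborel)"
    by (rule nn_integral_cmult) auto
  also have "(\<integral>\<^sup>+w. ennreal (normal_density (b * \<sigma>\<^sup>2) \<sigma> w) \<partial>lborel) = 1"
  proof -
    have "emeasure (density lborel (\<lambda>x. ennreal (normal_density (b * \<sigma>\<^sup>2) \<sigma> x))) UNIV = 1"
      using prob_space.emeasure_space_1[OF prob_space_normal_density, of \<sigma> "b * \<sigma>\<^sup>2"] assms by simp
    then show ?thesis by (subst (asm) emeasure_density) auto
  qed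
  finally show ?thesis by simp
qed

locale brownian =
  fixes M :: "'a measure" and F :: "real \<Rightarrow> 'a measure" and W :: "real \<Rightarrow> 'a \<Rightarrow> real"
  assumes BM: "brownian_motion M F W"
begin

lemma bm_prob: "prob_space M" using BM unfolding brownian_motion_def by auto
lemma bm_space[simp]: "space (F s) = space M" using BM unfolding brownian_motion_def by auto
lemma bm_sets: "sets (F s) \<subseteq> sets M" using BM unfolding brownian_motion_def by auto
lemma bm_mono: "s \<le> u \<Longrightarrow> sets (F s) \<subseteq> sets (F u)" using BM unfolding brownian_motion_def by auto
lemma bm_adapt: "s \<ge> 0 \<Longrightarrow> W s \<in> borel_measurable (F s)" using BM unfolding brownian_motion_def by auto
lemma bm_cont: "\<omega> \<in> space M \<Longrightarrow> continuous_on {0..} (\<lambda>s. W s \<omega>)" using BM unfolding brownian_motion_def by auto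
lemma bm_distr: "0 \<le> s \<Longrightarrow> s < u \<Longrightarrow>
   distributed M lborel (\<lambda>\<omega>. W u \<omega> - W s \<omega>) (\<lambda>x. ennreal (normal_density 0 (sqrt (u - s)) x))"
  using BM unfolding brownian_motion_def by auto
lemma bm_indep: "0 \<le> s \<Longrightarrow> s < u \<Longrightarrow> A \<in> sets (F s) \<Longrightarrow> B \<in> sets borel \<Longrightarrow>
   measure M (A \<inter> {\<omega>\<in>space M. W u \<omega> - W s \<omega> \<in> B}) =
           measure M A * measure M {\<omega>\<in>space M. W u \<omega> - W s \<omega> \<in> B}"
  using BM unfolding brownian_motion_def by auto

lemma measurable_from_filtration: "f \<in> measurable (F s) N \<Longrightarrow> f \<in> measurable M N"
  using bm_sets[of s] unfolding measurable_def by auto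

lemma measurable_filtration_mono: "s \<le> u \<Longrightarrow> f \<in> measurable (F s) N \<Longrightarrow> f \<in> measurable (F u) N"
  using bm_mono[of s u] unfolding measurable_def by auto

lemma measurable_id_filtration: "(\<lambda>x. x) \<in> measurable M (F s)"
  using bm_sets[of s] unfolding measurable_def by (auto dest: sets.sets_into_space)

lemma W_measurable[measurable]: "s \<ge> 0 \<Longrightarrow> W s \<in> borel_measurable M"
  using measurable_from_filtration[OF bm_adapt] .

lemma distr_pair_increment:
  assumes s: "0 \<le> s" "s < u" and X: "X \<in> measurable (F s) N"
  shows "distr M (N \<Otimes>\<^sub>M lborel) (\<lambda>\<omega>. (X \<omega>, W u \<omega> - W s \<omega>))
       = distr M N X \<Otimes>\<^sub>M density lborel (\<lambda>x. ennreal (normal_density 0 (sqrt (u - s)) x))"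
proof -
  interpret P: prob_space M by (rule bm_prob)
  have XM: "X \<in> measurable M N" using measurable_from_filtration[OF X] .
  have dW: "(\<lambda>\<omega>. W u \<omega> - W s \<omega>) \<in> borel_measurable M" using W_measurable[of u] W_measurable[of s] s by auto
  have dist: "distr M lborel (\<lambda>\<omega>. W u \<omega> - W s \<omega>) = density lborel (\<lambda>x. ennreal (normal_density 0 (sqrt (u - s)) x))"
    using bm_distr[OF s] unfolding distributed_def by auto
  show ?thesis
  proof (rule pair_measure_eqI[symmetric])
    show "sigma_finite_measure (distr M N X)"
      using P.prob_space_distr[OF XM] by (simp add: prob_space_imp_sigma_finite)
    show "sigma_finite_measure (density lborel (\<lambda>x. ennreal (normal_density 0 (sqrt (u - s)) x)))"
      using prob_space_normal_density[of "sqrt (u - s)" 0] s by (simp add: prob_space_imp_sigma_finite)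
    show "sets (distr M N X \<Otimes>\<^sub>M density lborel (\<lambda>x. ennreal (normal_density 0 (sqrt (u - s)) x)))
        = sets (distr M (N \<Otimes>\<^sub>M lborel) (\<lambda>\<omega>. (X \<omega>, W u \<omega> - W s \<omega>)))"
    proof -
      have "sets (distr M N X \<Otimes>\<^sub>M density lborel (\<lambda>x. ennreal (normal_density 0 (sqrt (u - s)) x)))
           = sets (N \<Otimes>\<^sub>M lborel)" by (rule sets_pair_measure_cong) simp_all
      then show ?thesis by simp
    qed
    fix A B assume A: "A \<in> sets (distr M N X)"
      and B: "B \<in> sets (density lborel (\<lambda>x. ennreal (normal_density 0 (sqrt (u - s)) x)))"
    have AN: "A \<in> sets N" using A by simp
    have Bb: "B \<in> sets borel" using B by simp
    have A': "X -` A \<inter> space M \<in> sets (F s)"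
      using measurable_sets[OF X AN] by simp
    have e1: "emeasure (distr M N X) A = ennreal (measure M (X -` A \<inter> space M))"
      using AN XM by (simp add: emeasure_distr P.emeasure_eq_measure)
    have e2: "emeasure (density lborel (\<lambda>x. ennreal (normal_density 0 (sqrt (u - s)) x))) B
         = ennreal (measure M {\<omega>\<in>space M. W u \<omega> - W s \<omega> \<in> B})"
      unfolding dist[symmetric] using Bb dW
      by (simp add: emeasure_distr P.emeasure_eq_measure vimage_def Int_def conj_commute)
    have e3: "emeasure (distr M (N \<Otimes>\<^sub>M lborel) (\<lambda>\<omega>. (X \<omega>, W u \<omega> - W s \<omega>))) (A \<times> B)
        = ennreal (measure M ((X -` A \<inter> space M) \<inter> {\<omega>\<in>space M. W u \<omega> - W s \<omega> \<in> B}))"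
    proof -
      have m: "(\<lambda>\<omega>. (X \<omega>, W u \<omega> - W s \<omega>)) \<in> measurable M (N \<Otimes>\<^sub>M lborel)"
        using XM dW by (auto intro!: measurable_Pair)
      have "A \<times> B \<in> sets (N \<Otimes>\<^sub>M lborel)" using AN Bb by auto
      then show ?thesis using m
        by (simp add: emeasure_distr P.emeasure_eq_measure vimage_def Int_def conj_commute conj_left_commute)
    qed
    show "emeasure (distr M N X) A * emeasure (density lborel (\<lambda>x. ennreal (normal_density 0 (sqrt (u - s)) x))) B
        = emeasure (distr M (N \<Otimes>\<^sub>M lborel) (\<lambda>\<omega>. (X \<omega>, W u \<omega> - W s \<omega>))) (A \<times> B)"
      unfolding e1 e2 e3 bm_indep[OF s A' Bb] by (simp add: ennreal_mult'')
  qed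
qed

lemma nn_integral_exp_increment:
  assumes s: "0 \<le> s" "s < u" and Y: "Y \<in> borel_measurable (F s)" and B: "B \<in> borel_measurable (F s)"
  shows "(\<integral>\<^sup>+\<omega>. ennreal (Y \<omega>) * ennreal (exp (B \<omega> * (W u \<omega> - W s \<omega>))) \<partial>M)
       = (\<integral>\<^sup>+\<omega>. ennreal (Y \<omega>) * ennreal (exp ((B \<omega>)\<^sup>2 * (u - s) / 2)) \<partial>M)"
proof -
  interpret P: prob_space M by (rule bm_prob)
  define N where "N = (borel \<Otimes>\<^sub>M borel :: (real \<times> real) measure)"
  define X where "X = (\<lambda>\<omega>. (Y \<omega>, B \<omega>))"
  define D where "D = density lborel (\<lambda>x. ennreal (normal_density 0 (sqrt (u - s)) x))"
  have X: "X \<in> measurable (F s) N" unfolding X_def N_def using Y B by (auto intro!: measurable_Pair)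
  have XM: "X \<in> measurable M N" using measurable_from_filtration[OF X] .
  have dW: "(\<lambda>\<omega>. W u \<omega> - W s \<omega>) \<in> borel_measurable M" using W_measurable[of u] W_measurable[of s] s by auto
  interpret D: prob_space D unfolding D_def by (rule prob_space_normal_density) (use s in simp)
  define g where "g = (\<lambda>z::(real\<times>real)\<times>real. ennreal (fst (fst z)) * ennreal (exp (snd (fst z) * snd z)))"
  have gm: "g \<in> borel_measurable (N \<Otimes>\<^sub>M lborel)" unfolding g_def N_def by measurable
  have "(\<integral>\<^sup>+\<omega>. ennreal (Y \<omega>) * ennreal (exp (B \<omega> * (W u \<omega> - W s \<omega>))) \<partial>M)
      = (\<integral>\<^sup>+\<omega>. g (X \<omega>, W u \<omega> - W s \<omega>) \<partial>M)" unfolding g_def X_def by simp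
  also have "\<dots> = integral\<^sup>N (distr M (N \<Otimes>\<^sub>M lborel) (\<lambda>\<omega>. (X \<omega>, W u \<omega> - W s \<omega>))) g"
    using XM dW gm by (subst nn_integral_distr) (auto intro!: measurable_Pair)
  also have "\<dots> = integral\<^sup>N (distr M N X \<Otimes>\<^sub>M D) g"
    unfolding D_def by (subst distr_pair_increment[OF s X]) simp
  also have "\<dots> = (\<integral>\<^sup>+ x. \<integral>\<^sup>+ w. g (x, w) \<partial>D \<partial>distr M N X)"
  proof -
    have eq: "measurable (N \<Otimes>\<^sub>M lborel) borel = measurable (distr M N X \<Otimes>\<^sub>M D) borel"
      by (intro measurable_cong_sets sets_pair_measure_cong) (auto simp: D_def)
    have "g \<in> borel_measurable (distr M N X \<Otimes>\<^sub>M D)" using gm unfolding eq .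
    then show ?thesis by (rule D.nn_integral_fst[symmetric])
  qed
  also have "\<dots> = (\<integral>\<^sup>+ x. ennreal (fst x) * ennreal (exp ((snd x)\<^sup>2 * (u - s) / 2)) \<partial>distr M N X)"
  proof (intro nn_integral_cong)
    fix x :: "real \<times> real"
    have "(\<integral>\<^sup>+ w. g (x, w) \<partial>D) = ennreal (fst x) * (\<integral>\<^sup>+ w. ennreal (exp (snd x * w)) \<partial>D)"
      unfolding g_def fst_conv snd_conv by (rule nn_integral_cmult) (auto simp: D_def)
    also have "\<dots> = ennreal (fst x) * ennreal (exp ((snd x)\<^sup>2 * (u - s) / 2))"
    proof -
      have sq: "0 < sqrt (u - s)" using assms(2) by simp
      show ?thesis unfolding D_def nn_integral_exp_normal_density[OF sq] using s by simp
    qed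
    finally show "(\<integral>\<^sup>+ w. g (x, w) \<partial>D) = ennreal (fst x) * ennreal (exp ((snd x)\<^sup>2 * (u - s) / 2))" .
  qed
  also have "\<dots> = (\<integral>\<^sup>+\<omega>. ennreal (Y \<omega>) * ennreal (exp ((B \<omega>)\<^sup>2 * (u - s) / 2)) \<partial>M)"
    using XM unfolding N_def by (subst nn_integral_distr) (auto simp: X_def)
  finally show ?thesis .
qed

end

sublocale brownian \<subseteq> P: prob_space M by (rule bm_prob)

lemma chernoff_upper_tail:
  fixes D :: "'a \<Rightarrow> real"
  assumes Dm: "D \<in> borel_measurable M" and A: "A > 0" and e: "\<epsilon> > 0"
    and mgf: "(\<integral>\<^sup>+\<omega>. ennreal (exp ((\<epsilon> / A) * D \<omega>)) \<partial>M) \<le> ennreal (exp ((\<epsilon> / A)\<^sup>2 * A / 2))"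
  shows "emeasure M {\<omega>\<in>space M. D \<omega> > \<epsilon>} \<le> ennreal (exp (- \<epsilon>\<^sup>2 / (2 * A)))"
proof -
  define c where "c = \<epsilon> / A"
  have c: "c > 0" using A e by (simp add: c_def)
  have "emeasure M {\<omega>\<in>space M. D \<omega> > \<epsilon>} = (\<integral>\<^sup>+\<omega>. indicator {\<omega>\<in>space M. D \<omega> > \<epsilon>} \<omega> \<partial>M)"
    using Dm by (subst nn_integral_indicator) auto
  also have "\<dots> \<le> (\<integral>\<^sup>+\<omega>. ennreal (exp (- c * \<epsilon>)) * ennreal (exp (c * D \<omega>)) \<partial>M)"
  proof (intro nn_integral_mono)
    fix \<omega> assume "\<omega> \<in> space M"
    show "indicator {\<omega>\<in>space M. D \<omega> > \<epsilon>} \<omega> \<le> ennreal (exp (- c * \<epsilon>)) * ennreal (exp (c * D \<omega>))"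
    proof (cases "D \<omega> > \<epsilon>")
      case True
      then have "c * \<epsilon> \<le> c * D \<omega>" using c by simp
      then have "1 \<le> exp (- c * \<epsilon>) * exp (c * D \<omega>)" by (simp add: exp_add[symmetric])
      then show ?thesis using True \<open>\<omega> \<in> space M\<close>
        by (simp add: ennreal_mult''[symmetric])
    qed simp
  qed
  also have "\<dots> = ennreal (exp (- c * \<epsilon>)) * (\<integral>\<^sup>+\<omega>. ennreal (exp (c * D \<omega>)) \<partial>M)"
    using Dm by (intro nn_integral_cmult) auto
  also have "\<dots> \<le> ennreal (exp (- c * \<epsilon>)) * ennreal (exp (c\<^sup>2 * A / 2))"
    using mgf unfolding c_def by (intro mult_left_mono) auto
  also have "\<dots> = ennreal (exp (- \<epsilon>\<^sup>2 / (2 * A)))"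
  proof -
    have "- c * \<epsilon> + c\<^sup>2 * A / 2 = - \<epsilon>\<^sup>2 / (2 * A)"
      using A unfolding c_def by (simp add: field_simps power2_eq_square)
    then show ?thesis by (simp add: ennreal_mult''[symmetric] exp_add[symmetric])
  qed
  finally show ?thesis .
qed

lemma chernoff_abs_tail:
  fixes D :: "'a \<Rightarrow> real"
  assumes Dm: "D \<in> borel_measurable M" and A: "A > 0" and e: "\<epsilon> > 0"
    and mgf: "\<And>c. (\<integral>\<^sup>+\<omega>. ennreal (exp (c * D \<omega>)) \<partial>M) \<le> ennreal (exp (c\<^sup>2 * A / 2))"
  shows "emeasure M {\<omega>\<in>space M. \<bar>D \<omega>\<bar> > \<epsilon>} \<le> ennreal (2 * exp (- \<epsilon>\<^sup>2 / (2 * A)))"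
proof -
  have "{\<omega>\<in>space M. \<bar>D \<omega>\<bar> > \<epsilon>} = {\<omega>\<in>space M. D \<omega> > \<epsilon>} \<union> {\<omega>\<in>space M. - D \<omega> > \<epsilon>}" by auto
  then have "emeasure M {\<omega>\<in>space M. \<bar>D \<omega>\<bar> > \<epsilon>}
      \<le> emeasure M {\<omega>\<in>space M. D \<omega> > \<epsilon>} + emeasure M {\<omega>\<in>space M. - D \<omega> > \<epsilon>}"
    using Dm by (simp add: emeasure_subadditive)
  also have "\<dots> \<le> ennreal (exp (- \<epsilon>\<^sup>2 / (2 * A))) + ennreal (exp (- \<epsilon>\<^sup>2 / (2 * A)))"
  proof (intro add_mono chernoff_upper_tail[OF _ A e])
    show "(\<integral>\<^sup>+\<omega>. ennreal (exp (\<epsilon> / A * D \<omega>)) \<partial>M) \<le> ennreal (exp ((\<epsilon> / A)\<^sup>2 * A / 2))" by (rule mgf)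
    show "(\<integral>\<^sup>+\<omega>. ennreal (exp (\<epsilon> / A * - D \<omega>)) \<partial>M) \<le> ennreal (exp ((\<epsilon> / A)\<^sup>2 * A / 2))"
      using mgf[of "- (\<epsilon> / A)"] by simp
  qed (use Dm in auto)
  also have "\<dots> = ennreal (2 * exp (- \<epsilon>\<^sup>2 / (2 * A)))"
    by (simp add: ennreal_plus[symmetric] del: ennreal_plus)
  finally show ?thesis .
qed

context brownian begin

lemma adapted_sum_measurable:
  assumes g0: "0 \<le> g 0" and gm: "\<And>j. g j \<le> g (Suc j)"
    and b_adapted: "\<And>j. b j \<in> borel_measurable (F (g j))"
  shows "(\<lambda>\<omega>. \<Sum>j<m. b j \<omega> * (W (g (Suc j)) \<omega> - W (g j) \<omega>)) \<in> borel_measurable (F (g m))"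
proof -
  have mono: "i \<le> k \<Longrightarrow> g i \<le> g k" for i k using gm by (rule lift_Suc_mono_le)
  have nn: "0 \<le> g i" for i using mono[of 0 i] g0 by simp
  have "(\<lambda>\<omega>. b j \<omega> * (W (g (Suc j)) \<omega> - W (g j) \<omega>)) \<in> borel_measurable (F (g m))" if "j < m" for j
  proof -
    have 1: "b j \<in> borel_measurable (F (g m))" using measurable_filtration_mono[OF mono b_adapted] that by simp
    have 2: "W (g (Suc j)) \<in> borel_measurable (F (g m))" using measurable_filtration_mono[OF mono bm_adapt[OF nn]] that by simp
    have 3: "W (g j) \<in> borel_measurable (F (g m))" using measurable_filtration_mono[OF mono bm_adapt[OF nn]] that by simp
    show ?thesis using 1 2 3 by measurable
  qed
  then show ?thesis by (intro borel_measurable_sum) auto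
qed

lemma nn_integral_exp_adapted_sum:
  assumes g0: "0 \<le> g 0" and gm: "\<And>j. g j \<le> g (Suc j)"
    and b_adapted: "\<And>j. b j \<in> borel_measurable (F (g j))"
    and bnd: "\<And>j. j < m \<Longrightarrow> AE \<omega> in M. \<bar>b j \<omega>\<bar> \<le> \<delta>"
  shows "(\<integral>\<^sup>+\<omega>. ennreal (exp (c * (\<Sum>j<m. b j \<omega> * (W (g (Suc j)) \<omega> - W (g j) \<omega>)))) \<partial>M)
         \<le> ennreal (exp (c\<^sup>2 * \<delta>\<^sup>2 * (g m - g 0) / 2))"
  using bnd
proof (induction m)
  case 0
  then show ?case using P.emeasure_space_1 by simp
next
  case (Suc m)
  have mono: "i \<le> k \<Longrightarrow> g i \<le> g k" for i k using gm by (rule lift_Suc_mono_le)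
  have nn: "0 \<le> g i" for i using mono[of 0 i] g0 by simp
  define S where "S = (\<lambda>\<omega>. \<Sum>j<m. b j \<omega> * (W (g (Suc j)) \<omega> - W (g j) \<omega>))"
  have Sm: "S \<in> borel_measurable (F (g m))" unfolding S_def by (rule adapted_sum_measurable[OF g0 gm b_adapted])
  have IH: "(\<integral>\<^sup>+\<omega>. ennreal (exp (c * S \<omega>)) \<partial>M) \<le> ennreal (exp (c\<^sup>2 * \<delta>\<^sup>2 * (g m - g 0) / 2))"
    unfolding S_def using Suc by auto
  have AEb: "AE \<omega> in M. \<bar>b m \<omega>\<bar> \<le> \<delta>" using Suc.prems by auto
  have split: "exp (c * (\<Sum>j<Suc m. b j \<omega> * (W (g (Suc j)) \<omega> - W (g j) \<omega>)))
      = exp (c * S \<omega>) * exp (c * b m \<omega> * (W (g (Suc m)) \<omega> - W (g m) \<omega>))" for \<omega>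
    unfolding S_def by (simp add: exp_add[symmetric] algebra_simps)
  have le_exp: "exp (c\<^sup>2 * \<delta>\<^sup>2 * (g m - g 0) / 2) * exp (c\<^sup>2 * \<delta>\<^sup>2 * (g (Suc m) - g m) / 2)
      = exp (c\<^sup>2 * \<delta>\<^sup>2 * (g (Suc m) - g 0) / 2)"
    by (simp add: exp_add[symmetric] algebra_simps add_divide_distrib[symmetric])
  show ?case
  proof (cases "g m < g (Suc m)")
    case False
    then have eq: "g (Suc m) = g m" using gm[of m] by simp
    have "(\<integral>\<^sup>+\<omega>. ennreal (exp (c * (\<Sum>j<Suc m. b j \<omega> * (W (g (Suc j)) \<omega> - W (g j) \<omega>)))) \<partial>M)
        = (\<integral>\<^sup>+\<omega>. ennreal (exp (c * S \<omega>)) \<partial>M)" unfolding split eq by simp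
    then show ?thesis using IH eq by simp
  next
    case True
    have Ym: "(\<lambda>\<omega>. exp (c * S \<omega>)) \<in> borel_measurable (F (g m))" using Sm by measurable
    have Bm: "(\<lambda>\<omega>. c * b m \<omega>) \<in> borel_measurable (F (g m))" using b_adapted[of m] by measurable
    have Ym': "(\<lambda>\<omega>. exp (c * S \<omega>)) \<in> borel_measurable M" using measurable_from_filtration[OF Ym] .
    have "(\<integral>\<^sup>+\<omega>. ennreal (exp (c * (\<Sum>j<Suc m. b j \<omega> * (W (g (Suc j)) \<omega> - W (g j) \<omega>)))) \<partial>M)
        = (\<integral>\<^sup>+\<omega>. ennreal (exp (c * S \<omega>)) * ennreal (exp ((c * b m \<omega>) * (W (g (Suc m)) \<omega> - W (g m) \<omega>))) \<partial>M)"
      unfolding split by (simp add: ennreal_mult'')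
    also have "\<dots> = (\<integral>\<^sup>+\<omega>. ennreal (exp (c * S \<omega>)) * ennreal (exp ((c * b m \<omega>)\<^sup>2 * (g (Suc m) - g m) / 2)) \<partial>M)"
      by (rule nn_integral_exp_increment[OF nn True Ym Bm])
    also have "\<dots> \<le> (\<integral>\<^sup>+\<omega>. ennreal (exp (c * S \<omega>)) * ennreal (exp (c\<^sup>2 * \<delta>\<^sup>2 * (g (Suc m) - g m) / 2)) \<partial>M)"
    proof (intro nn_integral_mono_AE, use AEb in eventually_elim)
      case (elim \<omega>)
      have "(b m \<omega>)\<^sup>2 \<le> \<delta>\<^sup>2" using elim by (meson abs_ge_zero abs_le_square_iff order_trans abs_le_D1 power2_abs power_mono)
      then have "(c * b m \<omega>)\<^sup>2 * (g (Suc m) - g m) / 2 \<le> c\<^sup>2 * \<delta>\<^sup>2 * (g (Suc m) - g m) / 2"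
        using True by (intro divide_right_mono mult_right_mono) (auto simp: power_mult_distrib intro: mult_left_mono)
      then show ?case by (intro mult_left_mono) auto
    qed
    also have "\<dots> = (\<integral>\<^sup>+\<omega>. ennreal (exp (c * S \<omega>)) \<partial>M) * ennreal (exp (c\<^sup>2 * \<delta>\<^sup>2 * (g (Suc m) - g m) / 2))"
      using Ym' by (intro nn_integral_multc) auto
    also have "\<dots> \<le> ennreal (exp (c\<^sup>2 * \<delta>\<^sup>2 * (g m - g 0) / 2)) * ennreal (exp (c\<^sup>2 * \<delta>\<^sup>2 * (g (Suc m) - g m) / 2))"
      using IH by (intro mult_right_mono) auto
    also have "\<dots> = ennreal (exp (c\<^sup>2 * \<delta>\<^sup>2 * (g (Suc m) - g 0) / 2))"
      using le_exp by (simp add: ennreal_mult''[symmetric])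
    finally show ?thesis .
  qed
qed

lemma increment_mgf:
  assumes su: "0 \<le> s" "s \<le> u"
  shows "(\<integral>\<^sup>+\<omega>. ennreal (exp (c * (W u \<omega> - W s \<omega>))) \<partial>M) \<le> ennreal (exp (c\<^sup>2 * (u - s) / 2))"
proof (cases "s < u")
  case True
  have "(\<integral>\<^sup>+\<omega>. ennreal (exp (c * (W u \<omega> - W s \<omega>))) \<partial>M) = (\<integral>\<^sup>+\<omega>. ennreal 1 * ennreal (exp ((\<lambda>_. c) \<omega> * (W u \<omega> - W s \<omega>))) \<partial>M)"
    by simp
  also have "\<dots> = (\<integral>\<^sup>+\<omega>. ennreal 1 * ennreal (exp (((\<lambda>_. c) \<omega>)\<^sup>2 * (u - s) / 2)) \<partial>M)"
    by (rule nn_integral_exp_increment[OF su(1) True]) auto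
  also have "\<dots> = ennreal (exp (c\<^sup>2 * (u - s) / 2))" using P.emeasure_space_1 by simp
  finally show ?thesis by simp
next
  case False
  then have "u = s" using su by simp
  then show ?thesis using P.emeasure_space_1 by simp
qed

lemma abs_increment_mgf:
  assumes su: "0 \<le> s" "s \<le> u" and c: "0 \<le> c"
  shows "(\<integral>\<^sup>+\<omega>. ennreal (exp (c * \<bar>W u \<omega> - W s \<omega>\<bar>)) \<partial>M) \<le> ennreal (2 * exp (c\<^sup>2 * (u - s) / 2))"
proof -
  have m: "(\<lambda>\<omega>. W u \<omega> - W s \<omega>) \<in> borel_measurable M" using W_measurable su by auto
  have "(\<integral>\<^sup>+\<omega>. ennreal (exp (c * \<bar>W u \<omega> - W s \<omega>\<bar>)) \<partial>M)
      \<le> (\<integral>\<^sup>+\<omega>. ennreal (exp (c * (W u \<omega> - W s \<omega>))) + ennreal (exp ((- c) * (W u \<omega> - W s \<omega>))) \<partial>M)"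
    by (intro nn_integral_mono) (simp add: ennreal_plus[symmetric] del: ennreal_plus add: exp_mult_abs_le[of c])
  also have "\<dots> = (\<integral>\<^sup>+\<omega>. ennreal (exp (c * (W u \<omega> - W s \<omega>))) \<partial>M) + (\<integral>\<^sup>+\<omega>. ennreal (exp ((- c) * (W u \<omega> - W s \<omega>))) \<partial>M)"
    using m by (intro nn_integral_add) auto
  also have "\<dots> \<le> ennreal (exp (c\<^sup>2 * (u - s) / 2)) + ennreal (exp ((- c)\<^sup>2 * (u - s) / 2))"
    by (intro add_mono increment_mgf su)
  also have "\<dots> = ennreal (2 * exp (c\<^sup>2 * (u - s) / 2))" by (simp add: ennreal_plus[symmetric] del: ennreal_plus)
  finally show ?thesis .
qed

end

section \<open>The stochastic integral of a Lipschitz adapted integrand\<close>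

definition grid :: "real \<Rightarrow> real \<Rightarrow> nat \<Rightarrow> nat \<Rightarrow> real" where
  "grid t T n k = t + real k * (T - t) / real n"

lemma riemann_sum_grid: "riemann_sum W h t T n \<omega> =
  (\<Sum>k<n. h (grid t T n k) \<omega> * (W (grid t T n (Suc k)) \<omega> - W (grid t T n k) \<omega>))"
  by (simp add: riemann_sum_def grid_def)

lemma grid_0[simp]: "grid t T n 0 = t" by (simp add: grid_def)
lemma grid_n[simp]: "n > 0 \<Longrightarrow> grid t T n n = T" by (simp add: grid_def)
lemma grid_mono: "t \<le> T \<Longrightarrow> k \<le> l \<Longrightarrow> grid t T n k \<le> grid t T n l"
  by (auto simp: grid_def intro!: divide_right_mono mult_right_mono)
lemma grid_ge: "t \<le> T \<Longrightarrow> t \<le> grid t T n k" by (auto simp: grid_def)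
lemma grid_le: "t \<le> T \<Longrightarrow> k \<le> n \<Longrightarrow> n > 0 \<Longrightarrow> grid t T n k \<le> T"
proof -
  assume a: "t \<le> T" "k \<le> n" "n > 0"
  have "real k * (T - t) / real n \<le> real n * (T - t) / real n"
    using a by (intro divide_right_mono mult_right_mono) auto
  then show ?thesis using a by (simp add: grid_def)
qed
lemma grid_mult: "m > 0 \<Longrightarrow> grid t T (n * m) (k * m) = grid t T n k"
  by (simp add: grid_def)

lemma grid_div_diff:
  assumes "t \<le> T" "n > 0" "m > 0"
  shows "0 \<le> grid t T (n*m) j - grid t T n (j div m)"
    and "grid t T (n*m) j - grid t T n (j div m) \<le> (T - t) / real n"
proof -
  have j: "real j = real (j div m) * real m + real (j mod m)"
    by (metis div_mult_mod_eq of_nat_add of_nat_mult)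
  have d: "grid t T (n*m) j - grid t T n (j div m) = real (j mod m) * (T - t) / (real n * real m)"
    using assms unfolding grid_def j by (simp add: field_simps)
  have "real (j mod m) \<le> real m" using assms by simp
  then have "real (j mod m) * (T - t) / (real n * real m) \<le> real m * (T - t) / (real n * real m)"
    using assms by (intro divide_right_mono mult_right_mono) auto
  then show "grid t T (n*m) j - grid t T n (j div m) \<le> (T - t) / real n"
    unfolding d using assms by simp
  show "0 \<le> grid t T (n*m) j - grid t T n (j div m)" unfolding d using assms by simp
qed

lemma riemann_sum_refine:
  assumes "n > 0" "m > 0"
  shows "riemann_sum W h t T n \<omega> =
    (\<Sum>j<n*m. h (grid t T n (j div m)) \<omega> * (W (grid t T (n*m) (Suc j)) \<omega> - W (grid t T (n*m) j) \<omega>))"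
proof -
  let ?f = "\<lambda>j. h (grid t T n (j div m)) \<omega> * (W (grid t T (n*m) (Suc j)) \<omega> - W (grid t T (n*m) j) \<omega>)"
  have "(\<Sum>j\<in>{k*m..<k*m+m}. ?f j) = h (grid t T n k) \<omega> * (W (grid t T n (Suc k)) \<omega> - W (grid t T n k) \<omega>)" for k
  proof -
    have "(\<Sum>j\<in>{k*m..<k*m+m}. ?f j) = (\<Sum>j\<in>{k*m..<k*m+m}. h (grid t T n k) \<omega> * (W (grid t T (n*m) (Suc j)) \<omega> - W (grid t T (n*m) j) \<omega>))"
    proof (intro sum.cong refl)
      fix j assume "j \<in> {k*m..<k*m+m}"
      then have "j div m = k" by (intro div_nat_eqI) (auto simp: algebra_simps)
      then show "?f j = h (grid t T n k) \<omega> * (W (grid t T (n*m) (Suc j)) \<omega> - W (grid t T (n*m) j) \<omega>)" by simp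
    qed
    also have "\<dots> = h (grid t T n k) \<omega> * (\<Sum>j\<in>{k*m..<k*m+m}. W (grid t T (n*m) (Suc j)) \<omega> - W (grid t T (n*m) j) \<omega>)"
      by (simp add: sum_distrib_left)
    also have "(\<Sum>j\<in>{k*m..<k*m+m}. W (grid t T (n*m) (Suc j)) \<omega> - W (grid t T (n*m) j) \<omega>)
        = W (grid t T (n*m) (k*m+m)) \<omega> - W (grid t T (n*m) (k*m)) \<omega>"
      by (rule sum_Suc_diff'[where f="\<lambda>j. W (grid t T (n*m) j) \<omega>"]) simp
    also have "grid t T (n*m) (k*m+m) = grid t T n (Suc k)"
      using grid_mult[OF assms(2), of t T n "Suc k"] by (simp add: algebra_simps)
    also have "grid t T (n*m) (k*m) = grid t T n k" using grid_mult[OF assms(2)] .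
    finally show ?thesis .
  qed
  then have "(\<Sum>k<n. \<Sum>j\<in>{k*m..<k*m+m}. ?f j) = riemann_sum W h t T n \<omega>"
    unfolding riemann_sum_grid by simp
  moreover have "(\<Sum>k<n. \<Sum>j\<in>{k*m..<k*m+m}. ?f j) = (\<Sum>j<n*m. ?f j)"
    by (rule sum.nat_group)
  ultimately show ?thesis by simp
qed

lemma riemann_sum_refine_diff:
  assumes "n > 0" "m > 0"
  shows "riemann_sum W h t T n \<omega> - riemann_sum W h t T (n*m) \<omega> =
    (\<Sum>j<n*m. (h (grid t T n (j div m)) \<omega> - h (grid t T (n*m) j) \<omega>) * (W (grid t T (n*m) (Suc j)) \<omega> - W (grid t T (n*m) j) \<omega>))"
  unfolding riemann_sum_refine[OF assms, of W h] riemann_sum_grid[of W h t T "n*m"]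
  by (simp add: sum_subtractf[symmetric] algebra_simps)

lemma riemann_sum_linear:
  assumes "\<forall>s\<in>{t..T}. h s \<omega> = a * h1 s \<omega> + b * h2 s \<omega>" "t \<le> T"
  shows "riemann_sum W h t T n \<omega> = a * riemann_sum W h1 t T n \<omega> + b * riemann_sum W h2 t T n \<omega>"
proof -
  have "riemann_sum W h t T n \<omega> = (\<Sum>k<n. (a * h1 (grid t T n k) \<omega> + b * h2 (grid t T n k) \<omega>) *
        (W (grid t T n (Suc k)) \<omega> - W (grid t T n k) \<omega>))"
    unfolding riemann_sum_grid
  proof (intro sum.cong refl)
    fix k assume "k \<in> {..<n}"
    then have "grid t T n k \<in> {t..T}" using assms(2) grid_ge[of t T n k] grid_le[of t T k n] by auto
    then show "h (grid t T n k) \<omega> * (W (grid t T n (Suc k)) \<omega> - W (grid t T n k) \<omega>) =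
      (a * h1 (grid t T n k) \<omega> + b * h2 (grid t T n k) \<omega>) * (W (grid t T n (Suc k)) \<omega> - W (grid t T n k) \<omega>)"
      using assms(1) by simp
  qed
  also have "\<dots> = a * (\<Sum>k<n. h1 (grid t T n k) \<omega> * (W (grid t T n (Suc k)) \<omega> - W (grid t T n k) \<omega>))
      + b * (\<Sum>k<n. h2 (grid t T n k) \<omega> * (W (grid t T n (Suc k)) \<omega> - W (grid t T n k) \<omega>))"
    by (simp add: sum_distrib_left sum.distrib[symmetric] distrib_right mult.assoc)
  finally show ?thesis unfolding riemann_sum_grid .
qed

locale lipschitz_integrand = brownian +
  fixes h :: "real \<Rightarrow> 'a \<Rightarrow> real" and t T C H :: real
  assumes tT: "0 \<le> t" "t < T" and Cpos: "C > 0"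
    and hm: "\<And>s. s \<in> {t..T} \<Longrightarrow> h s \<in> borel_measurable (F s)"
    and hL: "AE \<omega> in M. \<forall>s\<in>{t..T}. \<forall>s'\<in>{t..T}. \<bar>h s \<omega> - h s' \<omega>\<bar> \<le> C * \<bar>s - s'\<bar>"
    and hB: "AE \<omega> in M. \<forall>s\<in>{t..T}. \<bar>h s \<omega>\<bar> \<le> H"
begin

abbreviation RS where "RS n \<equiv> riemann_sum W h t T n"

definition \<kappa> where "\<kappa> = 2 * C\<^sup>2 * (T - t) ^ 3"

lemma kappa_pos: "\<kappa> > 0" using tT Cpos by (simp add: \<kappa>_def)

lemma tleT: "t \<le> T" using tT by simp

lemma grid_in: "k \<le> n \<Longrightarrow> n > 0 \<Longrightarrow> grid t T n k \<in> {t..T}"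
  using grid_ge[OF tleT] grid_le[OF tleT] by auto

lemma grid_nn: "0 \<le> grid t T n k" using grid_ge[OF tleT, of n k] tT by simp

lemma riemann_sum_measurable[measurable]: "RS n \<in> borel_measurable M"
proof -
  have "(\<lambda>\<omega>. h (grid t T n k) \<omega> * (W (grid t T n (Suc k)) \<omega> - W (grid t T n k) \<omega>)) \<in> borel_measurable M"
    if "k < n" for k
  proof -
    have "h (grid t T n k) \<in> borel_measurable M" using measurable_from_filtration[OF hm[OF grid_in]] that by simp
    moreover have "W (grid t T n (Suc k)) \<in> borel_measurable M" "W (grid t T n k) \<in> borel_measurable M"
      using W_measurable[OF grid_nn] by auto
    ultimately show ?thesis by measurable
  qed
  then show ?thesis unfolding riemann_sum_grid by (intro borel_measurable_sum) auto
qed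

lemma riemann_sum_mgf:
  assumes n: "n > 0"
  shows "(\<integral>\<^sup>+\<omega>. ennreal (exp (c * RS n \<omega>)) \<partial>M) \<le> ennreal (exp (c\<^sup>2 * H\<^sup>2 * (T - t) / 2))"
proof -
  define b where "b = (\<lambda>k. if k < n then h (grid t T n k) else (\<lambda>_. 0))"
  have "(\<integral>\<^sup>+\<omega>. ennreal (exp (c * RS n \<omega>)) \<partial>M)
      = (\<integral>\<^sup>+\<omega>. ennreal (exp (c * (\<Sum>k<n. b k \<omega> * (W (grid t T n (Suc k)) \<omega> - W (grid t T n k) \<omega>)))) \<partial>M)"
    unfolding riemann_sum_grid b_def by simp
  also have "\<dots> \<le> ennreal (exp (c\<^sup>2 * H\<^sup>2 * (grid t T n n - grid t T n 0) / 2))"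
  proof (rule nn_integral_exp_adapted_sum)
    show "0 \<le> grid t T n 0" using tT by simp
    show "grid t T n j \<le> grid t T n (Suc j)" for j using grid_mono[OF tleT] by simp
    show "b j \<in> borel_measurable (F (grid t T n j))" for j
      unfolding b_def using hm[OF grid_in] by auto
    show "AE \<omega> in M. \<bar>b j \<omega>\<bar> \<le> H" if "j < n" for j
      using hB by eventually_elim (use that grid_in[of j n] in \<open>auto simp: b_def\<close>)
  qed
  finally show ?thesis using n by simp
qed

lemma riemann_sum_refine_diff_mgf:
  assumes n: "n > 0" and m: "m > 0"
  shows "(\<integral>\<^sup>+\<omega>. ennreal (exp (c * (RS n \<omega> - RS (n*m) \<omega>))) \<partial>M)
       \<le> ennreal (exp (c\<^sup>2 * (C * (T - t) / real n)\<^sup>2 * (T - t) / 2))"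
proof -
  define b where "b = (\<lambda>j. if j < n*m then (\<lambda>\<omega>. h (grid t T n (j div m)) \<omega> - h (grid t T (n*m) j) \<omega>) else (\<lambda>_. 0))"
  have nm: "n * m > 0" using n m by simp
  have "(\<integral>\<^sup>+\<omega>. ennreal (exp (c * (RS n \<omega> - RS (n*m) \<omega>))) \<partial>M)
      = (\<integral>\<^sup>+\<omega>. ennreal (exp (c * (\<Sum>j<n*m. b j \<omega> * (W (grid t T (n*m) (Suc j)) \<omega> - W (grid t T (n*m) j) \<omega>)))) \<partial>M)"
    unfolding riemann_sum_refine_diff[OF n m] b_def by simp
  also have "\<dots> \<le> ennreal (exp (c\<^sup>2 * (C * (T - t) / real n)\<^sup>2 * (grid t T (n*m) (n*m) - grid t T (n*m) 0) / 2))"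
  proof (rule nn_integral_exp_adapted_sum)
    show "0 \<le> grid t T (n*m) 0" using tT by simp
    show "grid t T (n*m) j \<le> grid t T (n*m) (Suc j)" for j using grid_mono[OF tleT] by simp
    show "b j \<in> borel_measurable (F (grid t T (n*m) j))" for j
    proof (cases "j < n*m")
      case True
      have jd: "j div m \<le> n" using True m by (simp add: less_mult_imp_div_less less_imp_le)
      have 1: "h (grid t T n (j div m)) \<in> borel_measurable (F (grid t T (n*m) j))"
        using measurable_filtration_mono[OF _ hm[OF grid_in[OF jd n]]] grid_div_diff(1)[OF tleT n m, of j] by simp
      have 2: "h (grid t T (n*m) j) \<in> borel_measurable (F (grid t T (n*m) j))"
        using hm[OF grid_in] True nm by simp
      show ?thesis unfolding b_def using True 1 2 by simp
    qed (simp add: b_def)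
    show "AE \<omega> in M. \<bar>b j \<omega>\<bar> \<le> C * (T - t) / real n" if "j < n*m" for j
      using hL
    proof eventually_elim
      case (elim \<omega>)
      have jd: "j div m \<le> n" using that m by (simp add: less_mult_imp_div_less less_imp_le)
      have "\<bar>h (grid t T n (j div m)) \<omega> - h (grid t T (n*m) j) \<omega>\<bar> \<le> C * \<bar>grid t T n (j div m) - grid t T (n*m) j\<bar>"
        using elim grid_in[OF jd n] grid_in[of j "n*m"] that nm by auto
      also have "\<dots> \<le> C * ((T - t) / real n)"
        using grid_div_diff[OF tleT n m, of j] Cpos by (intro mult_left_mono) auto
      finally show ?case using that by (simp add: b_def)
    qed
  qed
  finally show ?thesis using nm by (simp add: power_divide)
qed

lemma riemann_sum_refine_diff_tail:
  assumes n: "n > 0" and m: "m > 0" and e: "\<epsilon> > 0"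
  shows "emeasure M {\<omega>\<in>space M. \<bar>RS n \<omega> - RS (n*m) \<omega>\<bar> > \<epsilon>} \<le> ennreal (2 * exp (- \<epsilon>\<^sup>2 * (real n)\<^sup>2 / \<kappa>))"
proof -
  define A where "A = (C * (T - t) / real n)\<^sup>2 * (T - t)"
  have A: "A > 0" using n tT Cpos by (simp add: A_def)
  have "emeasure M {\<omega>\<in>space M. \<bar>RS n \<omega> - RS (n*m) \<omega>\<bar> > \<epsilon>} \<le> ennreal (2 * exp (- \<epsilon>\<^sup>2 / (2 * A)))"
  proof (rule chernoff_abs_tail[OF _ A e])
    show "(\<integral>\<^sup>+\<omega>. ennreal (exp (c * (RS n \<omega> - RS (n*m) \<omega>))) \<partial>M) \<le> ennreal (exp (c\<^sup>2 * A / 2))" for c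
      using riemann_sum_refine_diff_mgf[OF n m, of c] unfolding A_def by (simp add: mult.assoc)
  qed measurable
  also have "- \<epsilon>\<^sup>2 / (2 * A) = - \<epsilon>\<^sup>2 * (real n)\<^sup>2 / \<kappa>"
    using n tT Cpos unfolding A_def \<kappa>_def by (simp add: field_simps power2_eq_square power3_eq_cube)
  finally show ?thesis .
qed

definition dyadic_gap where "dyadic_gap k \<omega> = RS (2^k) \<omega> - RS (2^k * 2) \<omega>"
definition dyadic_tol :: "nat \<Rightarrow> real" where "dyadic_tol k = (3/4) ^ k"

lemma dyadic_gap_measurable[measurable]: "dyadic_gap k \<in> borel_measurable M" unfolding dyadic_gap_def by measurable

lemma dyadic_gap_tail: "emeasure M {\<omega>\<in>space M. \<bar>dyadic_gap k \<omega>\<bar> > dyadic_tol k} \<le> ennreal (2 * exp (- (1 / \<kappa>)) ^ k)"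
proof -
  have "emeasure M {\<omega>\<in>space M. \<bar>dyadic_gap k \<omega>\<bar> > dyadic_tol k} \<le> ennreal (2 * exp (- (dyadic_tol k)\<^sup>2 * (real (2^k))\<^sup>2 / \<kappa>))"
    unfolding dyadic_gap_def by (rule riemann_sum_refine_diff_tail) (auto simp: dyadic_tol_def)
  also have "\<dots> \<le> ennreal (2 * exp (- (1 / \<kappa>)) ^ k)"
  proof -
    have "(dyadic_tol k)\<^sup>2 * (real (2^k))\<^sup>2 = ((3/4)^k * 2^k)\<^sup>2" by (simp add: dyadic_tol_def power_mult_distrib)
    also have "(3/4::real)^k * 2^k = (3/2)^k" by (simp add: power_mult_distrib[symmetric])
    also have "((3/2::real)^k)\<^sup>2 = (9/4)^k" by (simp add: power2_eq_square power_mult_distrib[symmetric])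
    finally have "(dyadic_tol k)\<^sup>2 * (real (2^k))\<^sup>2 = (9/4) ^ k" .
    moreover have "real k \<le> (9/4) ^ k"
    proof -
      have "1 + real k * (5/4) \<le> (1 + 5/4) ^ k" by (rule Bernoulli_inequality) simp
      then show ?thesis by simp
    qed
    ultimately have "real k \<le> (dyadic_tol k)\<^sup>2 * (real (2^k))\<^sup>2" by simp
    then have "- (dyadic_tol k)\<^sup>2 * (real (2^k))\<^sup>2 / \<kappa> \<le> real k * (- (1 / \<kappa>))"
      using kappa_pos by (simp add: field_simps)
    then have "exp (- (dyadic_tol k)\<^sup>2 * (real (2^k))\<^sup>2 / \<kappa>) \<le> exp (- (1 / \<kappa>)) ^ k"
      by (simp add: exp_of_nat_mult[symmetric])
    then show ?thesis by (intro ennreal_leI) simp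
  qed
  finally show ?thesis .
qed

lemma AE_dyadic_gap_eventually_small: "AE \<omega> in M. eventually (\<lambda>k. \<bar>dyadic_gap k \<omega>\<bar> \<le> dyadic_tol k) sequentially"
proof -
  define A where "A k = {\<omega>\<in>space M. \<bar>dyadic_gap k \<omega>\<bar> > dyadic_tol k}" for k
  have Am: "A k \<in> sets M" for k unfolding A_def by measurable
  have q: "exp (- (1 / \<kappa>)) < 1" using kappa_pos by simp
  have "summable (\<lambda>k. measure M (A k))"
  proof (rule summable_comparison_test)
    show "\<exists>N. \<forall>n\<ge>N. norm (measure M (A n)) \<le> 2 * exp (- (1 / \<kappa>)) ^ n"
      using dyadic_gap_tail by (auto simp: A_def intro!: measure_le_of_emeasure_le)
    show "summable (\<lambda>n. 2 * exp (- (1 / \<kappa>)) ^ n)"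
      using q by (intro summable_mult summable_geometric) auto
  qed
  then have "AE \<omega> in M. eventually (\<lambda>k. \<omega> \<in> space M - A k) sequentially"
    using Am by (intro borel_cantelli_AE1) (auto simp: P.emeasure_eq_measure)
  then show ?thesis
    by (rule AE_mp) (auto intro!: AE_I2 elim!: eventually_mono simp: A_def)
qed

definition dyadic_limit where "dyadic_limit \<omega> = lim (\<lambda>k. RS (2^k) \<omega>)"

lemma dyadic_limit_measurable[measurable]: "dyadic_limit \<in> borel_measurable M" unfolding dyadic_limit_def by measurable

lemma AE_dyadic_riemann_sum_tendsto: "AE \<omega> in M. (\<lambda>k. RS (2^k) \<omega>) \<longlonglongrightarrow> dyadic_limit \<omega>"
  using AE_dyadic_gap_eventually_small
proof eventually_elim
  case (elim \<omega>)
  have "summable (\<lambda>k. dyadic_gap k \<omega>)"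
  proof (rule summable_comparison_test_ev)
    show "eventually (\<lambda>k. norm (dyadic_gap k \<omega>) \<le> dyadic_tol k) sequentially" using elim by simp
    show "summable dyadic_tol" unfolding dyadic_tol_def by (rule summable_geometric) simp
  qed
  then have "(\<lambda>k. RS 1 \<omega> - (\<Sum>i<k. dyadic_gap i \<omega>)) \<longlonglongrightarrow> RS 1 \<omega> - (\<Sum>i. dyadic_gap i \<omega>)"
    by (intro tendsto_diff tendsto_const summable_LIMSEQ)
  moreover have "RS 1 \<omega> - (\<Sum>i<k. dyadic_gap i \<omega>) = RS (2^k) \<omega>" for k
  proof -
    have "(\<Sum>i<k. RS (2^Suc i) \<omega> - RS (2^i) \<omega>) = RS (2^k) \<omega> - RS (2^0) \<omega>"
      by (rule sum_lessThan_telescope)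
    then show ?thesis unfolding dyadic_gap_def by (simp add: sum_subtractf mult.commute)
  qed
  ultimately have "convergent (\<lambda>k. RS (2^k) \<omega>)" unfolding convergent_def by auto
  then show ?case unfolding dyadic_limit_def by (simp add: convergent_LIMSEQ_iff)
qed

lemma riemann_sum_dyadic_diff_tail:
  assumes n: "n > 0" and e: "\<epsilon> > 0" and nk: "n \<le> k"
  shows "emeasure M {\<omega>\<in>space M. \<bar>RS n \<omega> - RS (2^k) \<omega>\<bar> > \<epsilon>} \<le> ennreal (4 * exp (- (\<epsilon>/2)\<^sup>2 * (real n)\<^sup>2 / \<kappa>))"
proof -
  have "n < 2^n" by (rule less_exp)
  also have "(2::nat)^n \<le> 2^k" using nk by (intro power_increasing) auto
  finally have nk2: "real n \<le> real (2^k)" by simp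
  have k0: "(2::nat)^k > 0" by simp
  have eq: "RS (2^k * n) = RS (n * 2^k)" by (simp add: mult.commute)
  have tri: "\<epsilon>/2 < \<bar>a - c\<bar> \<or> \<epsilon>/2 < \<bar>b - c\<bar>" if "\<epsilon> < \<bar>a - b\<bar>" for a b c :: real
    using that by arith
  have "{\<omega>\<in>space M. \<bar>RS n \<omega> - RS (2^k) \<omega>\<bar> > \<epsilon>} \<subseteq> {\<omega>\<in>space M. \<bar>RS n \<omega> - RS (n * 2^k) \<omega>\<bar> > \<epsilon>/2} \<union> {\<omega>\<in>space M. \<bar>RS (2^k) \<omega> - RS (2^k * n) \<omega>\<bar> > \<epsilon>/2}"
    unfolding eq using tri by blast
  then have "emeasure M {\<omega>\<in>space M. \<bar>RS n \<omega> - RS (2^k) \<omega>\<bar> > \<epsilon>} \<le> emeasure M ({\<omega>\<in>space M. \<bar>RS n \<omega> - RS (n * 2^k) \<omega>\<bar> > \<epsilon>/2} \<union> {\<omega>\<in>space M. \<bar>RS (2^k) \<omega> - RS (2^k * n) \<omega>\<bar> > \<epsilon>/2})"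
    by (intro emeasure_mono) measurable
  also have "\<dots> \<le> emeasure M {\<omega>\<in>space M. \<bar>RS n \<omega> - RS (n * 2^k) \<omega>\<bar> > \<epsilon>/2} + emeasure M {\<omega>\<in>space M. \<bar>RS (2^k) \<omega> - RS (2^k * n) \<omega>\<bar> > \<epsilon>/2}"
    by (intro emeasure_subadditive) measurable
  also have "\<dots> \<le> ennreal (2 * exp (- (\<epsilon>/2)\<^sup>2 * (real n)\<^sup>2 / \<kappa>)) + ennreal (2 * exp (- (\<epsilon>/2)\<^sup>2 * (real (2^k))\<^sup>2 / \<kappa>))"
    using n e k0 by (intro add_mono riemann_sum_refine_diff_tail) auto
  also have "\<dots> \<le> ennreal (2 * exp (- (\<epsilon>/2)\<^sup>2 * (real n)\<^sup>2 / \<kappa>)) + ennreal (2 * exp (- (\<epsilon>/2)\<^sup>2 * (real n)\<^sup>2 / \<kappa>))"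
  proof -
    have "(real n)\<^sup>2 \<le> (real (2^k))\<^sup>2" using nk2 by (intro power_mono) auto
    then have "(\<epsilon>/2)\<^sup>2 * (real n)\<^sup>2 \<le> (\<epsilon>/2)\<^sup>2 * (real (2^k))\<^sup>2" by (intro mult_left_mono) auto
    then have "- (\<epsilon>/2)\<^sup>2 * (real (2^k))\<^sup>2 / \<kappa> \<le> - (\<epsilon>/2)\<^sup>2 * (real n)\<^sup>2 / \<kappa>"
      using kappa_pos by (intro divide_right_mono) auto
    then show ?thesis by (intro add_mono ennreal_leI) auto
  qed
  also have "\<dots> = ennreal (4 * exp (- (\<epsilon>/2)\<^sup>2 * (real n)\<^sup>2 / \<kappa>))"
    by (simp add: ennreal_plus[symmetric] del: ennreal_plus)
  finally show ?thesis .
qed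

lemma riemann_sum_dyadic_limit_tail:
  assumes n: "n > 0" and e: "\<epsilon> > 0"
  shows "emeasure M {\<omega>\<in>space M. \<bar>RS n \<omega> - dyadic_limit \<omega>\<bar> > \<epsilon>} \<le> ennreal (4 * exp (- (\<epsilon>/2)\<^sup>2 * (real n)\<^sup>2 / \<kappa>))"
proof -
  define B where "B = {\<omega>\<in>space M. \<bar>RS n \<omega> - dyadic_limit \<omega>\<bar> > \<epsilon>}"
  define A where "A k = {\<omega>\<in>space M. \<bar>RS n \<omega> - RS (2^k) \<omega>\<bar> > \<epsilon>}" for k
  have Am: "A k \<in> sets M" for k unfolding A_def by measurable
  have Bm: "B \<in> sets M" unfolding B_def by measurable
  have "emeasure M B = (\<integral>\<^sup>+\<omega>. indicator B \<omega> \<partial>M)" using Bm by simp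
  also have "\<dots> \<le> (\<integral>\<^sup>+\<omega>. liminf (\<lambda>k. indicator (A k) \<omega>) \<partial>M)"
  proof (rule nn_integral_mono_AE)
    show "AE \<omega> in M. indicator B \<omega> \<le> liminf (\<lambda>k. indicator (A k) \<omega> :: ennreal)"
      using AE_dyadic_riemann_sum_tendsto
    proof eventually_elim
      case (elim \<omega>)
      show ?case
      proof (cases "\<omega> \<in> B")
        case True
        then have "\<epsilon> < \<bar>RS n \<omega> - dyadic_limit \<omega>\<bar>" by (auto simp: B_def)
        moreover have "(\<lambda>k. \<bar>RS n \<omega> - RS (2^k) \<omega>\<bar>) \<longlonglongrightarrow> \<bar>RS n \<omega> - dyadic_limit \<omega>\<bar>"
          using elim by (intro tendsto_intros)
        ultimately have "eventually (\<lambda>k. \<epsilon> < \<bar>RS n \<omega> - RS (2^k) \<omega>\<bar>) sequentially"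
          by (simp add: order_tendstoD(1))
        then have "eventually (\<lambda>k. (1::ennreal) \<le> indicator (A k) \<omega>) sequentially"
          by (rule eventually_mono) (use True in \<open>auto simp: A_def B_def\<close>)
        then have "1 \<le> liminf (\<lambda>k. indicator (A k) \<omega> :: ennreal)" by (rule Liminf_bounded)
        then show ?thesis using True by simp
      qed simp
    qed
  qed
  also have "\<dots> \<le> liminf (\<lambda>k. \<integral>\<^sup>+\<omega>. indicator (A k) \<omega> \<partial>M)"
    by (rule nn_integral_liminf) (use Am in auto)
  also have "\<dots> = liminf (\<lambda>k. emeasure M (A k))" using Am by simp
  also have "\<dots> \<le> ennreal (4 * exp (- (\<epsilon>/2)\<^sup>2 * (real n)\<^sup>2 / \<kappa>))"
  proof (rule Liminf_le)
    show "sequentially \<noteq> bot" by simp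
    show "eventually (\<lambda>k. emeasure M (A k) \<le> ennreal (4 * exp (- (\<epsilon>/2)\<^sup>2 * (real n)\<^sup>2 / \<kappa>))) sequentially"
      unfolding A_def by (rule eventually_sequentiallyI[of n]) (rule riemann_sum_dyadic_diff_tail[OF n e])
  qed
  finally show ?thesis unfolding B_def .
qed

lemma riemann_sum_tendsto_in_probability:
  "converges_in_measure M RS dyadic_limit"
  unfolding converges_in_measure_def
proof (intro allI impI)
  fix \<epsilon> :: real assume e: "\<epsilon> > 0"
  show "(\<lambda>n. measure M {\<omega>\<in>space M. \<bar>RS n \<omega> - dyadic_limit \<omega>\<bar> > \<epsilon>}) \<longlonglongrightarrow> 0"
  proof (rule tendsto_sandwich[of "\<lambda>_. 0" _ _ "\<lambda>n. 4 * exp (- (\<epsilon>/2)\<^sup>2 * (real n)\<^sup>2 / \<kappa>)"])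
    show "eventually (\<lambda>n. 0 \<le> measure M {\<omega>\<in>space M. \<bar>RS n \<omega> - dyadic_limit \<omega>\<bar> > \<epsilon>}) sequentially" by simp
    show "eventually (\<lambda>n. measure M {\<omega>\<in>space M. \<bar>RS n \<omega> - dyadic_limit \<omega>\<bar> > \<epsilon>} \<le> 4 * exp (- (\<epsilon>/2)\<^sup>2 * (real n)\<^sup>2 / \<kappa>)) sequentially"
      using eventually_gt_at_top[of 0]
      by eventually_elim (rule measure_le_of_emeasure_le[OF riemann_sum_dyadic_limit_tail[OF _ e]], auto)
    show "(\<lambda>_. 0) \<longlonglongrightarrow> (0::real)" by simp
    define a where "a = (\<epsilon>/2)\<^sup>2 / \<kappa>"
    have a: "a > 0" using e kappa_pos by (simp add: a_def)
    have "(\<lambda>n. 4 * exp (- a * (real n)\<^sup>2)) \<longlonglongrightarrow> 0" using a by real_asymp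
    moreover have "(\<lambda>n. 4 * exp (- (\<epsilon>/2)\<^sup>2 * (real n)\<^sup>2 / \<kappa>)) = (\<lambda>n. 4 * exp (- a * (real n)\<^sup>2))"
      by (simp add: a_def)
    ultimately show "(\<lambda>n. 4 * exp (- (\<epsilon>/2)\<^sup>2 * (real n)\<^sup>2 / \<kappa>)) \<longlonglongrightarrow> 0" by simp
  qed
qed

lemma dyadic_limit_mgf: "(\<integral>\<^sup>+\<omega>. ennreal (exp (c * dyadic_limit \<omega>)) \<partial>M) \<le> ennreal (exp (c\<^sup>2 * H\<^sup>2 * (T - t) / 2))"
proof -
  have "(\<integral>\<^sup>+\<omega>. ennreal (exp (c * dyadic_limit \<omega>)) \<partial>M) = (\<integral>\<^sup>+\<omega>. liminf (\<lambda>k. ennreal (exp (c * RS (2^k) \<omega>))) \<partial>M)"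
  proof (rule nn_integral_cong_AE)
    show "AE \<omega> in M. ennreal (exp (c * dyadic_limit \<omega>)) = liminf (\<lambda>k. ennreal (exp (c * RS (2^k) \<omega>)))"
      using AE_dyadic_riemann_sum_tendsto
    proof eventually_elim
      case (elim \<omega>)
      have "(\<lambda>k. ennreal (exp (c * RS (2^k) \<omega>))) \<longlonglongrightarrow> ennreal (exp (c * dyadic_limit \<omega>))"
        using elim by (intro tendsto_ennrealI tendsto_intros)
      then show ?case using lim_imp_Liminf[OF trivial_limit_sequentially] by metis
    qed
  qed
  also have "\<dots> \<le> liminf (\<lambda>k. \<integral>\<^sup>+\<omega>. ennreal (exp (c * RS (2^k) \<omega>)) \<partial>M)"
    by (rule nn_integral_liminf) measurable
  also have "\<dots> \<le> ennreal (exp (c\<^sup>2 * H\<^sup>2 * (T - t) / 2))"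
    by (intro Liminf_le always_eventually allI riemann_sum_mgf) auto
  finally show ?thesis .
qed

lemma stoch_int_converges_in_measure:
  "stoch_int M W h t T \<in> borel_measurable M"
  "converges_in_measure M RS (stoch_int M W h t T)"
  using stoch_int_converges[OF dyadic_limit_measurable riemann_sum_tendsto_in_probability] by auto

lemma stoch_int_eq_dyadic_limit: "AE \<omega> in M. stoch_int M W h t T \<omega> = dyadic_limit \<omega>"
  by (rule P.converges_in_measure_unique[OF _ _ _ stoch_int_converges_in_measure(2)
        riemann_sum_tendsto_in_probability]) (auto intro: stoch_int_converges_in_measure(1))

lemma SI_meas[measurable]: "stoch_int M W h t T \<in> borel_measurable M"
  by (rule stoch_int_converges_in_measure(1))

lemma SI_mgf: "(\<integral>\<^sup>+\<omega>. ennreal (exp (c * stoch_int M W h t T \<omega>)) \<partial>M) \<le> ennreal (exp (c\<^sup>2 * H\<^sup>2 * (T - t) / 2))"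
proof -
  have "(\<integral>\<^sup>+\<omega>. ennreal (exp (c * stoch_int M W h t T \<omega>)) \<partial>M) = (\<integral>\<^sup>+\<omega>. ennreal (exp (c * dyadic_limit \<omega>)) \<partial>M)"
    using stoch_int_eq_dyadic_limit by (intro nn_integral_cong_AE) auto
  then show ?thesis using dyadic_limit_mgf by simp
qed

end

section \<open>Progressive controls\<close>

context brownian begin

lemma stoch_int_degenerate:
  "stoch_int M W h T T \<in> borel_measurable M" "AE \<omega> in M. stoch_int M W h T T \<omega> = 0"
proof -
  have RS0: "riemann_sum W h T T = (\<lambda>_ _. 0)" by (simp add: riemann_sum_def fun_eq_iff)
  have "converges_in_measure M (riemann_sum W h T T) (\<lambda>_. 0)"
    unfolding RS0 converges_in_measure_def by simp
  note conv = stoch_int_converges[OF _ this]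
  show "stoch_int M W h T T \<in> borel_measurable M" by (rule conv(1)) simp
  show "AE \<omega> in M. stoch_int M W h T T \<omega> = 0"
    by (rule P.converges_in_measure_unique[OF _ _ _ conv(2)]) (auto simp: RS0 conv converges_in_measure_def)
qed

lemma measurable_pair_from_filtration: "g \<in> borel_measurable (F s \<Otimes>\<^sub>M lborel) \<Longrightarrow> g \<in> borel_measurable (M \<Otimes>\<^sub>M lborel)"
proof -
  assume g: "g \<in> borel_measurable (F s \<Otimes>\<^sub>M lborel)"
  have "(\<lambda>z. (fst z, snd z)) \<in> measurable (M \<Otimes>\<^sub>M lborel) (F s \<Otimes>\<^sub>M lborel)"
    by (intro measurable_Pair measurable_comp[OF measurable_fst measurable_id_filtration[of s], simplified o_def] measurable_snd)
  from measurable_comp[OF this g] show ?thesis by (simp add: o_def)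
qed

lemma progressive_indicator_measurable:
  assumes pv: "progressive F t T v" and s: "s \<in> {t..T}"
  shows "(\<lambda>z. indicator {t..s} (snd z) * v (snd z) (fst z)) \<in> borel_measurable (F s \<Otimes>\<^sub>M lborel)"
proof -
  have "(\<lambda>z. v (fst z) (snd z)) \<in> borel_measurable (restrict_space borel {t..s} \<Otimes>\<^sub>M F s)"
    using pv s unfolding progressive_def by auto
  from measurable_indicator_swap_restrict[OF this] show ?thesis by simp
qed

lemma progressive_indicator_measurable_M:
  assumes pv: "progressive F t T v" and s: "s \<in> {t..T}"
  shows "(\<lambda>z. indicator {t..s} (snd z) * v (snd z) (fst z)) \<in> borel_measurable (M \<Otimes>\<^sub>M lborel)"
  using measurable_pair_from_filtration[OF progressive_indicator_measurable[OF pv s]] .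

lemma q_proc_adapted:
  assumes pv: "progressive F t T v" and s: "s \<in> {t..T}"
  shows "(\<lambda>\<omega>. q_proc t q v s \<omega>) \<in> borel_measurable (F s)"
proof -
  have "(\<lambda>(\<omega>, u). indicator {t..s} u * v u \<omega>) \<in> borel_measurable (F s \<Otimes>\<^sub>M lborel)"
    using progressive_indicator_measurable[OF pv s] by (simp add: case_prod_beta')
  then have "(\<lambda>\<omega>. \<integral>u. indicator {t..s} u * v u \<omega> \<partial>lborel) \<in> borel_measurable (F s)"
    by (rule lborel.borel_measurable_lebesgue_integral)
  then show ?thesis unfolding q_proc_def set_lebesgue_integral_def by simp
qed

definition q_proc_joint :: "real \<Rightarrow> real \<Rightarrow> real \<Rightarrow> (real \<Rightarrow> 'a \<Rightarrow> real) \<Rightarrow> 'a \<times> real \<Rightarrow> real" where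
  "q_proc_joint t T q v z = q + (\<integral>u. indicator {t..T} u * v u (fst z) * indicator {..snd z} u \<partial>lborel)"

lemma q_proc_joint_eq: 
  assumes s: "s \<in> {t..T}" shows "q_proc_joint t T q v (\<omega>, s) = q_proc t q v s \<omega>"
proof -
  have eq: "(\<lambda>u. indicator {t..T} u * v u \<omega> * indicator {..s} u) = (\<lambda>u. indicator {t..s} u *\<^sub>R (v u \<omega> :: real))"
    using s by (auto simp: indicator_def fun_eq_iff)
  show ?thesis unfolding q_proc_joint_def q_proc_def set_lebesgue_integral_def fst_conv snd_conv eq ..
qed

lemma q_proc_joint_measurable:
  assumes pv: "progressive F t T v" and tT: "t \<le> T"
  shows "q_proc_joint t T q v \<in> borel_measurable (M \<Otimes>\<^sub>M lborel)"
proof -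
  have a: "(\<lambda>z. indicator {t..T} (snd z) * v (snd z) (fst z)) \<in> borel_measurable (M \<Otimes>\<^sub>M lborel)"
    using progressive_indicator_measurable_M[OF pv] tT by auto
  have b: "(\<lambda>z::('a \<times> real) \<times> real. (fst (fst z), snd z)) \<in> measurable ((M \<Otimes>\<^sub>M lborel) \<Otimes>\<^sub>M lborel) (M \<Otimes>\<^sub>M lborel)"
    by measurable
  have c: "(\<lambda>z::('a \<times> real) \<times> real. indicator {t..T} (snd z) * v (snd z) (fst (fst z))) \<in> borel_measurable ((M \<Otimes>\<^sub>M lborel) \<Otimes>\<^sub>M lborel)"
    using measurable_comp[OF b a] by (simp add: o_def)
  have d: "(\<lambda>z::('a \<times> real) \<times> real. indicator {..snd (fst z)} (snd z) :: real) \<in> borel_measurable ((M \<Otimes>\<^sub>M lborel) \<Otimes>\<^sub>M lborel)"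
  proof -
    have "(\<lambda>z::('a \<times> real) \<times> real. if snd z \<le> snd (fst z) then 1 else 0 :: real) \<in> borel_measurable ((M \<Otimes>\<^sub>M lborel) \<Otimes>\<^sub>M lborel)"
      by measurable
    then show ?thesis by (simp add: indicator_def atMost_def)
  qed
  have "(\<lambda>(z, u). indicator {t..T} u * v u (fst z) * indicator {..snd z} u) \<in> borel_measurable ((M \<Otimes>\<^sub>M lborel) \<Otimes>\<^sub>M lborel)"
    using borel_measurable_times[OF c d] by (simp add: case_prod_beta')
  then have "(\<lambda>z. \<integral>u. indicator {t..T} u * v u (fst z) * indicator {..snd z} u \<partial>lborel) \<in> borel_measurable (M \<Otimes>\<^sub>M lborel)"
    by (rule lborel.borel_measurable_lebesgue_integral)
  then show ?thesis unfolding q_proc_joint_def by measurable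
qed

lemma W_joint_measurable: "(\<lambda>z. W (max 0 (snd z)) (fst z)) \<in> borel_measurable (M \<Otimes>\<^sub>M lborel)"
proof (rule borel_measurable_LIMSEQ_real)
  define a where "a n s = max 0 (real_of_int \<lceil>real (Suc n) * s\<rceil> / real (Suc n))" for n s
  show "(\<lambda>z::'a \<times> real. W (a n (snd z)) (fst z)) \<in> borel_measurable (M \<Otimes>\<^sub>M lborel)" for n
  proof -
    have g: "(\<lambda>z::'a \<times> real. \<lceil>real (Suc n) * snd z\<rceil>) \<in> measurable (M \<Otimes>\<^sub>M lborel) (count_space UNIV)"
      using measurable_comp[OF _ measurable_real_ceiling, of "\<lambda>z::'a \<times> real. real (Suc n) * snd z"]
      by (simp add: o_def)
    have "(\<lambda>z. (\<lambda>i. W (max 0 (real_of_int i / real (Suc n))) (fst z)) \<lceil>real (Suc n) * snd z\<rceil> ) \<in> borel_measurable (M \<Otimes>\<^sub>M lborel)"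
      by (rule measurable_compose_countable'[OF _ g]) (auto intro!: measurable_comp[OF measurable_fst W_measurable, simplified o_def])
    then show ?thesis by (simp add: a_def)
  qed
  fix z :: "'a \<times> real" assume z: "z \<in> space (M \<Otimes>\<^sub>M lborel)"
  have cont: "continuous_on {0..} (\<lambda>s. W s (fst z))" using z bm_cont by (auto simp: space_pair_measure)
  have lim: "(\<lambda>n. a n (snd z)) \<longlonglongrightarrow> max 0 (snd z)"
  proof -
    have "(\<lambda>n. real_of_int \<lceil>real (Suc n) * snd z\<rceil> / real (Suc n)) \<longlonglongrightarrow> snd z"
    proof (rule tendsto_sandwich[of "\<lambda>_. snd z" _ _ "\<lambda>n. snd z + 1 / real (Suc n)"])
      show "\<forall>\<^sub>F n in sequentially. snd z \<le> real_of_int \<lceil>real (Suc n) * snd z\<rceil> / real (Suc n)"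
        by (auto simp: field_simps)
      show "\<forall>\<^sub>F n in sequentially. real_of_int \<lceil>real (Suc n) * snd z\<rceil> / real (Suc n) \<le> snd z + 1 / real (Suc n)"
      proof (intro always_eventually allI)
        fix n
        have "real_of_int \<lceil>real (Suc n) * snd z\<rceil> \<le> real (Suc n) * snd z + 1" by linarith
        then show "real_of_int \<lceil>real (Suc n) * snd z\<rceil> / real (Suc n) \<le> snd z + 1 / real (Suc n)"
          by (simp add: field_simps del: of_nat_Suc)
      qed
      show "(\<lambda>n. snd z) \<longlonglongrightarrow> snd z" by simp
      have "(\<lambda>n. 1 / real (Suc n)) \<longlonglongrightarrow> 0" by real_asymp
      from tendsto_add[OF tendsto_const[of "snd z"] this]
      show "(\<lambda>n. snd z + 1 / real (Suc n)) \<longlonglongrightarrow> snd z" by simp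
    qed
    then show ?thesis unfolding a_def by (intro tendsto_max tendsto_const)
  qed
  show "(\<lambda>n. W (a n (snd z)) (fst z)) \<longlonglongrightarrow> W (max 0 (snd z)) (fst z)"
    by (rule continuous_on_tendsto_compose[OF cont lim]) (auto simp: a_def)
qed

end

section \<open>The hedging problem\<close>

locale hedging_problem = brownian M F W for M :: "'a measure" and F W +
  fixes T \<mu> r \<sigma> \<gamma> rhom N K :: real and V L ell :: "real \<Rightarrow> real"
    and Pay :: "real \<Rightarrow> real \<Rightarrow> real" and t S B0 :: real
  assumes t_in: "0 \<le> t" "t \<le> T" and sigma_pos: "\<sigma> > 0" and gamma_pos: "\<gamma> > 0"
    and rho_pos: "rhom > 0" and N_pos: "N > 0"
    and V_meas: "V \<in> borel_measurable (restrict_space borel {0..T})"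
    and V_nonneg: "\<forall>s\<in>{0..T}. 0 \<le> V s"
    and V_bdd: "\<forall>s\<in>{0..T}. V s \<le> B0" and B0: "0 \<le> B0"
    and L_nonneg: "\<forall>x. 0 \<le> L x"
    and L_cont: "continuous_on UNIV L"
    and L_even: "\<forall>x. L (- x) = L x"
    and L_conv: "convex_on UNIV L"
    and L_mono: "mono_on {0..} L"
    and l_nonneg: "\<forall>x. 0 \<le> ell x"
    and l_convex: "convex_on UNIV ell"
    and l_even: "\<forall>x. ell (- x) = ell x"
    and l_mono: "mono_on {0..} ell"
    and Pi_def:
      "(\<forall>q S. Pay q S = N * max (S - K) 0 + (if S \<ge> K then ell \<bar>N - q\<bar> else 0)
                                        + (if S < K then ell \<bar>q\<bar> else 0))
       \<or> (\<forall>q S. Pay q S = N * max (S - K) 0 + ell \<bar>q\<bar>)"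
begin

abbreviation adm where "adm \<equiv> admissible M F T V rhom t"

definition q_bound :: "real \<Rightarrow> real" where "q_bound q = \<bar>q\<bar> + rhom * B0 * (T - t)"
definition disc :: real where "disc = exp (\<bar>r\<bar> * (T - t))"

definition integrand where "integrand q v = (\<lambda>s \<omega>'. exp (- r * (s - t)) * q_proc t q v s \<omega>' * \<sigma>)"

definition good_path where "good_path v \<omega> \<longleftrightarrow> \<omega> \<in> space M \<and> (AE u in lborel. u \<in> {t<..<T} \<longrightarrow> \<bar>v u \<omega>\<bar> \<le> rhom * V u)"

definition control_mix where "control_mix a v1 v2 = (\<lambda>u \<omega>. a * v1 u \<omega> + (1 - a) * v2 u \<omega>)"

lemma q_bound_nonneg: "0 \<le> q_bound q" using t_in rho_pos B0 by (simp add: q_bound_def)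
lemma disc_ge_1: "1 \<le> disc" using t_in by (simp add: disc_def)
lemma exp_le_disc: "s \<in> {t..T} \<Longrightarrow> exp (- r * (s - t)) \<le> disc"
proof -
  assume s: "s \<in> {t..T}"
  have "- r * (s - t) \<le> \<bar>r\<bar> * (s - t)" using s by (intro mult_right_mono) auto
  also have "\<dots> \<le> \<bar>r\<bar> * (T - t)" using s by (intro mult_left_mono) auto
  finally show ?thesis unfolding disc_def by simp
qed

lemma admissible_progressive: "v \<in> adm \<Longrightarrow> progressive F t T v" unfolding admissible_def by simp

lemma admissible_AE_good_path: "v \<in> adm \<Longrightarrow> AE \<omega> in M. good_path v \<omega>"
proof -
  assume v: "v \<in> adm"
  have sf1: "sigma_finite_measure (restrict_space lborel {t<..<T})"
    by (rule sigma_finite_measure_restrict_space[OF lborel.sigma_finite_measure_axioms]) simp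
  have sf2: "sigma_finite_measure M" using bm_prob by (rule prob_space_imp_sigma_finite)
  have "AE z in restrict_space lborel {t<..<T} \<Otimes>\<^sub>M M. \<bar>v (fst z) (snd z)\<bar> \<le> rhom * V (fst z)"
    using v unfolding admissible_def by simp
  from AE_pair_swap[OF sf1 sf2 this]
  have "AE \<omega> in M. AE u in restrict_space lborel {t<..<T}. \<bar>v u \<omega>\<bar> \<le> rhom * V u" by simp
  then show ?thesis
    by (rule AE_mp) (auto intro!: AE_I2 simp: good_path_def AE_restrict_space_iff)
qed

lemma admissible_path_measurable:
  assumes v: "v \<in> adm" and \<omega>: "\<omega> \<in> space M"
  shows "(\<lambda>u. indicator {t..T} u * v u \<omega>) \<in> borel_measurable lborel"
  using measurable_Pair2[OF progressive_indicator_measurable_M[OF admissible_progressive[OF v], of T] \<omega>] t_in by simp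

lemma good_path_bound:
  assumes g: "good_path v \<omega>"
  shows "AE u in lborel. \<bar>indicator {t..T} u * v u \<omega>\<bar> \<le> rhom * B0 * indicator {t..T} u"
  using conjunct2[OF g[unfolded good_path_def]] AE_lborel_singleton[of t] AE_lborel_singleton[of T]
proof eventually_elim
  case (elim u)
  show ?case
  proof (cases "u \<in> {t..T}")
    case True
    then have u: "u \<in> {t<..<T}" using elim by auto
    have "\<bar>v u \<omega>\<bar> \<le> rhom * V u" using elim u by auto
    also have "\<dots> \<le> rhom * B0" using V_bdd u t_in rho_pos by (intro mult_left_mono) auto
    finally show ?thesis using True by simp
  qed simp
qed

lemma good_path_integrable:
  assumes v: "v \<in> adm" and g: "good_path v \<omega>" and A: "A \<in> sets borel" "A \<subseteq> {t..T}"
  shows "integrable lborel (\<lambda>u. indicator A u * v u \<omega>)"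
    and "\<bar>\<integral>u. indicator A u * v u \<omega> \<partial>lborel\<bar> \<le> rhom * B0 * measure lborel A"
proof -
  have \<omega>: "\<omega> \<in> space M" using g by (simp add: good_path_def)
  have eq: "indicator A u * v u \<omega> = indicator A u * (indicator {t..T} u * v u \<omega>)" for u
    using A by (auto simp: indicator_def)
  have fin: "emeasure lborel A < \<infinity>"
  proof -
    have "emeasure lborel A \<le> emeasure lborel {t..T}" using A by (intro emeasure_mono) auto
    then show ?thesis using t_in by (auto simp: less_top[symmetric] top_unique)
  qed
  have ib: "integrable lborel (\<lambda>u. rhom * B0 * indicator A u)"
    using A fin by (intro integrable_mult_right integrable_real_indicator) auto
  have m: "(\<lambda>u. indicator A u * v u \<omega>) \<in> borel_measurable lborel"
    unfolding eq using admissible_path_measurable[OF v \<omega>] A by measurable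
  have bnd': "AE u in lborel. \<bar>indicator A u * v u \<omega>\<bar> \<le> rhom * B0 * indicator A u"
    using good_path_bound[OF g]
  proof eventually_elim
    case (elim u)
    then show ?case using A rho_pos B0 by (auto simp: indicator_def split: if_splits)
  qed
  have bnd: "AE u in lborel. norm (indicator A u * v u \<omega>) \<le> norm (rhom * B0 * indicator A u)"
    using bnd' by eventually_elim (use rho_pos B0 in \<open>auto simp: abs_mult\<close>)
  show dyadic_limit: "integrable lborel (\<lambda>u. indicator A u * v u \<omega>)"
    by (rule Bochner_Integration.integrable_bound[OF ib m bnd])
  have "\<bar>\<integral>u. indicator A u * v u \<omega> \<partial>lborel\<bar> \<le> (\<integral>u. \<bar>indicator A u * v u \<omega>\<bar> \<partial>lborel)"
    by (rule integral_abs_bound)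
  also have "\<dots> \<le> (\<integral>u. rhom * B0 * indicator A u \<partial>lborel)"
    by (rule integral_mono_AE[OF integrable_abs[OF dyadic_limit] ib bnd'])
  also have "\<dots> = rhom * B0 * measure lborel A" using A fin by simp
  finally show "\<bar>\<integral>u. indicator A u * v u \<omega> \<partial>lborel\<bar> \<le> rhom * B0 * measure lborel A" .
qed

lemma q_proc_eq: "q_proc t q v s \<omega> = q + (\<integral>u. indicator {t..s} u * v u \<omega> \<partial>lborel)"
  unfolding q_proc_def set_lebesgue_integral_def by simp

lemma q_proc_bound:
  assumes v: "v \<in> adm" and g: "good_path v \<omega>" and s: "s \<in> {t..T}"
  shows "\<bar>q_proc t q v s \<omega>\<bar> \<le> q_bound q"
proof -
  have "\<bar>\<integral>u. indicator {t..s} u * v u \<omega> \<partial>lborel\<bar> \<le> rhom * B0 * measure lborel {t..s}"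
    using s by (intro good_path_integrable(2)[OF v g]) auto
  also have "\<dots> \<le> rhom * B0 * (T - t)" using s rho_pos B0 by (intro mult_left_mono) auto
  finally show ?thesis unfolding q_proc_eq q_bound_def by linarith
qed

lemma q_proc_lipschitz:
  assumes v: "v \<in> adm" and g: "good_path v \<omega>" and s: "s \<in> {t..T}" "s' \<in> {t..T}"
  shows "\<bar>q_proc t q v s \<omega> - q_proc t q v s' \<omega>\<bar> \<le> rhom * B0 * \<bar>s - s'\<bar>"
proof -
  have main: "\<bar>q_proc t q v b \<omega> - q_proc t q v a \<omega>\<bar> \<le> rhom * B0 * (b - a)"
    if ab: "a \<le> b" "a \<in> {t..T}" "b \<in> {t..T}" for a b
  proof -
    have ia: "integrable lborel (\<lambda>u. indicator {t..a} u * v u \<omega>)" using ab by (intro good_path_integrable(1)[OF v g]) auto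
    have ib: "integrable lborel (\<lambda>u. indicator {t..b} u * v u \<omega>)" using ab by (intro good_path_integrable(1)[OF v g]) auto
    have "q_proc t q v b \<omega> - q_proc t q v a \<omega> = (\<integral>u. indicator {t..b} u * v u \<omega> - indicator {t..a} u * v u \<omega> \<partial>lborel)"
      unfolding q_proc_eq using ia ib by simp
    also have "\<dots> = (\<integral>u. indicator {a<..b} u * v u \<omega> \<partial>lborel)"
      using ab by (intro Bochner_Integration.integral_cong) (auto simp: indicator_def)
    finally have "\<bar>q_proc t q v b \<omega> - q_proc t q v a \<omega>\<bar> = \<bar>\<integral>u. indicator {a<..b} u * v u \<omega> \<partial>lborel\<bar>" by simp
    also have "\<dots> \<le> rhom * B0 * measure lborel {a<..b}" using ab by (intro good_path_integrable(2)[OF v g]) auto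
    also have "\<dots> = rhom * B0 * (b - a)" using ab by simp
    finally show ?thesis .
  qed
  show ?thesis
  proof (cases "s \<le> s'")
    case True
    then show ?thesis using main[of s s'] s by (simp add: abs_minus_commute)
  next
    case False
    then show ?thesis using main[of s' s] s by simp
  qed
qed

lemma q_proc_mix:
  assumes v1: "v1 \<in> adm" and v2: "v2 \<in> adm" and g1: "good_path v1 \<omega>" and g2: "good_path v2 \<omega>" and s: "s \<in> {t..T}"
  shows "q_proc t (a * q1 + (1 - a) * q2) (control_mix a v1 v2) s \<omega> = a * q_proc t q1 v1 s \<omega> + (1 - a) * q_proc t q2 v2 s \<omega>"
proof -
  have i1: "integrable lborel (\<lambda>u. indicator {t..s} u * v1 u \<omega>)" using s by (intro good_path_integrable(1)[OF v1 g1]) auto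
  have i2: "integrable lborel (\<lambda>u. indicator {t..s} u * v2 u \<omega>)" using s by (intro good_path_integrable(1)[OF v2 g2]) auto
  have "(\<integral>u. indicator {t..s} u * control_mix a v1 v2 u \<omega> \<partial>lborel)
      = (\<integral>u. a * (indicator {t..s} u * v1 u \<omega>) + (1 - a) * (indicator {t..s} u * v2 u \<omega>) \<partial>lborel)"
    by (intro Bochner_Integration.integral_cong) (auto simp: control_mix_def algebra_simps)
  also have "\<dots> = a * (\<integral>u. indicator {t..s} u * v1 u \<omega> \<partial>lborel) + (1 - a) * (\<integral>u. indicator {t..s} u * v2 u \<omega> \<partial>lborel)"
    using i1 i2 by simp
  finally show ?thesis unfolding q_proc_eq by (simp add: algebra_simps)
qed

lemma admissible_mix:
  assumes v1: "v1 \<in> adm" and v2: "v2 \<in> adm" and a: "0 \<le> a" "a \<le> 1"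
  shows "control_mix a v1 v2 \<in> adm"
proof -
  have p1: "progressive F t T v1" and p2: "progressive F t T v2" using v1 v2 by (auto intro: admissible_progressive)
  have "progressive F t T (control_mix a v1 v2)"
    unfolding progressive_def control_mix_def
  proof
    fix u assume "u \<in> {t..T}"
    then have m1: "(\<lambda>z. v1 (fst z) (snd z)) \<in> borel_measurable (restrict_space borel {t..u} \<Otimes>\<^sub>M F u)"
      and m2: "(\<lambda>z. v2 (fst z) (snd z)) \<in> borel_measurable (restrict_space borel {t..u} \<Otimes>\<^sub>M F u)"
      using p1 p2 unfolding progressive_def by auto
    show "(\<lambda>z. a * v1 (fst z) (snd z) + (1 - a) * v2 (fst z) (snd z)) \<in> borel_measurable (restrict_space borel {t..u} \<Otimes>\<^sub>M F u)"
      using m1 m2 by measurable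
  qed
  moreover have "AE z in restrict_space lborel {t<..<T} \<Otimes>\<^sub>M M. \<bar>control_mix a v1 v2 (fst z) (snd z)\<bar> \<le> rhom * V (fst z)"
  proof -
    have "AE z in restrict_space lborel {t<..<T} \<Otimes>\<^sub>M M. \<bar>v1 (fst z) (snd z)\<bar> \<le> rhom * V (fst z)"
      "AE z in restrict_space lborel {t<..<T} \<Otimes>\<^sub>M M. \<bar>v2 (fst z) (snd z)\<bar> \<le> rhom * V (fst z)"
      using v1 v2 unfolding admissible_def by auto
    then show ?thesis
    proof eventually_elim
      case (elim z)
      have "\<bar>control_mix a v1 v2 (fst z) (snd z)\<bar> \<le> a * \<bar>v1 (fst z) (snd z)\<bar> + (1 - a) * \<bar>v2 (fst z) (snd z)\<bar>"
        unfolding control_mix_def using a by (auto intro: order_trans[OF abs_triangle_ineq] simp: abs_mult)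
      also have "\<dots> \<le> a * (rhom * V (fst z)) + (1 - a) * (rhom * V (fst z))"
        using elim a by (intro add_mono mult_left_mono) auto
      finally show ?case by (simp add: algebra_simps)
    qed
  qed
  ultimately show ?thesis unfolding admissible_def by simp
qed

lemma admissible_zero: "(\<lambda>u \<omega>. 0) \<in> adm"
proof -
  have "progressive F t T (\<lambda>u \<omega>. 0)" unfolding progressive_def by simp
  moreover have "AE z in restrict_space lborel {t<..<T} \<Otimes>\<^sub>M M. \<bar>0::real\<bar> \<le> rhom * V (fst z)"
  proof (rule AE_I2)
    fix z assume "z \<in> space (restrict_space lborel {t<..<T} \<Otimes>\<^sub>M M)"
    then have "fst z \<in> {t<..<T}" by (auto simp: space_pair_measure space_restrict_space)
    then show "\<bar>0::real\<bar> \<le> rhom * V (fst z)" using V_nonneg t_in rho_pos by auto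
  qed
  ultimately show ?thesis unfolding admissible_def by simp
qed

definition integrand_lipschitz_const where "integrand_lipschitz_const q = \<sigma> * (\<bar>r\<bar> * disc * q_bound q + disc * (rhom * B0)) + 1"
definition integrand_bound where "integrand_bound q = \<sigma> * disc * q_bound q"

lemma abs_discount_diff_le:
  assumes s: "s \<in> {t..T}" and s': "s' \<in> {t..T}"
  shows "\<bar>exp (- r * (s - t)) - exp (- r * (s' - t))\<bar> \<le> (disc * \<bar>r\<bar>) * \<bar>s - s'\<bar>"
proof -
  have "\<bar>exp (- r * (s - t)) - exp (- r * (s' - t))\<bar> \<le> exp (\<bar>r\<bar> * (T - t)) * \<bar>- r * (s - t) - (- r * (s' - t))\<bar>"
  proof (rule abs_exp_diff_le)
    show "- r * (s - t) \<le> \<bar>r\<bar> * (T - t)"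
      using s by (intro order_trans[OF mult_right_mono[of "- r" "\<bar>r\<bar>"]] mult_left_mono) auto
    show "- r * (s' - t) \<le> \<bar>r\<bar> * (T - t)"
      using s' by (intro order_trans[OF mult_right_mono[of "- r" "\<bar>r\<bar>"]] mult_left_mono) auto
  qed
  also have "\<bar>- r * (s - t) - (- r * (s' - t))\<bar> = \<bar>r\<bar> * \<bar>s - s'\<bar>" by (simp add: algebra_simps abs_mult[symmetric])
  finally show ?thesis by (simp add: disc_def mult.assoc)
qed

lemma integrand_lipschitz:
  assumes v: "v \<in> adm" and g: "good_path v \<omega>" and s: "s \<in> {t..T}" and s': "s' \<in> {t..T}"
  shows "\<bar>integrand q v s \<omega> - integrand q v s' \<omega>\<bar> \<le> integrand_lipschitz_const q * \<bar>s - s'\<bar>"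
proof -
  have "\<bar>exp (- r * (s - t)) * q_proc t q v s \<omega> - exp (- r * (s' - t)) * q_proc t q v s' \<omega>\<bar>
      \<le> ((disc * \<bar>r\<bar>) * q_bound q + disc * (rhom * B0)) * \<bar>s - s'\<bar>"
    using disc_ge_1 rho_pos B0 exp_le_disc[OF s']
    by (intro abs_mult_diff_le[OF abs_discount_diff_le[OF s s'] q_proc_bound[OF v g s]
          q_proc_lipschitz[OF v g s s']]) auto
  then have "\<sigma> * \<bar>exp (- r * (s - t)) * q_proc t q v s \<omega> - exp (- r * (s' - t)) * q_proc t q v s' \<omega>\<bar>
      \<le> \<sigma> * (((disc * \<bar>r\<bar>) * q_bound q + disc * (rhom * B0)) * \<bar>s - s'\<bar>)"
    using sigma_pos by (intro mult_left_mono) auto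
  also have "\<dots> \<le> integrand_lipschitz_const q * \<bar>s - s'\<bar>"
    unfolding integrand_lipschitz_const_def by (simp add: algebra_simps)
  finally have "\<sigma> * \<bar>exp (- r * (s - t)) * q_proc t q v s \<omega> - exp (- r * (s' - t)) * q_proc t q v s' \<omega>\<bar>
      \<le> integrand_lipschitz_const q * \<bar>s - s'\<bar>" .
  moreover have "integrand q v s \<omega> - integrand q v s' \<omega>
      = \<sigma> * (exp (- r * (s - t)) * q_proc t q v s \<omega> - exp (- r * (s' - t)) * q_proc t q v s' \<omega>)"
    unfolding integrand_def by (simp add: algebra_simps)
  ultimately show ?thesis using sigma_pos by (simp add: abs_mult)
qed

lemma lipschitz_integrand_integrand:
  assumes tT: "t < T" and v: "v \<in> adm"
  shows "lipschitz_integrand M F W (integrand q v) t T (integrand_lipschitz_const q) (integrand_bound q)"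
proof (unfold_locales)
  show "0 \<le> t" "t < T" using t_in tT by auto
  show "0 < integrand_lipschitz_const q" unfolding integrand_lipschitz_const_def using sigma_pos disc_ge_1 q_bound_nonneg rho_pos B0
    by (intro add_nonneg_pos mult_nonneg_nonneg add_nonneg_nonneg) auto
  show "integrand q v s \<in> borel_measurable (F s)" if "s \<in> {t..T}" for s
    unfolding integrand_def using q_proc_adapted[OF admissible_progressive[OF v] that] by measurable
  show "AE \<omega> in M. \<forall>s\<in>{t..T}. \<forall>s'\<in>{t..T}. \<bar>integrand q v s \<omega> - integrand q v s' \<omega>\<bar> \<le> integrand_lipschitz_const q * \<bar>s - s'\<bar>"
    using admissible_AE_good_path[OF v] by eventually_elim (blast intro: integrand_lipschitz[OF v])
  show "AE \<omega> in M. \<forall>s\<in>{t..T}. \<bar>integrand q v s \<omega>\<bar> \<le> integrand_bound q"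
    using admissible_AE_good_path[OF v]
  proof eventually_elim
    case (elim \<omega>)
    show ?case
    proof
      fix s assume s: "s \<in> {t..T}"
      have "\<bar>integrand q v s \<omega>\<bar> = \<sigma> * (exp (- r * (s - t)) * \<bar>q_proc t q v s \<omega>\<bar>)"
        unfolding integrand_def using sigma_pos by (simp add: abs_mult)
      also have "\<dots> \<le> \<sigma> * (disc * q_bound q)"
        using sigma_pos q_proc_bound[OF v elim s] exp_le_disc[OF s] q_bound_nonneg disc_ge_1
        by (intro mult_left_mono mult_mono) auto
      finally show "\<bar>integrand q v s \<omega>\<bar> \<le> integrand_bound q" by (simp add: integrand_bound_def mult.assoc)
    qed
  qed
qed

abbreviation SI where "SI q v \<equiv> stoch_int M W (integrand q v) t T"

lemma SI_meas[measurable]: "v \<in> adm \<Longrightarrow> SI q v \<in> borel_measurable M"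
proof (cases "t < T")
  case True
  assume v: "v \<in> adm"
  interpret lipschitz_integrand M F W "integrand q v" t T "integrand_lipschitz_const q" "integrand_bound q" by (rule lipschitz_integrand_integrand[OF True v])
  show ?thesis by (rule SI_meas)
next
  case False
  then have "t = T" using t_in by simp
  then show ?thesis using stoch_int_degenerate by simp
qed

lemma SI_mgf: "v \<in> adm \<Longrightarrow> (\<integral>\<^sup>+\<omega>. ennreal (exp (c * SI q v \<omega>)) \<partial>M) \<le> ennreal (exp (c\<^sup>2 * (integrand_bound q)\<^sup>2 * (T - t) / 2))"
proof (cases "t < T")
  case True
  assume v: "v \<in> adm"
  interpret lipschitz_integrand M F W "integrand q v" t T "integrand_lipschitz_const q" "integrand_bound q" by (rule lipschitz_integrand_integrand[OF True v])
  show ?thesis by (rule SI_mgf)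
next
  case False
  then have tT: "t = T" using t_in by simp
  have "(\<integral>\<^sup>+\<omega>. ennreal (exp (c * SI q v \<omega>)) \<partial>M) = (\<integral>\<^sup>+\<omega>. 1 \<partial>M)"
    using stoch_int_degenerate[of "integrand q v"] unfolding tT by (intro nn_integral_cong_AE) auto
  then show ?thesis using tT P.emeasure_space_1 by simp
qed

lemma riemann_sum_integrand_mix:
  assumes v1: "v1 \<in> adm" and v2: "v2 \<in> adm"
  shows "AE \<omega> in M. \<forall>n. riemann_sum W (integrand (a * q1 + (1 - a) * q2) (control_mix a v1 v2)) t T n \<omega>
    = a * riemann_sum W (integrand q1 v1) t T n \<omega> + (1 - a) * riemann_sum W (integrand q2 v2) t T n \<omega>"
  using admissible_AE_good_path[OF v1] admissible_AE_good_path[OF v2]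
proof eventually_elim
  case (elim \<omega>)
  have "integrand (a * q1 + (1 - a) * q2) (control_mix a v1 v2) s \<omega> = a * integrand q1 v1 s \<omega> + (1 - a) * integrand q2 v2 s \<omega>"
    if "s \<in> {t..T}" for s
    unfolding integrand_def q_proc_mix[OF v1 v2 elim that] by (simp add: algebra_simps)
  then show ?case using t_in by (intro allI riemann_sum_linear) auto
qed

lemma SI_mix:
  assumes v1: "v1 \<in> adm" and v2: "v2 \<in> adm" and a: "0 \<le> a" "a \<le> 1"
  shows "AE \<omega> in M. SI (a * q1 + (1 - a) * q2) (control_mix a v1 v2) \<omega> = a * SI q1 v1 \<omega> + (1 - a) * SI q2 v2 \<omega>"
proof (cases "t < T")
  case False
  then have tT: "t = T" using t_in by simp
  have Z: "AE \<omega> in M. stoch_int M W h t T \<omega> = 0" for h using stoch_int_degenerate(2)[of h] tT by simp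
  show ?thesis using Z[of "integrand (a * q1 + (1 - a) * q2) (control_mix a v1 v2)"] Z[of "integrand q1 v1"] Z[of "integrand q2 v2"]
    by eventually_elim simp
next
  case True
  have vm: "control_mix a v1 v2 \<in> adm" by (rule admissible_mix[OF v1 v2 a])
  interpret I1: lipschitz_integrand M F W "integrand q1 v1" t T "integrand_lipschitz_const q1" "integrand_bound q1"
    by (rule lipschitz_integrand_integrand[OF True v1])
  interpret I2: lipschitz_integrand M F W "integrand q2 v2" t T "integrand_lipschitz_const q2" "integrand_bound q2"
    by (rule lipschitz_integrand_integrand[OF True v2])
  interpret Im: lipschitz_integrand M F W "integrand (a * q1 + (1 - a) * q2) (control_mix a v1 v2)" t T
      "integrand_lipschitz_const (a * q1 + (1 - a) * q2)" "integrand_bound (a * q1 + (1 - a) * q2)"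
    by (rule lipschitz_integrand_integrand[OF True vm])
  have conv: "converges_in_measure M (riemann_sum W (integrand (a * q1 + (1 - a) * q2) (control_mix a v1 v2)) t T)
      (\<lambda>\<omega>. a * SI q1 v1 \<omega> + (1 - a) * SI q2 v2 \<omega>)"
    by (rule P.converges_in_measure_convex_comb[OF I1.stoch_int_converges_in_measure(2)
          I2.stoch_int_converges_in_measure(2) _ _ _ _ _ riemann_sum_integrand_mix[OF v1 v2] a])
      (use v1 v2 in measurable)
  show ?thesis
    by (rule P.converges_in_measure_unique[OF _ _ _ Im.stoch_int_converges_in_measure(2) conv])
      (use v1 v2 in measurable)
qed

definition drift_int where "drift_int q v \<omega> = (\<integral>s\<in>{t..T}. exp (- r * (s - t)) * q_proc t q v s \<omega> * (\<mu> - r * S_proc W \<mu> \<sigma> t S s \<omega>) \<partial>lborel)"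
definition cost_int where "cost_int v \<omega> = (\<integral>s\<in>{t..T}. exp (- r * (s - t)) * exec_cost L (V s) (v s \<omega>) \<partial>lborel)"
definition S_T where "S_T \<omega> = S_proc W \<mu> \<sigma> t S T \<omega>"
definition expo where "expo q v \<omega> = - \<gamma> * (exp (r * (T - t)) * (drift_int q v \<omega> + SI q v \<omega> - cost_int v \<omega>) - Pay (q_proc t q v T \<omega>) (S_T \<omega>))"
definition W_abs_int where "W_abs_int \<omega> = (\<integral>s\<in>{t..T}. \<bar>W s \<omega> - W t \<omega>\<bar> \<partial>lborel)"

lemma J_fun_eq: "J_fun M W T \<mu> r \<sigma> \<gamma> V L Pay t q S v = (\<integral>\<omega>. exp (expo q v \<omega>) \<partial>M)"
  unfolding J_fun_def expo_def drift_int_def cost_int_def S_T_def integrand_def by simp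

definition W_pair where "W_pair z = W (max 0 (snd z)) (fst z)"
lemma W_pair_measurable[measurable]: "W_pair \<in> borel_measurable (M \<Otimes>\<^sub>M lborel)"
  unfolding W_pair_def by (rule W_joint_measurable)

lemma W_t_measurable[measurable]: "W t \<in> borel_measurable M" using W_measurable t_in by simp
lemma W_T_measurable[measurable]: "W T \<in> borel_measurable M" using W_measurable t_in by simp

lemma L_measurable[measurable]: "L \<in> borel_measurable borel"
  using L_cont by (rule borel_measurable_continuous_onI)

lemma ell_cont: "continuous_on UNIV ell"
  using convex_on_continuous[OF open_UNIV l_convex] .

lemma ell_measurable[measurable]: "ell \<in> borel_measurable borel"
  using ell_cont by (rule borel_measurable_continuous_onI)

definition V_ext where "V_ext s = (if s \<in> {0..T} then V s else 0)"
lemma V_ext_measurable[measurable]: "V_ext \<in> borel_measurable borel"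
proof -
  have "(\<lambda>s. if s \<in> {0..T} then V s else 0) \<in> borel_measurable borel"
    using V_meas by (subst measurable_restrict_space_iff[symmetric]) auto
  then show ?thesis unfolding V_ext_def .
qed

lemma exec_cost_measurable[measurable]:
  assumes "f \<in> borel_measurable NN" "g \<in> borel_measurable NN"
  shows "(\<lambda>x. exec_cost L (f x) (g x)) \<in> borel_measurable NN"
proof -
  note [measurable] = assms
  show ?thesis unfolding exec_cost_def by measurable
qed

lemma Pay_measurable[measurable]:
  assumes "f \<in> borel_measurable NN" "g \<in> borel_measurable NN"
  shows "(\<lambda>x. Pay (f x) (g x)) \<in> borel_measurable NN"
proof -
  note [measurable] = assms
  from Pi_def show ?thesis
  proof
    assume P: "\<forall>q S. Pay q S = N * max (S - K) 0 + (if S \<ge> K then ell \<bar>N - q\<bar> else 0) + (if S < K then ell \<bar>q\<bar> else 0)"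
    show ?thesis unfolding P[rule_format] by measurable
  next
    assume P: "\<forall>q S. Pay q S = N * max (S - K) 0 + ell \<bar>q\<bar>"
    show ?thesis unfolding P[rule_format] by measurable
  qed
qed

lemma drift_int_measurable[measurable]:
  assumes v: "v \<in> adm" shows "drift_int q v \<in> borel_measurable M"
proof -
  note [measurable] = q_proc_joint_measurable[OF admissible_progressive[OF v] t_in(2)]
  define f where "f z = indicator {t..T} (snd z) * (exp (- r * (snd z - t)) * q_proc_joint t T q v z * (\<mu> - r * (S + \<mu> * (snd z - t) + \<sigma> * (W_pair z - W t (fst z)))))" for z
  have fm: "(\<lambda>(x, y). f (x, y)) \<in> borel_measurable (M \<Otimes>\<^sub>M lborel)" unfolding f_def by measurable
  have "(\<lambda>\<omega>. \<integral>s. f (\<omega>, s) \<partial>lborel) \<in> borel_measurable M"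
    by (rule lborel.borel_measurable_lebesgue_integral[OF fm])
  moreover have "drift_int q v \<omega> = (\<integral>s. f (\<omega>, s) \<partial>lborel)" for \<omega>
    unfolding drift_int_def set_lebesgue_integral_def
  proof (intro Bochner_Integration.integral_cong refl)
    fix s
    show "indicator {t..T} s *\<^sub>R (exp (- r * (s - t)) * q_proc t q v s \<omega> * (\<mu> - r * S_proc W \<mu> \<sigma> t S s \<omega>)) = f (\<omega>, s)"
    proof (cases "s \<in> {t..T}")
      case True
      then have "max 0 s = s" using t_in by auto
      then show ?thesis using True by (simp add: f_def q_proc_joint_eq W_pair_def S_proc_def)
    qed (simp add: f_def)
  qed
  ultimately show ?thesis by (metis (no_types, lifting) measurable_cong)
qed

lemma cost_int_measurable[measurable]:
  assumes v: "v \<in> adm" shows "cost_int v \<in> borel_measurable M"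
proof -
  have vm: "(\<lambda>z. indicator {t..T} (snd z) * v (snd z) (fst z)) \<in> borel_measurable (M \<Otimes>\<^sub>M lborel)"
    using progressive_indicator_measurable_M[OF admissible_progressive[OF v], of T] t_in by simp
  define f where "f z = indicator {t..T} (snd z) * (exp (- r * (snd z - t)) * exec_cost L (V_ext (snd z)) (indicator {t..T} (snd z) * v (snd z) (fst z)))" for z
  have fm: "(\<lambda>(x, y). f (x, y)) \<in> borel_measurable (M \<Otimes>\<^sub>M lborel)" unfolding f_def using vm by measurable
  have "(\<lambda>\<omega>. \<integral>s. f (\<omega>, s) \<partial>lborel) \<in> borel_measurable M"
    by (rule lborel.borel_measurable_lebesgue_integral[OF fm])
  moreover have "cost_int v \<omega> = (\<integral>s. f (\<omega>, s) \<partial>lborel)" for \<omega>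
    unfolding cost_int_def set_lebesgue_integral_def
  proof (intro Bochner_Integration.integral_cong refl)
    fix s
    show "indicator {t..T} s *\<^sub>R (exp (- r * (s - t)) * exec_cost L (V s) (v s \<omega>)) = f (\<omega>, s)"
    proof (cases "s \<in> {t..T}")
      case True
      then show ?thesis using t_in by (simp add: f_def V_ext_def)
    qed (simp add: f_def)
  qed
  ultimately show ?thesis by (metis (no_types, lifting) measurable_cong)
qed

lemma W_abs_int_measurable[measurable]: "W_abs_int \<in> borel_measurable M"
proof -
  define f where "f z = indicator {t..T} (snd z) * \<bar>W_pair z - W t (fst z)\<bar>" for z
  have fm: "(\<lambda>(x, y). f (x, y)) \<in> borel_measurable (M \<Otimes>\<^sub>M lborel)" unfolding f_def by measurable
  have "(\<lambda>\<omega>. \<integral>s. f (\<omega>, s) \<partial>lborel) \<in> borel_measurable M"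
    by (rule lborel.borel_measurable_lebesgue_integral[OF fm])
  moreover have "W_abs_int \<omega> = (\<integral>s. f (\<omega>, s) \<partial>lborel)" for \<omega>
    unfolding W_abs_int_def set_lebesgue_integral_def
  proof (intro Bochner_Integration.integral_cong refl)
    fix s
    show "indicator {t..T} s *\<^sub>R \<bar>W s \<omega> - W t \<omega>\<bar> = f (\<omega>, s)"
    proof (cases "s \<in> {t..T}")
      case True
      then have "max 0 s = s" using t_in by auto
      then show ?thesis using True by (simp add: f_def W_pair_def)
    qed (simp add: f_def)
  qed
  ultimately show ?thesis by (metis (no_types, lifting) measurable_cong)
qed

lemma S_T_measurable[measurable]: "S_T \<in> borel_measurable M" unfolding S_T_def S_proc_def by measurable

lemma q_proc_T_measurable[measurable]: "v \<in> adm \<Longrightarrow> (\<lambda>\<omega>. q_proc t q v T \<omega>) \<in> borel_measurable M"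
  using measurable_from_filtration[OF q_proc_adapted[OF admissible_progressive, of v T q]] t_in by auto

lemma expo_measurable[measurable]: "v \<in> adm \<Longrightarrow> expo q v \<in> borel_measurable M"
  unfolding expo_def by measurable

lemma W_continuous_on: "\<omega> \<in> space M \<Longrightarrow> continuous_on {t..T} (\<lambda>s. W s \<omega>)"
  by (rule continuous_on_subset[OF bm_cont]) (use t_in in auto)

lemma q_proc_continuous_on:
  assumes v: "v \<in> adm" and g: "good_path v \<omega>"
  shows "continuous_on {t..T} (\<lambda>s. q_proc t q v s \<omega>)"
proof (rule lipschitz_on_continuous_on)
  show "(rhom * B0)-lipschitz_on {t..T} (\<lambda>s. q_proc t q v s \<omega>)"
    using q_proc_lipschitz[OF v g] rho_pos B0 by (intro lipschitz_onI) (auto simp: dist_real_def)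
qed

definition A0 where "A0 q = disc * q_bound q * (\<bar>\<mu>\<bar> + \<bar>r\<bar> * (\<bar>S\<bar> + \<bar>\<mu>\<bar> * (T - t)))"
definition A1 where "A1 q = disc * q_bound q * \<bar>r\<bar> * \<sigma>"

lemma A_nonneg: "0 \<le> A0 q" "0 \<le> A1 q"
  using disc_ge_1 q_bound_nonneg sigma_pos t_in unfolding A0_def A1_def by auto

lemma W_abs_integrable: "\<omega> \<in> space M \<Longrightarrow> set_integrable lborel {t..T} (\<lambda>s. \<bar>W s \<omega> - W t \<omega>\<bar>)"
  by (intro borel_integrable_atLeastAtMost' continuous_intros W_continuous_on)

lemma W_abs_int_nonneg: "0 \<le> W_abs_int \<omega>"
  unfolding W_abs_int_def set_lebesgue_integral_def by (intro integral_nonneg_AE) (auto simp: indicator_def)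

lemma drift_int_bound:
  assumes v: "v \<in> adm" and g: "good_path v \<omega>"
  shows "\<bar>drift_int q v \<omega>\<bar> \<le> A0 q * (T - t) + A1 q * W_abs_int \<omega>"
proof -
  have \<omega>: "\<omega> \<in> space M" using g by (simp add: good_path_def)
  define f where "f s = exp (- r * (s - t)) * q_proc t q v s \<omega> * (\<mu> - r * S_proc W \<mu> \<sigma> t S s \<omega>)" for s
  have fi: "set_integrable lborel {t..T} f"
    unfolding f_def S_proc_def
    by (intro borel_integrable_atLeastAtMost' continuous_intros q_proc_continuous_on[OF v g] W_continuous_on[OF \<omega>])
  have gi: "set_integrable lborel {t..T} (\<lambda>s. A0 q + A1 q * \<bar>W s \<omega> - W t \<omega>\<bar>)"
    by (intro borel_integrable_atLeastAtMost' continuous_intros W_continuous_on[OF \<omega>])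
  have pt: "\<bar>f s\<bar> \<le> A0 q + A1 q * \<bar>W s \<omega> - W t \<omega>\<bar>" if s: "s \<in> {t..T}" for s
  proof -
    have abs3: "\<bar>a + b + c\<bar> \<le> \<bar>a\<bar> + \<bar>b\<bar> + \<bar>c\<bar>" for a b c :: real by linarith
    have m1: "\<bar>\<mu> * (s - t)\<bar> \<le> \<bar>\<mu>\<bar> * (T - t)" using s unfolding abs_mult by (intro mult_left_mono) auto
    have Sb: "\<bar>S_proc W \<mu> \<sigma> t S s \<omega>\<bar> \<le> \<bar>S\<bar> + \<bar>\<mu>\<bar> * (T - t) + \<sigma> * \<bar>W s \<omega> - W t \<omega>\<bar>"
    proof -
      have "\<bar>S_proc W \<mu> \<sigma> t S s \<omega>\<bar> \<le> \<bar>S\<bar> + \<bar>\<mu> * (s - t)\<bar> + \<bar>\<sigma> * (W s \<omega> - W t \<omega>)\<bar>"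
        unfolding S_proc_def by (rule abs3)
      also have "\<bar>\<sigma> * (W s \<omega> - W t \<omega>)\<bar> = \<sigma> * \<bar>W s \<omega> - W t \<omega>\<bar>" using sigma_pos by (simp add: abs_mult)
      finally show ?thesis using m1 by linarith
    qed
    have "\<bar>\<mu> - r * S_proc W \<mu> \<sigma> t S s \<omega>\<bar> \<le> \<bar>\<mu>\<bar> + \<bar>r\<bar> * \<bar>S_proc W \<mu> \<sigma> t S s \<omega>\<bar>"
      unfolding abs_mult[symmetric] by (rule abs_triangle_ineq4)
    also have "\<dots> \<le> \<bar>\<mu>\<bar> + \<bar>r\<bar> * (\<bar>S\<bar> + \<bar>\<mu>\<bar> * (T - t) + \<sigma> * \<bar>W s \<omega> - W t \<omega>\<bar>)"
      using Sb by (intro add_left_mono mult_left_mono) auto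
    finally have "\<bar>\<mu> - r * S_proc W \<mu> \<sigma> t S s \<omega>\<bar> \<le> \<bar>\<mu>\<bar> + \<bar>r\<bar> * (\<bar>S\<bar> + \<bar>\<mu>\<bar> * (T - t) + \<sigma> * \<bar>W s \<omega> - W t \<omega>\<bar>)" .
    moreover have "\<bar>exp (- r * (s - t)) * q_proc t q v s \<omega>\<bar> \<le> disc * q_bound q"
      unfolding abs_mult using exp_le_disc[OF s] q_proc_bound[OF v g s] disc_ge_1 by (intro mult_mono) auto
    ultimately have "\<bar>f s\<bar> \<le> (disc * q_bound q) * (\<bar>\<mu>\<bar> + \<bar>r\<bar> * (\<bar>S\<bar> + \<bar>\<mu>\<bar> * (T - t) + \<sigma> * \<bar>W s \<omega> - W t \<omega>\<bar>))"
      unfolding f_def abs_mult[of "exp (- r * (s - t)) * q_proc t q v s \<omega>"]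
      by (intro mult_mono) (auto simp: disc_ge_1)
    then show ?thesis by (simp add: A0_def A1_def algebra_simps)
  qed
  have "\<bar>drift_int q v \<omega>\<bar> = \<bar>\<integral>s. indicator {t..T} s * f s \<partial>lborel\<bar>"
    unfolding drift_int_def set_lebesgue_integral_def f_def by simp
  also have "\<dots> \<le> (\<integral>s. \<bar>indicator {t..T} s * f s\<bar> \<partial>lborel)" by (rule integral_abs_bound)
  also have "\<dots> \<le> (\<integral>s. indicator {t..T} s * (A0 q + A1 q * \<bar>W s \<omega> - W t \<omega>\<bar>) \<partial>lborel)"
  proof (rule integral_mono)
    show "integrable lborel (\<lambda>s. \<bar>indicator {t..T} s * f s\<bar>)"
      using fi unfolding set_integrable_def by (intro integrable_abs) simp
    show "integrable lborel (\<lambda>s. indicator {t..T} s * (A0 q + A1 q * \<bar>W s \<omega> - W t \<omega>\<bar>))"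
      using gi unfolding set_integrable_def by simp
    show "\<bar>indicator {t..T} s * f s\<bar> \<le> indicator {t..T} s * (A0 q + A1 q * \<bar>W s \<omega> - W t \<omega>\<bar>)" for s
      using pt[of s] by (auto simp: indicator_def)
  qed
  also have "\<dots> = (\<integral>s. A0 q * indicator {t..T} s + A1 q * (indicator {t..T} s * \<bar>W s \<omega> - W t \<omega>\<bar>) \<partial>lborel)"
    by (simp add: algebra_simps)
  also have "\<dots> = A0 q * (T - t) + A1 q * W_abs_int \<omega>"
  proof -
    have i1: "integrable lborel (\<lambda>s. A0 q * indicator {t..T} s)" by (intro integrable_mult_right integrable_real_indicator) (auto simp: t_in)
    have i2: "integrable lborel (\<lambda>s. A1 q * (indicator {t..T} s * \<bar>W s \<omega> - W t \<omega>\<bar>))"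
      using W_abs_integrable[OF \<omega>] unfolding set_integrable_def by (intro integrable_mult_right) simp
    show ?thesis using i1 i2 t_in unfolding W_abs_int_def set_lebesgue_integral_def by simp
  qed
  finally show ?thesis .
qed

lemma exec_cost_nonneg: "s \<in> {0..T} \<Longrightarrow> 0 \<le> exec_cost L (V s) x"
proof -
  assume s: "s \<in> {0..T}"
  have "0 \<le> V s" using V_nonneg s by blast
  moreover have "0 \<le> L (x / V s)" using L_nonneg by blast
  ultimately show ?thesis unfolding exec_cost_def by simp
qed

lemma exec_cost_le:
  assumes s: "s \<in> {0..T}" and x: "\<bar>x\<bar> \<le> rhom * V s"
  shows "exec_cost L (V s) x \<le> B0 * L rhom"
proof (cases "V s = 0")
  case True
  then show ?thesis using B0 L_nonneg by (simp add: exec_cost_def)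
next
  case False
  have V0': "0 \<le> V s" using V_nonneg s by blast
  then have Vp: "V s > 0" using False by simp
  have "\<bar>x / V s\<bar> = \<bar>x\<bar> / V s" using Vp by (simp add: abs_divide)
  also have "\<dots> \<le> rhom" using x Vp by (simp add: divide_le_eq)
  finally have "\<bar>x / V s\<bar> \<le> rhom" .
  then have "L \<bar>x / V s\<bar> \<le> L rhom" using L_mono rho_pos by (intro mono_onD[OF L_mono]) auto
  moreover have "L (x / V s) = L \<bar>x / V s\<bar>"
  proof (cases "x / V s \<ge> 0")
    case True then show ?thesis by (simp only: abs_of_nonneg[OF True])
  next
    case False then have "\<bar>x / V s\<bar> = - (x / V s)" by (simp only: abs_of_neg not_le)
    then show ?thesis using L_even by metis
  qed
  ultimately have "L (x / V s) \<le> L rhom" by simp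
  then have "V s * L (x / V s) \<le> V s * L rhom" using Vp by (intro mult_left_mono) auto
  also have "\<dots> \<le> B0 * L rhom" using V_bdd s L_nonneg by (intro mult_right_mono) auto
  finally show ?thesis using False by (simp add: exec_cost_def)
qed

lemma exec_cost_convex:
  assumes s: "s \<in> {0..T}" and a: "0 \<le> a" "a \<le> 1"
  shows "exec_cost L (V s) (a * x + (1 - a) * y) \<le> a * exec_cost L (V s) x + (1 - a) * exec_cost L (V s) y"
proof (cases "V s = 0")
  case True then show ?thesis by (simp add: exec_cost_def)
next
  case False
  have V0': "0 \<le> V s" using V_nonneg s by blast
  then have Vp: "V s > 0" using False by simp
  have dd: "(a * x + (1 - a) * y) / V s = (1 - (1 - a)) *\<^sub>R (x / V s) + (1 - a) *\<^sub>R (y / V s)"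
    by (simp add: add_divide_distrib)
  have "L ((a * x + (1 - a) * y) / V s) = L ((1 - (1 - a)) *\<^sub>R (x / V s) + (1 - a) *\<^sub>R (y / V s))"
    by (simp only: dd)
  also have "\<dots> \<le> (1 - (1 - a)) * L (x / V s) + (1 - a) * L (y / V s)"
    using a by (intro convex_onD[OF L_conv]) auto
  finally have "V s * L ((a * x + (1 - a) * y) / V s) \<le> V s * (a * L (x / V s) + (1 - a) * L (y / V s))"
    using Vp by (intro mult_left_mono) auto
  moreover have "a * exec_cost L (V s) x + (1 - a) * exec_cost L (V s) y = V s * (a * L (x / V s) + (1 - a) * L (y / V s))"
    using False by (simp add: exec_cost_def distrib_left mult.left_commute)
  moreover have "exec_cost L (V s) (a * x + (1 - a) * y) = V s * L ((a * x + (1 - a) * y) / V s)"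
    using False by (simp add: exec_cost_def)
  ultimately show ?thesis by simp
qed

definition cost_max where "cost_max = (T - t) * disc * (B0 * L rhom)"

lemma cost_integrand_props:
  assumes v: "v \<in> adm" and g: "good_path v \<omega>"
  shows "integrable lborel (\<lambda>s. indicator {t..T} s * (exp (- r * (s - t)) * exec_cost L (V s) (v s \<omega>)))"
    and "AE s in lborel. 0 \<le> indicator {t..T} s * (exp (- r * (s - t)) * exec_cost L (V s) (v s \<omega>))"
    and "AE s in lborel. indicator {t..T} s * (exp (- r * (s - t)) * exec_cost L (V s) (v s \<omega>)) \<le> indicator {t..T} s * (disc * (B0 * L rhom))"
proof -
  have \<omega>: "\<omega> \<in> space M" using g by (simp add: good_path_def)
  have eq: "indicator {t..T} s * (exp (- r * (s - t)) * exec_cost L (V s) (v s \<omega>))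
      = indicator {t..T} s * (exp (- r * (s - t)) * exec_cost L (V_ext s) (indicator {t..T} s * v s \<omega>))" for s
    using t_in by (auto simp: indicator_def V_ext_def)
  note [measurable] = admissible_path_measurable[OF v \<omega>]
  have m: "(\<lambda>s. indicator {t..T} s * (exp (- r * (s - t)) * exec_cost L (V s) (v s \<omega>))) \<in> borel_measurable lborel"
    unfolding eq by measurable
  show nn: "AE s in lborel. 0 \<le> indicator {t..T} s * (exp (- r * (s - t)) * exec_cost L (V s) (v s \<omega>))"
    using exec_cost_nonneg t_in by (intro AE_I2) (auto simp: indicator_def)
  show ub: "AE s in lborel. indicator {t..T} s * (exp (- r * (s - t)) * exec_cost L (V s) (v s \<omega>)) \<le> indicator {t..T} s * (disc * (B0 * L rhom))"
    using conjunct2[OF g[unfolded good_path_def]] AE_lborel_singleton[of t] AE_lborel_singleton[of T]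
  proof eventually_elim
    case (elim s)
    show ?case
    proof (cases "s \<in> {t..T}")
      case True
      then have s: "s \<in> {t<..<T}" using elim by auto
      have "exec_cost L (V s) (v s \<omega>) \<le> B0 * L rhom" using exec_cost_le[of s] elim s t_in by auto
      moreover have "0 \<le> exec_cost L (V s) (v s \<omega>)" using exec_cost_nonneg[of s] s t_in by auto
      ultimately have "exp (- r * (s - t)) * exec_cost L (V s) (v s \<omega>) \<le> disc * (B0 * L rhom)"
        using exp_le_disc[OF True] disc_ge_1 by (intro mult_mono) auto
      then show ?thesis using True by simp
    qed simp
  qed
  show "integrable lborel (\<lambda>s. indicator {t..T} s * (exp (- r * (s - t)) * exec_cost L (V s) (v s \<omega>)))"
  proof (rule Bochner_Integration.integrable_bound[OF _ m])
    show "integrable lborel (\<lambda>s. indicator {t..T} s * (disc * (B0 * L rhom)))"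
      by (intro integrable_mult_left integrable_real_indicator) (auto simp: t_in)
    show "AE s in lborel. norm (indicator {t..T} s * (exp (- r * (s - t)) * exec_cost L (V s) (v s \<omega>)))
        \<le> norm (indicator {t..T} s * (disc * (B0 * L rhom)))"
      using nn ub by eventually_elim auto
  qed
qed

lemma cost_int_bounds:
  assumes v: "v \<in> adm" and g: "good_path v \<omega>"
  shows "0 \<le> cost_int v \<omega>" "cost_int v \<omega> \<le> cost_max"
proof -
  have eq: "cost_int v \<omega> = (\<integral>s. indicator {t..T} s * (exp (- r * (s - t)) * exec_cost L (V s) (v s \<omega>)) \<partial>lborel)"
    unfolding cost_int_def set_lebesgue_integral_def by simp
  show "0 \<le> cost_int v \<omega>" unfolding eq by (rule integral_nonneg_AE[OF cost_integrand_props(2)[OF v g]])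
  have "cost_int v \<omega> \<le> (\<integral>s. indicator {t..T} s * (disc * (B0 * L rhom)) \<partial>lborel)"
    unfolding eq by (rule integral_mono_AE[OF cost_integrand_props(1)[OF v g] _ cost_integrand_props(3)[OF v g]])
       (intro integrable_mult_left integrable_real_indicator, auto simp: t_in)
  also have "\<dots> = cost_max" using t_in by (simp add: cost_max_def)
  finally show "cost_int v \<omega> \<le> cost_max" .
qed

lemma ell_abs_eq: "ell \<bar>x\<bar> = ell x" using l_even by (cases "x \<ge> 0") (auto simp: abs_if)

lemma ell_le_of_abs_le: "\<bar>x\<bar> \<le> y \<Longrightarrow> ell x \<le> ell y"
proof -
  assume a: "\<bar>x\<bar> \<le> y"
  have "ell \<bar>x\<bar> \<le> ell y" using a by (intro mono_onD[OF l_mono]) auto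
  then show ?thesis by (simp add: ell_abs_eq)
qed

lemma Pay_nonneg: "0 \<le> Pay x y"
  using Pi_def l_nonneg N_pos by (auto simp: max_def)

lemma Pay_le: "Pay x y \<le> N * \<bar>y - K\<bar> + ell (N + \<bar>x\<bar>)"
proof -
  have m: "N * max (y - K) 0 \<le> N * \<bar>y - K\<bar>" using N_pos by (intro mult_left_mono) auto
  have e1: "ell \<bar>N - x\<bar> \<le> ell (N + \<bar>x\<bar>)" using N_pos by (intro ell_le_of_abs_le) auto
  have e2: "ell \<bar>x\<bar> \<le> ell (N + \<bar>x\<bar>)" using N_pos by (intro ell_le_of_abs_le) auto
  from Pi_def show ?thesis
  proof
    assume P: "\<forall>q S. Pay q S = N * max (S - K) 0 + (if S \<ge> K then ell \<bar>N - q\<bar> else 0) + (if S < K then ell \<bar>q\<bar> else 0)"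
    show ?thesis unfolding P[rule_format] using m e1 e2 by auto
  next
    assume P: "\<forall>q S. Pay q S = N * max (S - K) 0 + ell \<bar>q\<bar>"
    show ?thesis unfolding P[rule_format] using m e2 by auto
  qed
qed

lemma ell_convex: "0 \<le> a \<Longrightarrow> a \<le> 1 \<Longrightarrow> ell (a * x + (1 - a) * y) \<le> a * ell x + (1 - a) * ell y"
  using convex_onD[OF l_convex, of "1 - a" x y] by (simp add: algebra_simps)

lemma Pay_convex_first:
  assumes a: "0 \<le> a" "a \<le> 1"
  shows "Pay (a * x + (1 - a) * y) z \<le> a * Pay x z + (1 - a) * Pay y z"
proof -
  have c1: "ell \<bar>N - (a * x + (1 - a) * y)\<bar> \<le> a * ell \<bar>N - x\<bar> + (1 - a) * ell \<bar>N - y\<bar>"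
  proof -
    have "N - (a * x + (1 - a) * y) = a * (N - x) + (1 - a) * (N - y)" by (simp add: algebra_simps)
    then show ?thesis using ell_convex[OF a, of "N - x" "N - y"] by (simp add: ell_abs_eq)
  qed
  have c2: "ell \<bar>a * x + (1 - a) * y\<bar> \<le> a * ell \<bar>x\<bar> + (1 - a) * ell \<bar>y\<bar>"
    using ell_convex[OF a, of x y] by (simp add: ell_abs_eq)
  from Pi_def show ?thesis
  proof
    assume P: "\<forall>q S. Pay q S = N * max (S - K) 0 + (if S \<ge> K then ell \<bar>N - q\<bar> else 0) + (if S < K then ell \<bar>q\<bar> else 0)"
    show ?thesis unfolding P[rule_format] using c1 c2 by (auto simp: algebra_simps)
  next
    assume P: "\<forall>q S. Pay q S = N * max (S - K) 0 + ell \<bar>q\<bar>"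
    show ?thesis unfolding P[rule_format] using c2 by (auto simp: algebra_simps)
  qed
qed

lemma SI_abs_mgf:
  assumes v: "v \<in> adm" and c: "0 \<le> c"
  shows "(\<integral>\<^sup>+\<omega>. ennreal (exp (c * \<bar>SI q v \<omega>\<bar>)) \<partial>M) \<le> ennreal (2 * exp (c\<^sup>2 * (integrand_bound q)\<^sup>2 * (T - t) / 2))"
proof -
  have "(\<integral>\<^sup>+\<omega>. ennreal (exp (c * \<bar>SI q v \<omega>\<bar>)) \<partial>M)
      \<le> (\<integral>\<^sup>+\<omega>. ennreal (exp (c * SI q v \<omega>)) + ennreal (exp ((- c) * SI q v \<omega>)) \<partial>M)"
    by (intro nn_integral_mono) (simp add: ennreal_plus[symmetric] del: ennreal_plus add: exp_mult_abs_le[of c])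
  also have "\<dots> = (\<integral>\<^sup>+\<omega>. ennreal (exp (c * SI q v \<omega>)) \<partial>M) + (\<integral>\<^sup>+\<omega>. ennreal (exp ((- c) * SI q v \<omega>)) \<partial>M)"
    using v by (intro nn_integral_add) auto
  also have "\<dots> \<le> ennreal (exp (c\<^sup>2 * (integrand_bound q)\<^sup>2 * (T - t) / 2)) + ennreal (exp ((- c)\<^sup>2 * (integrand_bound q)\<^sup>2 * (T - t) / 2))"
    by (intro add_mono SI_mgf v)
  also have "\<dots> = ennreal (2 * exp (c\<^sup>2 * (integrand_bound q)\<^sup>2 * (T - t) / 2))" by (simp add: ennreal_plus[symmetric] del: ennreal_plus)
  finally show ?thesis .
qed

lemma exp_W_abs_int_le_mean:
  assumes tT: "t < T" and \<omega>: "\<omega> \<in> space M"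
  shows "exp (c * W_abs_int \<omega>) \<le> (\<integral>s. indicator {t..T} s * exp (c * (T - t) * \<bar>W s \<omega> - W t \<omega>\<bar>) \<partial>lborel) / (T - t)"
proof -
  have fi: "integrable lborel (\<lambda>s. indicator {t..T} s * (c * (T - t) * \<bar>W s \<omega> - W t \<omega>\<bar>))"
    using borel_integrable_atLeastAtMost'[of t T "\<lambda>s. c * (T - t) * \<bar>W s \<omega> - W t \<omega>\<bar>"] W_continuous_on[OF \<omega>]
    by (simp add: set_integrable_def continuous_intros)
  have gi: "integrable lborel (\<lambda>s. indicator {t..T} s * exp (c * (T - t) * \<bar>W s \<omega> - W t \<omega>\<bar>))"
    using borel_integrable_atLeastAtMost'[of t T "\<lambda>s. exp (c * (T - t) * \<bar>W s \<omega> - W t \<omega>\<bar>)"] W_continuous_on[OF \<omega>]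
    by (simp add: set_integrable_def continuous_intros)
  have "(\<integral>s. indicator {t..T} s * (c * (T - t) * \<bar>W s \<omega> - W t \<omega>\<bar>) \<partial>lborel) = c * (T - t) * W_abs_int \<omega>"
    unfolding W_abs_int_def set_lebesgue_integral_def by (simp add: mult.left_commute)
  then have "exp (c * W_abs_int \<omega>) = exp ((\<integral>s. indicator {t..T} s * (c * (T - t) * \<bar>W s \<omega> - W t \<omega>\<bar>) \<partial>lborel) / (T - t))"
    using tT by simp
  also have "\<dots> \<le> (\<integral>s. indicator {t..T} s * exp (c * (T - t) * \<bar>W s \<omega> - W t \<omega>\<bar>) \<partial>lborel) / (T - t)"
    by (rule exp_interval_mean_le[OF tT fi gi])
  finally show ?thesis .
qed

lemma nn_integral_exp_abs_increment_interval:
  assumes c: "0 \<le> c"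
  shows "(\<integral>\<^sup>+\<omega>. \<integral>\<^sup>+s. ennreal (indicator {t..T} s * exp (c * \<bar>W_pair (\<omega>, s) - W t \<omega>\<bar>)) \<partial>lborel \<partial>M)
    \<le> ennreal (2 * exp (c\<^sup>2 * (T - t) / 2)) * ennreal (T - t)"
proof -
  define g where "g z = ennreal (indicator {t..T} (snd z) * exp (c * \<bar>W_pair z - W t (fst z)\<bar>))" for z
  have gm: "g \<in> borel_measurable (M \<Otimes>\<^sub>M lborel)" unfolding g_def by measurable
  interpret PS: pair_sigma_finite M lborel
    by (intro pair_sigma_finite.intro prob_space_imp_sigma_finite bm_prob lborel.sigma_finite_measure_axioms)
  have "(\<integral>\<^sup>+\<omega>. \<integral>\<^sup>+s. g (\<omega>, s) \<partial>lborel \<partial>M) = (\<integral>\<^sup>+s. \<integral>\<^sup>+\<omega>. g (\<omega>, s) \<partial>M \<partial>lborel)"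
    using gm by (simp add: lborel.nn_integral_fst PS.nn_integral_snd)
  also have "\<dots> \<le> (\<integral>\<^sup>+s. ennreal (2 * exp (c\<^sup>2 * (T - t) / 2)) * indicator {t..T} s \<partial>lborel)"
  proof (intro nn_integral_mono)
    fix s
    show "(\<integral>\<^sup>+\<omega>. g (\<omega>, s) \<partial>M) \<le> ennreal (2 * exp (c\<^sup>2 * (T - t) / 2)) * indicator {t..T} s"
    proof (cases "s \<in> {t..T}")
      case True
      have "(\<integral>\<^sup>+\<omega>. g (\<omega>, s) \<partial>M) = (\<integral>\<^sup>+\<omega>. ennreal (exp (c * \<bar>W s \<omega> - W t \<omega>\<bar>)) \<partial>M)"
        using True t_in by (intro nn_integral_cong) (auto simp: g_def W_pair_def max_def)
      also have "\<dots> \<le> ennreal (2 * exp (c\<^sup>2 * (s - t) / 2))"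
        using True t_in c by (intro abs_increment_mgf) auto
      also have "\<dots> \<le> ennreal (2 * exp (c\<^sup>2 * (T - t) / 2))"
        using True by (intro ennreal_leI) (auto intro!: mult_left_mono)
      finally show ?thesis using True by simp
    qed (simp add: g_def)
  qed
  also have "\<dots> = ennreal (2 * exp (c\<^sup>2 * (T - t) / 2)) * ennreal (T - t)"
    using t_in by (simp add: nn_integral_cmult_indicator)
  finally show ?thesis unfolding g_def by simp
qed

lemma W_abs_int_mgf:
  assumes c: "0 \<le> c"
  shows "(\<integral>\<^sup>+\<omega>. ennreal (exp (c * W_abs_int \<omega>)) \<partial>M) \<le> ennreal (2 * exp (c\<^sup>2 * (T - t) ^ 3 / 2))"
proof (cases "t < T")
  case False
  then have tT: "t = T" using t_in by simp
  have "W_abs_int \<omega> = 0" for \<omega>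
  proof -
    have "AE s in lborel. indicator {t..T} s * \<bar>W s \<omega> - W t \<omega>\<bar> = 0"
      using AE_lborel_singleton[of T] by eventually_elim (auto simp: tT indicator_def)
    then show ?thesis unfolding W_abs_int_def set_lebesgue_integral_def by (simp add: integral_eq_zero_AE)
  qed
  then show ?thesis using P.emeasure_space_1 tT by simp
next
  case True
  define l where "l = T - t"
  have l: "l > 0" using True by (simp add: l_def)
  define G where "G \<omega> = (\<integral>\<^sup>+s. ennreal (indicator {t..T} s * exp (c * l * \<bar>W_pair (\<omega>, s) - W t \<omega>\<bar>)) \<partial>lborel)" for \<omega>
  have pw: "ennreal (exp (c * W_abs_int \<omega>)) \<le> ennreal (1 / l) * G \<omega>" if \<omega>: "\<omega> \<in> space M" for \<omega>
  proof -
    have gi: "integrable lborel (\<lambda>s. indicator {t..T} s * exp (c * l * \<bar>W s \<omega> - W t \<omega>\<bar>))"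
      using borel_integrable_atLeastAtMost'[of t T "\<lambda>s. exp (c * l * \<bar>W s \<omega> - W t \<omega>\<bar>)"] W_continuous_on[OF \<omega>]
      by (simp add: set_integrable_def continuous_intros)
    have "G \<omega> = (\<integral>\<^sup>+s. ennreal (indicator {t..T} s * exp (c * l * \<bar>W s \<omega> - W t \<omega>\<bar>)) \<partial>lborel)"
      unfolding G_def using t_in
      by (intro nn_integral_cong) (auto simp: W_pair_def max_def indicator_def)
    also have "\<dots> = ennreal (\<integral>s. indicator {t..T} s * exp (c * l * \<bar>W s \<omega> - W t \<omega>\<bar>) \<partial>lborel)"
      by (rule nn_integral_eq_integral[OF gi]) auto
    finally show ?thesis
      using exp_W_abs_int_le_mean[OF True \<omega>, of c] l
      by (simp add: l_def ennreal_mult''[symmetric] ennreal_leI divide_inverse mult.commute)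
  qed
  have "(\<integral>\<^sup>+\<omega>. ennreal (exp (c * W_abs_int \<omega>)) \<partial>M) \<le> (\<integral>\<^sup>+\<omega>. ennreal (1 / l) * G \<omega> \<partial>M)"
    using pw by (intro nn_integral_mono) auto
  also have "\<dots> = ennreal (1 / l) * (\<integral>\<^sup>+\<omega>. G \<omega> \<partial>M)"
  proof (rule nn_integral_cmult)
    have "(\<lambda>z. ennreal (indicator {t..T} (snd z) * exp (c * l * \<bar>W_pair z - W t (fst z)\<bar>)))
        \<in> borel_measurable (M \<Otimes>\<^sub>M lborel)" by measurable
    from lborel.borel_measurable_nn_integral_fst[OF this] show "G \<in> borel_measurable M"
      unfolding G_def by simp
  qed
  also have "\<dots> \<le> ennreal (1 / l) * (ennreal (2 * exp ((c * l)\<^sup>2 * (T - t) / 2)) * ennreal l)"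
    unfolding G_def l_def using c t_in
    by (intro mult_left_mono nn_integral_exp_abs_increment_interval) auto
  also have "\<dots> = ennreal (2 * exp (c\<^sup>2 * (T - t) ^ 3 / 2))"
    using l by (simp add: ennreal_mult''[symmetric] field_simps l_def power2_eq_square power3_eq_cube)
  finally show ?thesis .
qed

section \<open>Exponential moments of the exponent\<close>

definition disc_r where "disc_r = exp (r * (T - t))"
definition K0 where "K0 q = \<gamma> * disc_r * (A0 q * (T - t) + cost_max) + \<gamma> * (N * \<bar>S - K + \<mu> * (T - t)\<bar> + ell (N + q_bound q))"
definition k1 where "k1 q = \<gamma> * disc_r * A1 q"
definition k2 where "k2 = \<gamma> * disc_r"
definition k3 where "k3 = \<gamma> * N * \<sigma>"

lemma disc_r_pos: "0 < disc_r" by (simp add: disc_r_def)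

lemma S_T_bound: "\<bar>S_T \<omega> - K\<bar> \<le> \<bar>S - K + \<mu> * (T - t)\<bar> + \<sigma> * \<bar>W T \<omega> - W t \<omega>\<bar>"
proof -
  have e: "S_T \<omega> - K = (S - K + \<mu> * (T - t)) + \<sigma> * (W T \<omega> - W t \<omega>)" by (simp add: S_T_def S_proc_def algebra_simps)
  have "\<bar>(S - K + \<mu> * (T - t)) + \<sigma> * (W T \<omega> - W t \<omega>)\<bar> \<le> \<bar>S - K + \<mu> * (T - t)\<bar> + \<bar>\<sigma> * (W T \<omega> - W t \<omega>)\<bar>"
    by (rule abs_triangle_ineq)
  then show ?thesis unfolding e using sigma_pos by (simp add: abs_mult)
qed

lemma Pay_T_bound:
  assumes v: "v \<in> adm" and g: "good_path v \<omega>"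
  shows "Pay (q_proc t q v T \<omega>) (S_T \<omega>) \<le> N * (\<bar>S - K + \<mu> * (T - t)\<bar> + \<sigma> * \<bar>W T \<omega> - W t \<omega>\<bar>) + ell (N + q_bound q)"
proof -
  have QT: "\<bar>q_proc t q v T \<omega>\<bar> \<le> q_bound q" using q_proc_bound[OF v g] t_in by auto
  have "Pay (q_proc t q v T \<omega>) (S_T \<omega>) \<le> N * \<bar>S_T \<omega> - K\<bar> + ell (N + \<bar>q_proc t q v T \<omega>\<bar>)" by (rule Pay_le)
  also have "\<dots> \<le> N * (\<bar>S - K + \<mu> * (T - t)\<bar> + \<sigma> * \<bar>W T \<omega> - W t \<omega>\<bar>) + ell (N + q_bound q)"
    using S_T_bound N_pos QT by (intro add_mono mult_left_mono ell_le_of_abs_le) auto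
  finally show ?thesis .
qed

lemma expo_upper:
  assumes v: "v \<in> adm" and g: "good_path v \<omega>"
  shows "expo q v \<omega> \<le> K0 q + k1 q * W_abs_int \<omega> + k2 * \<bar>SI q v \<omega>\<bar> + k3 * \<bar>W T \<omega> - W t \<omega>\<bar>"
proof -
  have "expo q v \<omega> \<le> \<gamma> * disc_r * (A0 q * (T - t) + A1 q * W_abs_int \<omega>) + \<gamma> * disc_r * \<bar>SI q v \<omega>\<bar> + \<gamma> * disc_r * cost_max
        + \<gamma> * (N * (\<bar>S - K + \<mu> * (T - t)\<bar> + \<sigma> * \<bar>W T \<omega> - W t \<omega>\<bar>) + ell (N + q_bound q))"
    unfolding expo_def disc_r_def
    by (rule exponent_upper[OF gamma_pos _ drift_int_bound[OF v g] cost_int_bounds(2)[OF v g] Pay_T_bound[OF v g]]) simp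
  also have "\<dots> = K0 q + k1 q * W_abs_int \<omega> + k2 * \<bar>SI q v \<omega>\<bar> + k3 * \<bar>W T \<omega> - W t \<omega>\<bar>"
    unfolding K0_def k1_def k2_def k3_def by (simp add: algebra_simps)
  finally show ?thesis .
qed

definition expo_dev where
  "expo_dev q v \<omega> = \<gamma> * disc_r * (A0 q * (T - t) + A1 q * W_abs_int \<omega>) + \<gamma> * disc_r * \<bar>SI q v \<omega>\<bar>"

lemma expo_lower:
  assumes v: "v \<in> adm" and g: "good_path v \<omega>"
  shows "- expo_dev q v \<omega> \<le> expo q v \<omega>"
  unfolding expo_def expo_dev_def disc_r_def
  by (rule exponent_lower[OF gamma_pos _ drift_int_bound[OF v g] cost_int_bounds(1)[OF v g] Pay_nonneg]) simp

lemma k_nonneg: "0 \<le> k1 q" "0 \<le> k2" "0 \<le> k3"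
  using A_nonneg disc_r_pos gamma_pos N_pos sigma_pos unfolding k1_def k2_def k3_def by auto

lemma abs_increment_tT_mgf: "0 \<le> c \<Longrightarrow> (\<integral>\<^sup>+\<omega>. ennreal (exp (c * \<bar>W T \<omega> - W t \<omega>\<bar>)) \<partial>M) \<le> ennreal (2 * exp (c\<^sup>2 * (T - t) / 2))"
  using abs_increment_mgf t_in by auto

lemma expo_exp_integrable:
  assumes v: "v \<in> adm"
  shows "integrable M (\<lambda>\<omega>. exp (expo q v \<omega>))"
proof (rule integrableI_nonneg)
  show "(\<lambda>\<omega>. exp (expo q v \<omega>)) \<in> borel_measurable M" using v by measurable
  show "AE \<omega> in M. 0 \<le> exp (expo q v \<omega>)" by simp
  define a where "a \<omega> = ennreal (exp (3 * k1 q * W_abs_int \<omega>))" for \<omega>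
  define b where "b \<omega> = ennreal (exp (3 * k2 * \<bar>SI q v \<omega>\<bar>))" for \<omega>
  define c where "c \<omega> = ennreal (exp (3 * k3 * \<bar>W T \<omega> - W t \<omega>\<bar>))" for \<omega>
  have am: "a \<in> borel_measurable M" "b \<in> borel_measurable M" "c \<in> borel_measurable M"
    unfolding a_def b_def c_def using v by measurable
  have "(\<integral>\<^sup>+\<omega>. ennreal (exp (expo q v \<omega>)) \<partial>M) \<le> (\<integral>\<^sup>+\<omega>. ennreal (exp (K0 q) / 3) * (a \<omega> + b \<omega> + c \<omega>) \<partial>M)"
  proof (rule nn_integral_mono_AE)
    show "AE \<omega> in M. ennreal (exp (expo q v \<omega>)) \<le> ennreal (exp (K0 q) / 3) * (a \<omega> + b \<omega> + c \<omega>)"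
      using admissible_AE_good_path[OF v]
    proof eventually_elim
      case (elim \<omega>)
      have "exp (expo q v \<omega>) \<le> exp (K0 q + (k1 q * W_abs_int \<omega> + k2 * \<bar>SI q v \<omega>\<bar> + k3 * \<bar>W T \<omega> - W t \<omega>\<bar>))"
        using expo_upper[OF v elim] by (simp add: add.assoc)
      also have "\<dots> = exp (K0 q) * exp (k1 q * W_abs_int \<omega> + k2 * \<bar>SI q v \<omega>\<bar> + k3 * \<bar>W T \<omega> - W t \<omega>\<bar>)"
        by (simp add: exp_add)
      also have "\<dots> \<le> exp (K0 q) * ((exp (3 * (k1 q * W_abs_int \<omega>)) + exp (3 * (k2 * \<bar>SI q v \<omega>\<bar>)) + exp (3 * (k3 * \<bar>W T \<omega> - W t \<omega>\<bar>))) / 3)"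
        by (intro mult_left_mono exp_add3_le) auto
      finally have "exp (expo q v \<omega>) \<le> exp (K0 q) / 3 * (exp (3 * k1 q * W_abs_int \<omega>) + exp (3 * k2 * \<bar>SI q v \<omega>\<bar>) + exp (3 * k3 * \<bar>W T \<omega> - W t \<omega>\<bar>))"
        by (simp add: mult.assoc)
      then show ?case unfolding a_def b_def c_def
        by (simp add: ennreal_mult''[symmetric] ennreal_plus[symmetric] del: ennreal_plus)
    qed
  qed
  also have "\<dots> = ennreal (exp (K0 q) / 3) * ((\<integral>\<^sup>+\<omega>. a \<omega> \<partial>M) + (\<integral>\<^sup>+\<omega>. b \<omega> \<partial>M) + (\<integral>\<^sup>+\<omega>. c \<omega> \<partial>M))"
    using am by (simp add: nn_integral_cmult nn_integral_add)
  also have "\<dots> < \<infinity>"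
  proof -
    have "(\<integral>\<^sup>+\<omega>. a \<omega> \<partial>M) < \<infinity>"
      using W_abs_int_mgf[of "3 * k1 q"] k_nonneg unfolding a_def by (auto simp: less_top[symmetric] top_unique intro: le_less_trans[OF _ ennreal_less_top])
    moreover have "(\<integral>\<^sup>+\<omega>. b \<omega> \<partial>M) < \<infinity>"
      using SI_abs_mgf[OF v, of "3 * k2" q] k_nonneg unfolding b_def by (auto intro: le_less_trans[OF _ ennreal_less_top])
    moreover have "(\<integral>\<^sup>+\<omega>. c \<omega> \<partial>M) < \<infinity>"
      using abs_increment_tT_mgf[of "3 * k3"] k_nonneg unfolding c_def by (auto intro: le_less_trans[OF _ ennreal_less_top])
    ultimately show ?thesis by (simp add: ennreal_mult_less_top)
  qed
  finally show "(\<integral>\<^sup>+\<omega>. ennreal (exp (expo q v \<omega>)) \<partial>M) < \<infinity>" .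
qed

definition Z_bound where "Z_bound q = \<gamma> * disc_r * (A0 q * (T - t) + A1 q * (2 * exp (1\<^sup>2 * (T - t) ^ 3 / 2))) + \<gamma> * disc_r * (2 * exp (1\<^sup>2 * (integrand_bound q)\<^sup>2 * (T - t) / 2))"

lemma expo_dev_measurable[measurable]: "v \<in> adm \<Longrightarrow> expo_dev q v \<in> borel_measurable M"
  unfolding expo_dev_def by measurable

lemma expo_dev_nonneg: "0 \<le> expo_dev q v \<omega>"
  unfolding expo_dev_def using A_nonneg W_abs_int_nonneg t_in gamma_pos disc_r_pos
  by (intro add_nonneg_nonneg mult_nonneg_nonneg) auto

lemma expo_dev_nn_integral_le:
  assumes v: "v \<in> adm"
  shows "(\<integral>\<^sup>+\<omega>. ennreal (expo_dev q v \<omega>) \<partial>M) \<le> ennreal (Z_bound q)"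
proof -
  have ge: "0 \<le> \<gamma> * disc_r" using gamma_pos disc_r_pos by simp
  have x_le_exp: "x \<le> exp x" for x :: real using exp_ge_add_one_self[of x] by linarith
  have "(\<integral>\<^sup>+\<omega>. ennreal (expo_dev q v \<omega>) \<partial>M) \<le> (\<integral>\<^sup>+\<omega>. ennreal (\<gamma> * disc_r * (A0 q * (T - t))) + ennreal (\<gamma> * disc_r * A1 q) * ennreal (exp (1 * W_abs_int \<omega>)) + ennreal (\<gamma> * disc_r) * ennreal (exp (1 * \<bar>SI q v \<omega>\<bar>)) \<partial>M)"
  proof (intro nn_integral_mono)
    fix \<omega>
    have "expo_dev q v \<omega> \<le> \<gamma> * disc_r * (A0 q * (T - t)) + (\<gamma> * disc_r * A1 q) * exp (1 * W_abs_int \<omega>) + (\<gamma> * disc_r) * exp (1 * \<bar>SI q v \<omega>\<bar>)"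
    proof -
      have w1: "A1 q * W_abs_int \<omega> \<le> A1 q * exp (1 * W_abs_int \<omega>)" using A_nonneg x_le_exp[of "W_abs_int \<omega>"] by (intro mult_left_mono) auto
      have w2: "\<gamma> * disc_r * (A1 q * W_abs_int \<omega>) \<le> \<gamma> * disc_r * (A1 q * exp (1 * W_abs_int \<omega>))" using w1 ge by (rule mult_left_mono)
      have w3: "\<gamma> * disc_r * \<bar>SI q v \<omega>\<bar> \<le> \<gamma> * disc_r * exp (1 * \<bar>SI q v \<omega>\<bar>)" using x_le_exp ge by (intro mult_left_mono) auto
      show ?thesis using w2 w3 unfolding expo_dev_def by (simp add: distrib_left mult.assoc)
    qed
    then show "ennreal (expo_dev q v \<omega>) \<le> ennreal (\<gamma> * disc_r * (A0 q * (T - t))) + ennreal (\<gamma> * disc_r * A1 q) * ennreal (exp (1 * W_abs_int \<omega>)) + ennreal (\<gamma> * disc_r) * ennreal (exp (1 * \<bar>SI q v \<omega>\<bar>))"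
      using ge A_nonneg t_in by (simp add: ennreal_mult''[symmetric] ennreal_plus[symmetric] del: ennreal_plus)
  qed
  also have "\<dots> = ennreal (\<gamma> * disc_r * (A0 q * (T - t))) + ennreal (\<gamma> * disc_r * A1 q) * (\<integral>\<^sup>+\<omega>. ennreal (exp (1 * W_abs_int \<omega>)) \<partial>M) + ennreal (\<gamma> * disc_r) * (\<integral>\<^sup>+\<omega>. ennreal (exp (1 * \<bar>SI q v \<omega>\<bar>)) \<partial>M)"
    using v P.emeasure_space_1 by (simp add: nn_integral_add nn_integral_cmult)
  also have "\<dots> \<le> ennreal (\<gamma> * disc_r * (A0 q * (T - t))) + ennreal (\<gamma> * disc_r * A1 q) * ennreal (2 * exp (1\<^sup>2 * (T - t) ^ 3 / 2)) + ennreal (\<gamma> * disc_r) * ennreal (2 * exp (1\<^sup>2 * (integrand_bound q)\<^sup>2 * (T - t) / 2))"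
    by (intro add_mono mult_left_mono W_abs_int_mgf SI_abs_mgf v order_refl) auto
  also have "\<dots> = ennreal (Z_bound q)"
  proof -
    define e1 where "e1 = 2 * exp (1\<^sup>2 * (T - t) ^ 3 / 2)"
    define e2 where "e2 = 2 * exp (1\<^sup>2 * (integrand_bound q)\<^sup>2 * (T - t) / 2)"
    have n1: "0 \<le> \<gamma> * disc_r * (A0 q * (T - t))" using ge A_nonneg t_in by simp
    have n2: "0 \<le> \<gamma> * disc_r * A1 q" using ge A_nonneg by simp
    have n4: "0 \<le> \<gamma> * disc_r * A1 q * e1" using n2 by (simp add: e1_def)
    have n5: "0 \<le> \<gamma> * disc_r * e2" using ge by (simp add: e2_def)
    have "ennreal (\<gamma> * disc_r * (A0 q * (T - t))) + ennreal (\<gamma> * disc_r * A1 q) * ennreal e1 + ennreal (\<gamma> * disc_r) * ennreal e2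
        = ennreal (\<gamma> * disc_r * (A0 q * (T - t))) + ennreal (\<gamma> * disc_r * A1 q * e1) + ennreal (\<gamma> * disc_r * e2)"
      using n2 ge by (simp add: ennreal_mult'[symmetric])
    also have "\<dots> = ennreal (\<gamma> * disc_r * (A0 q * (T - t)) + \<gamma> * disc_r * A1 q * e1 + \<gamma> * disc_r * e2)"
      using n1 n4 n5 by (simp add: ennreal_plus)
    also have "\<gamma> * disc_r * (A0 q * (T - t)) + \<gamma> * disc_r * A1 q * e1 + \<gamma> * disc_r * e2 = Z_bound q"
      unfolding Z_bound_def e1_def e2_def by (simp add: algebra_simps)
    finally show ?thesis unfolding e1_def e2_def .
  qed
  finally show ?thesis .
qed

lemma J_lower:
  assumes v: "v \<in> adm"
  shows "exp (- Z_bound q) \<le> (\<integral>\<omega>. exp (expo q v \<omega>) \<partial>M)"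
proof -
  have ge: "0 \<le> \<gamma> * disc_r" using gamma_pos disc_r_pos by simp
  note Zm = expo_dev_measurable[OF v, of q] and Z0 = expo_dev_nonneg[of q v]
    and nnb = expo_dev_nn_integral_le[OF v, of q]
  have Zi: "integrable M (expo_dev q v)"
    using Zm Z0 nnb by (intro integrableI_nonneg) (auto intro: le_less_trans[OF _ ennreal_less_top])
  have "ennreal (\<integral>\<omega>. expo_dev q v \<omega> \<partial>M) \<le> ennreal (Z_bound q)"
    using nnb nn_integral_eq_integral[OF Zi] Z0 by simp
  then have intZ: "(\<integral>\<omega>. expo_dev q v \<omega> \<partial>M) \<le> Z_bound q"
    using Z_bound_def ge A_nonneg t_in by (subst (asm) ennreal_le_iff) (auto simp: Z_bound_def intro!: add_nonneg_nonneg mult_nonneg_nonneg)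
  have "exp (- Z_bound q) \<le> exp (- (\<integral>\<omega>. expo_dev q v \<omega> \<partial>M))" using intZ by simp
  also have "\<dots> \<le> (\<integral>\<omega>. exp (- expo_dev q v \<omega>) \<partial>M)" by (rule P.jensen_exp_neg[OF Zi]) (simp add: Z0)
  also have "\<dots> \<le> (\<integral>\<omega>. exp (expo q v \<omega>) \<partial>M)"
  proof (rule integral_mono_AE)
    show "integrable M (\<lambda>\<omega>. exp (- expo_dev q v \<omega>))"
      by (rule Bochner_Integration.integrable_bound[of _ "\<lambda>_. 1::real"]) (use Zm Z0 in auto)
    show "integrable M (\<lambda>\<omega>. exp (expo q v \<omega>))" by (rule expo_exp_integrable[OF v])
    show "AE \<omega> in M. exp (- expo_dev q v \<omega>) \<le> exp (expo q v \<omega>)"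
      using admissible_AE_good_path[OF v] by eventually_elim (use expo_lower[OF v] in simp)
  qed
  finally show ?thesis .
qed

section \<open>Joint convexity and the main theorem\<close>

lemma drift_integrand_integrable:
  assumes v: "v \<in> adm" and g: "good_path v \<omega>"
  shows "set_integrable lborel {t..T} (\<lambda>s. exp (- r * (s - t)) * q_proc t q v s \<omega> * (\<mu> - r * S_proc W \<mu> \<sigma> t S s \<omega>))"
proof -
  have \<omega>: "\<omega> \<in> space M" using g by (simp add: good_path_def)
  show ?thesis unfolding S_proc_def
    by (intro borel_integrable_atLeastAtMost' continuous_intros q_proc_continuous_on[OF v g] W_continuous_on[OF \<omega>])
qed

lemma drift_int_mix:
  assumes v1: "v1 \<in> adm" and v2: "v2 \<in> adm" and g1: "good_path v1 \<omega>" and g2: "good_path v2 \<omega>"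
  shows "drift_int (a * q1 + (1 - a) * q2) (control_mix a v1 v2) \<omega> = a * drift_int q1 v1 \<omega> + (1 - a) * drift_int q2 v2 \<omega>"
proof -
  define f1 where "f1 s = exp (- r * (s - t)) * q_proc t q1 v1 s \<omega> * (\<mu> - r * S_proc W \<mu> \<sigma> t S s \<omega>)" for s
  define f2 where "f2 s = exp (- r * (s - t)) * q_proc t q2 v2 s \<omega> * (\<mu> - r * S_proc W \<mu> \<sigma> t S s \<omega>)" for s
  have i1: "set_integrable lborel {t..T} f1" unfolding f1_def by (rule drift_integrand_integrable[OF v1 g1])
  have i2: "set_integrable lborel {t..T} f2" unfolding f2_def by (rule drift_integrand_integrable[OF v2 g2])
  have "drift_int (a * q1 + (1 - a) * q2) (control_mix a v1 v2) \<omega> = (\<integral>s\<in>{t..T}. a * f1 s + (1 - a) * f2 s \<partial>lborel)"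
    unfolding drift_int_def
  proof (rule set_lebesgue_integral_cong)
    show "\<forall>s. s \<in> {t..T} \<longrightarrow> exp (- r * (s - t)) * q_proc t (a * q1 + (1 - a) * q2) (control_mix a v1 v2) s \<omega>
        * (\<mu> - r * S_proc W \<mu> \<sigma> t S s \<omega>) = a * f1 s + (1 - a) * f2 s"
    proof (intro allI impI)
      fix s assume "s \<in> {t..T}"
      then show "exp (- r * (s - t)) * q_proc t (a * q1 + (1 - a) * q2) (control_mix a v1 v2) s \<omega>
          * (\<mu> - r * S_proc W \<mu> \<sigma> t S s \<omega>) = a * f1 s + (1 - a) * f2 s"
        unfolding q_proc_mix[OF v1 v2 g1 g2 \<open>s \<in> {t..T}\<close>] f1_def f2_def by (simp add: algebra_simps)
    qed
  qed simp
  also have "\<dots> = (\<integral>s\<in>{t..T}. a * f1 s \<partial>lborel) + (\<integral>s\<in>{t..T}. (1 - a) * f2 s \<partial>lborel)"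
    using i1 i2 by (intro set_integral_add(2) set_integrable_mult_right) auto
  also have "\<dots> = a * drift_int q1 v1 \<omega> + (1 - a) * drift_int q2 v2 \<omega>"
    unfolding drift_int_def f1_def f2_def by (simp add: set_integral_mult_right)
  finally show ?thesis .
qed

lemma cost_int_mix:
  assumes v1: "v1 \<in> adm" and v2: "v2 \<in> adm" and a: "0 \<le> a" "a \<le> 1"
    and g1: "good_path v1 \<omega>" and g2: "good_path v2 \<omega>" and gm: "good_path (control_mix a v1 v2) \<omega>"
  shows "cost_int (control_mix a v1 v2) \<omega> \<le> a * cost_int v1 \<omega> + (1 - a) * cost_int v2 \<omega>"
proof -
  have vm: "control_mix a v1 v2 \<in> adm" by (rule admissible_mix[OF v1 v2 a])
  let ?c = "\<lambda>v s. indicator {t..T} s * (exp (- r * (s - t)) * exec_cost L (V s) (v s \<omega>))"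
  have eq: "cost_int v \<omega> = (\<integral>s. ?c v s \<partial>lborel)" for v
    unfolding cost_int_def set_lebesgue_integral_def by simp
  have "(\<integral>s. ?c (control_mix a v1 v2) s \<partial>lborel) \<le> (\<integral>s. a * ?c v1 s + (1 - a) * ?c v2 s \<partial>lborel)"
  proof (rule integral_mono)
    show "integrable lborel (?c (control_mix a v1 v2))" by (rule cost_integrand_props(1)[OF vm gm])
    show "integrable lborel (\<lambda>s. a * ?c v1 s + (1 - a) * ?c v2 s)"
      using cost_integrand_props(1)[OF v1 g1] cost_integrand_props(1)[OF v2 g2] by simp
    fix s
    show "?c (control_mix a v1 v2) s \<le> a * ?c v1 s + (1 - a) * ?c v2 s"
    proof (cases "s \<in> {t..T}")
      case True
      then have "exec_cost L (V s) (control_mix a v1 v2 s \<omega>)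
          \<le> a * exec_cost L (V s) (v1 s \<omega>) + (1 - a) * exec_cost L (V s) (v2 s \<omega>)"
        using t_in unfolding control_mix_def by (intro exec_cost_convex[OF _ a]) auto
      then have "exp (- r * (s - t)) * exec_cost L (V s) (control_mix a v1 v2 s \<omega>)
          \<le> exp (- r * (s - t)) * (a * exec_cost L (V s) (v1 s \<omega>) + (1 - a) * exec_cost L (V s) (v2 s \<omega>))"
        by (intro mult_left_mono) auto
      then show ?thesis using True by (simp add: algebra_simps)
    qed simp
  qed
  also have "\<dots> = a * (\<integral>s. ?c v1 s \<partial>lborel) + (1 - a) * (\<integral>s. ?c v2 s \<partial>lborel)"
    using cost_integrand_props(1)[OF v1 g1] cost_integrand_props(1)[OF v2 g2] by simp
  finally show ?thesis unfolding eq .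
qed

lemma expo_mix:
  assumes v1: "v1 \<in> adm" and v2: "v2 \<in> adm" and a: "0 \<le> a" "a \<le> 1"
  shows "AE \<omega> in M. expo (a * q1 + (1 - a) * q2) (control_mix a v1 v2) \<omega> \<le> a * expo q1 v1 \<omega> + (1 - a) * expo q2 v2 \<omega>"
  using admissible_AE_good_path[OF v1] admissible_AE_good_path[OF v2]
    admissible_AE_good_path[OF admissible_mix[OF v1 v2 a]] SI_mix[OF v1 v2 a, of q1 q2]
proof eventually_elim
  case (elim \<omega>)
  have "q_proc t (a * q1 + (1 - a) * q2) (control_mix a v1 v2) T \<omega>
      = a * q_proc t q1 v1 T \<omega> + (1 - a) * q_proc t q2 v2 T \<omega>"
    using t_in by (intro q_proc_mix[OF v1 v2 elim(1,2)]) auto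
  then have "Pay (q_proc t (a * q1 + (1 - a) * q2) (control_mix a v1 v2) T \<omega>) (S_T \<omega>)
      \<le> a * Pay (q_proc t q1 v1 T \<omega>) (S_T \<omega>) + (1 - a) * Pay (q_proc t q2 v2 T \<omega>) (S_T \<omega>)"
    using Pay_convex_first[OF a] by simp
  then show ?case
    unfolding expo_def drift_int_mix[OF v1 v2 elim(1,2)] elim(4)
    by (intro exponent_mix_le[OF gamma_pos _ cost_int_mix[OF v1 v2 a elim(1-3)]]) simp_all
qed

definition control_value where "control_value q v = exp (- r * (T - t)) / \<gamma> * ln (J_fun M W T \<mu> r \<sigma> \<gamma> V L Pay t q S v)"

lemma value_factor_pos: "0 < exp (- r * (T - t)) / \<gamma>" using gamma_pos by simp

lemma control_value_eq: "control_value q v = exp (- r * (T - t)) / \<gamma> * ln (\<integral>\<omega>. exp (expo q v \<omega>) \<partial>M)"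
  unfolding control_value_def J_fun_eq ..

lemma J_pos: "v \<in> adm \<Longrightarrow> 0 < (\<integral>\<omega>. exp (expo q v \<omega>) \<partial>M)"
  using J_lower[of v q] by (meson exp_gt_zero less_le_trans)

lemma control_value_lower: "v \<in> adm \<Longrightarrow> exp (- r * (T - t)) / \<gamma> * (- Z_bound q) \<le> control_value q v"
proof -
  assume v: "v \<in> adm"
  have "- Z_bound q \<le> ln (\<integral>\<omega>. exp (expo q v \<omega>) \<partial>M)"
    using J_lower[OF v, of q] J_pos[OF v, of q] by (metis exp_gt_zero ln_exp ln_le_cancel_iff)
  then show ?thesis unfolding control_value_eq using value_factor_pos by (intro mult_left_mono) auto
qed

lemma control_value_mix:
  assumes v1: "v1 \<in> adm" and v2: "v2 \<in> adm" and a: "0 \<le> a" "a \<le> 1"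
  shows "control_value (a * q1 + (1 - a) * q2) (control_mix a v1 v2) \<le> a * control_value q1 v1 + (1 - a) * control_value q2 v2"
proof -
  have vm: "control_mix a v1 v2 \<in> adm" by (rule admissible_mix[OF v1 v2 a])
  have hb: "(\<integral>\<omega>. exp (expo (a * q1 + (1 - a) * q2) (control_mix a v1 v2) \<omega>) \<partial>M)
      \<le> exp (a * ln (\<integral>\<omega>. exp (expo q1 v1 \<omega>) \<partial>M) + (1 - a) * ln (\<integral>\<omega>. exp (expo q2 v2 \<omega>) \<partial>M))"
    by (rule integral_exp_convex_comb(2)[OF expo_measurable[OF v1] expo_measurable[OF v2] expo_measurable[OF vm] expo_exp_integrable[OF v1] expo_exp_integrable[OF v2]
          J_pos[OF v1] J_pos[OF v2] expo_mix[OF v1 v2 a] a])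
  have "ln (\<integral>\<omega>. exp (expo (a * q1 + (1 - a) * q2) (control_mix a v1 v2) \<omega>) \<partial>M)
      \<le> a * ln (\<integral>\<omega>. exp (expo q1 v1 \<omega>) \<partial>M) + (1 - a) * ln (\<integral>\<omega>. exp (expo q2 v2 \<omega>) \<partial>M)"
    using hb J_pos[OF vm] by (metis exp_gt_zero ln_exp ln_le_cancel_iff)
  then have "exp (- r * (T - t)) / \<gamma> * ln (\<integral>\<omega>. exp (expo (a * q1 + (1 - a) * q2) (control_mix a v1 v2) \<omega>) \<partial>M)
      \<le> exp (- r * (T - t)) / \<gamma> * (a * ln (\<integral>\<omega>. exp (expo q1 v1 \<omega>) \<partial>M) + (1 - a) * ln (\<integral>\<omega>. exp (expo q2 v2 \<omega>) \<partial>M))"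
    using value_factor_pos by (intro mult_left_mono) auto
  also have "k * (a * A + (1 - a) * B) = a * (k * A) + (1 - a) * (k * B)" for k A B :: real
    by (simp add: algebra_simps)
  finally show ?thesis unfolding control_value_eq .
qed

lemma theta_convex: "convex_on UNIV (\<lambda>q. theta M F W T \<mu> r \<sigma> \<gamma> rhom V L Pay t q S)"
  unfolding theta_def control_value_def[symmetric]
proof (rule convex_on_Inf_image)
  show "adm \<noteq> {}" using admissible_zero by blast
  show "bdd_below (control_value q ` adm)" for q
    using control_value_lower by (auto intro!: bdd_belowI)
  show "\<exists>u\<in>adm. control_value (a * x + (1 - a) * y) u \<le> a * control_value x v + (1 - a) * control_value y w"
    if "0 < a" "a < 1" "v \<in> adm" "w \<in> adm" for a x y v w
    using that by (intro bexI[of _ "control_mix a v w"] control_value_mix admissible_mix) auto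
qed

end

theorem proposition2:
  fixes M :: "'a measure" and F :: "real \<Rightarrow> 'a measure" and W :: "real \<Rightarrow> 'a \<Rightarrow> real"
    and T \<mu> r \<sigma> \<gamma> rhom N K :: real
    and V :: "real \<Rightarrow> real" and L ell :: "real \<Rightarrow> real" and Pay :: "real \<Rightarrow> real \<Rightarrow> real"
    and t S :: real
  assumes BM: "brownian_motion M F W"
    and T_pos: "T > 0" and sigma_pos: "\<sigma> > 0" and gamma_pos: "\<gamma> > 0"
    and rho_pos: "rhom > 0" and N_pos: "N > 0"
    and V_meas: "V \<in> borel_measurable (restrict_space borel {0..T})"
    and V_nonneg: "\<forall>s\<in>{0..T}. 0 \<le> V s"
    and V_bdd: "\<exists>B. \<forall>s\<in>{0..T}. V s \<le> B"
    and L_nonneg: "\<forall>x. 0 \<le> L x"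
    and L_cont: "continuous_on UNIV L"
    and L_even: "\<forall>x. L (- x) = L x"
    and L_strict_convex: "strictly_convex_on UNIV L"
    and L_mono: "mono_on {0..} L"
    and L_zero: "L 0 = 0"
    and L_superlinear: "filterlim (\<lambda>rho. L rho / rho) at_top at_top"
    and l_nonneg: "\<forall>x. 0 \<le> ell x"
    and l_convex: "convex_on UNIV ell"
    and l_even: "\<forall>x. ell (- x) = ell x"
    and l_mono: "mono_on {0..} ell"
    and Pi_def:
      "(\<forall>q S. Pay q S = N * max (S - K) 0 + (if S \<ge> K then ell \<bar>N - q\<bar> else 0)
                                        + (if S < K then ell \<bar>q\<bar> else 0))
       \<or> (\<forall>q S. Pay q S = N * max (S - K) 0 + ell \<bar>q\<bar>)"
    and t_in: "t \<in> {0..T}"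
  shows "convex_on UNIV (\<lambda>q. theta M F W T \<mu> r \<sigma> \<gamma> rhom V L Pay t q S)"
proof -
  (* Strict convexity of L enters only as convexity. *)
  obtain B where B: "\<forall>s\<in>{0..T}. V s \<le> B" using V_bdd by blast
  interpret hedging_problem M F W T \<mu> r \<sigma> \<gamma> rhom N K V L ell Pay t S "max B 0"
  proof unfold_locales
    show "brownian_motion M F W" by (rule BM)
    show "0 \<le> t" "t \<le> T" using t_in by auto
    show "\<forall>s\<in>{0..T}. V s \<le> max B 0" using B by (auto simp: le_max_iff_disj)
    show "0 \<le> max B 0" by simp
    show "convex_on UNIV L" by (rule strictly_convex_on_imp_convex_on[OF L_strict_convex]) simp
  qed (use sigma_pos gamma_pos rho_pos N_pos V_meas V_nonneg L_nonneg L_cont L_even L_mono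
         l_nonneg l_convex l_even l_mono Pi_def in auto)
  show ?thesis by (rule theta_convex)
qed

end
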